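(* Consider the single-camp, two-phase problem with bias-dependent camp weights described in the context: maximize $\sum_i v_i^{(2)}$ over nonnegative vectors $\mathbf{x^{(1)}},\mathbf{x^{(2)}}\in\mathbb{R}^n$ with $\sum_i x_i^{(1)}+\sum_i x_i^{(2)}\le k_g$. There is an algorithm running in time polynomial in $n$ that computes an optimal solution, i.e., an optimal split of the budget between the two phases together with optimal investments on the nodes in each phase.
   Context: A social network has node set $N=\{1,\dots,n\}$ and a real $n\times n$ matrix $\mathbf{w}=(w_{ij})$ with $\sum_j|w_{ij}|<1$ for every $i$; write $\Delta=(\mathbf{I}-\mathbf{w})^{-1}$. Each node $i$ has an initial opinion $v_i^0$, a bias weight $w_{ii}^0$, and a total camp weight $\theta_i$. There is a single (good) camp with budget $k_g\ge 0$ choosing investments $\mathbf{x^{(1)}},\mathbf{x^{(2)}}\ge 0$ in phases 1 and 2. Opinions evolve by $\mathbf{v^{(0)}}=\mathbf{v^0}$ and for $p=1,2$: $\mathbf{v^{(p)}}=\Delta(\mathbf{w^0}\circ\mathbf{v^{(p-1)}}+\mathbf{w_g^{(p)}}\circ\mathbf{x^{(p)}})$, where $\circ$ is the entrywise product, $\mathbf{w^0}=(w_{ii}^0)_i$, and $w_{ig}^{(p)}=\theta_i\frac{1+w_{ii}^0 v_i^{(p-1)}}{2}$. The input data are $\mathbf{w},\mathbf{w^0},\mathbf{v^0},(\theta_i)_i,k_g$, and running time is measured in arithmetic operations. *)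

theory Defs
  imports Complex_Main
begin

definition matinv :: "nat \<Rightarrow> (nat \<Rightarrow> nat \<Rightarrow> real) \<Rightarrow> (nat \<Rightarrow> nat \<Rightarrow> real)" where
  "matinv n A = (THE B. (\<forall>i j. (n \<le> i \<or> n \<le> j) \<longrightarrow> B i j = 0)
      \<and> (\<forall>i<n. \<forall>j<n. (\<Sum>k<n. A i k * B k j) = (if i = j then 1 else 0))
      \<and> (\<forall>i<n. \<forall>j<n. (\<Sum>k<n. B i k * A k j) = (if i = j then 1 else 0)))"

definition Delta :: "nat \<Rightarrow> (nat \<Rightarrow> nat \<Rightarrow> real) \<Rightarrow> (nat \<Rightarrow> nat \<Rightarrow> real)" where
  "Delta n w = matinv n (\<lambda>i j. (if i = j then 1 else 0) - w i j)"

definition camp_weight :: "(nat \<Rightarrow> real) \<Rightarrow> (nat \<Rightarrow> real) \<Rightarrow> (nat \<Rightarrow> real) \<Rightarrow> nat \<Rightarrow> real" where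
  "camp_weight w0 theta v i = theta i * (1 + w0 i * v i) / 2"

definition phase :: "nat \<Rightarrow> (nat \<Rightarrow> nat \<Rightarrow> real) \<Rightarrow> (nat \<Rightarrow> real) \<Rightarrow> (nat \<Rightarrow> real)
    \<Rightarrow> (nat \<Rightarrow> real) \<Rightarrow> (nat \<Rightarrow> real) \<Rightarrow> (nat \<Rightarrow> real)" where
  "phase n w w0 theta v x = (\<lambda>i. \<Sum>j<n. Delta n w i j * (w0 j * v j + camp_weight w0 theta v j * x j))"

definition opinions2 :: "nat \<Rightarrow> (nat \<Rightarrow> nat \<Rightarrow> real) \<Rightarrow> (nat \<Rightarrow> real) \<Rightarrow> (nat \<Rightarrow> real)
    \<Rightarrow> (nat \<Rightarrow> real) \<Rightarrow> (nat \<Rightarrow> real) \<Rightarrow> (nat \<Rightarrow> real) \<Rightarrow> (nat \<Rightarrow> real)" where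
  "opinions2 n w w0 v0 theta x1 x2 = phase n w w0 theta (phase n w w0 theta v0 x1) x2"

definition objective :: "nat \<Rightarrow> (nat \<Rightarrow> nat \<Rightarrow> real) \<Rightarrow> (nat \<Rightarrow> real) \<Rightarrow> (nat \<Rightarrow> real)
    \<Rightarrow> (nat \<Rightarrow> real) \<Rightarrow> (nat \<Rightarrow> real) \<Rightarrow> (nat \<Rightarrow> real) \<Rightarrow> real" where
  "objective n w w0 v0 theta x1 x2 = (\<Sum>i<n. opinions2 n w w0 v0 theta x1 x2 i)"

definition feasible :: "nat \<Rightarrow> real \<Rightarrow> (nat \<Rightarrow> real) \<Rightarrow> (nat \<Rightarrow> real) \<Rightarrow> bool" where
  "feasible n k x1 x2 \<longleftrightarrow> (\<forall>i<n. 0 \<le> x1 i \<and> 0 \<le> x2 i)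
      \<and> (\<Sum>i<n. x1 i) + (\<Sum>i<n. x2 i) \<le> k"

definition optimal :: "nat \<Rightarrow> (nat \<Rightarrow> nat \<Rightarrow> real) \<Rightarrow> (nat \<Rightarrow> real) \<Rightarrow> (nat \<Rightarrow> real)
    \<Rightarrow> (nat \<Rightarrow> real) \<Rightarrow> real \<Rightarrow> (nat \<Rightarrow> real) \<Rightarrow> (nat \<Rightarrow> real) \<Rightarrow> bool" where
  "optimal n w w0 v0 theta k x1 x2 \<longleftrightarrow> feasible n k x1 x2 \<and>
     (\<forall>y1 y2. feasible n k y1 y2 \<longrightarrow>
        objective n w w0 v0 theta y1 y2 \<le> objective n w w0 v0 theta x1 x2)"

text \<open>Memory cells hold reals. Integer constants, the four field operations
  (division by zero is an error), comparison-based jumps, and indirect addressing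
  (only through cells holding natural numbers).\<close>
datatype instr =
    Const nat int
  | Add nat nat nat
  | Sub nat nat nat
  | Mul nat nat nat
  | Div nat nat nat
  | Load nat nat      (* m[i] := m[m[j]] *)
  | Store nat nat     (* m[m[j]] := m[i] *)
  | JmpLess nat nat nat  (* if m[j] < m[k] goto t *)
  | Jmp nat
  | Halt

type_synonym config = "nat \<times> (nat \<Rightarrow> real)"

definition step :: "instr list \<Rightarrow> config \<Rightarrow> config option" where
  "step P c = (case c of (pc, m) \<Rightarrow>
     if pc < length P then
       (case P ! pc of
          Const i z \<Rightarrow> Some (Suc pc, m(i := of_int z))
        | Add i j k \<Rightarrow> Some (Suc pc, m(i := m j + m k))
        | Sub i j k \<Rightarrow> Some (Suc pc, m(i := m j - m k))
        | Mul i j k \<Rightarrow> Some (Suc pc, m(i := m j * m k))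
        | Div i j k \<Rightarrow> (if m k = 0 then None else Some (Suc pc, m(i := m j / m k)))
        | Load i j \<Rightarrow> (if m j \<in> \<nat> then Some (Suc pc, m(i := m (nat \<lfloor>m j\<rfloor>))) else None)
        | Store i j \<Rightarrow> (if m j \<in> \<nat> then Some (Suc pc, m(nat \<lfloor>m j\<rfloor> := m i)) else None)
        | JmpLess j k t \<Rightarrow> Some (if m j < m k then t else Suc pc, m)
        | Jmp t \<Rightarrow> Some (t, m)
        | Halt \<Rightarrow> Some (pc, m))
     else None)"

fun exec :: "instr list \<Rightarrow> nat \<Rightarrow> config \<Rightarrow> config option" where
  "exec P 0 c = Some c"
| "exec P (Suc t) c = (case step P c of None \<Rightarrow> None | Some c' \<Rightarrow> exec P t c')"

definition halts_within :: "instr list \<Rightarrow> (nat \<Rightarrow> real) \<Rightarrow> nat \<Rightarrow> (nat \<Rightarrow> real) \<Rightarrow> bool" where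
  "halts_within P m0 T m \<longleftrightarrow> (\<exists>s\<le>T. \<exists>pc. exec P s (0, m0) = Some (pc, m)
       \<and> pc < length P \<and> P ! pc = Halt)"

definition init_mem :: "nat \<Rightarrow> real \<Rightarrow> (nat \<Rightarrow> nat \<Rightarrow> real) \<Rightarrow> (nat \<Rightarrow> real) \<Rightarrow> (nat \<Rightarrow> real)
    \<Rightarrow> (nat \<Rightarrow> real) \<Rightarrow> (nat \<Rightarrow> real)" where
  "init_mem n k w w0 v0 theta = (\<lambda>a.
     if a = 0 then real n
     else if a = 1 then k
     else if a < 2 + n then v0 (a - 2)
     else if a < 2 + 2*n then w0 (a - (2 + n))
     else if a < 2 + 3*n then theta (a - (2 + 2*n))
     else if a < 2 + 3*n + n*n then w ((a - (2 + 3*n)) div n) ((a - (2 + 3*n)) mod n)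
     else 0)"

definition out1 :: "nat \<Rightarrow> nat \<Rightarrow> nat" where "out1 n i = 2 + 3*n + n*n + i"
definition out2 :: "nat \<Rightarrow> nat \<Rightarrow> nat" where "out2 n i = 2 + 4*n + n*n + i"

end

theory Submission
  imports Defs "Jordan_Normal_Form.Determinant"
begin

text \<open>
  The opinions after phase 1 are affine in \<open>x\<^sup>(\<^sup>1\<^sup>)\<close>, and those after phase 2 are affine in
  \<open>x\<^sup>(\<^sup>2\<^sup>)\<close> with camp weights affine in the phase-1 opinions, so the objective is a bilinear
  function \<open>c\<^sub>0 + \<alpha> \<cdot> x\<^sup>(\<^sup>1\<^sup>) + \<beta> \<cdot> x\<^sup>(\<^sup>2\<^sup>) + x\<^sup>(\<^sup>1\<^sup>)\<^sup>T \<Gamma> x\<^sup>(\<^sup>2\<^sup>)\<close>. Being linear in each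
  investment vector separately, it does not decrease when each phase's budget is moved to a single
  best node, so it suffices to consider pairs of nodes \<open>(a, b)\<close> and budgets \<open>t, r \<ge> 0\<close> with
  \<open>t + r \<le> k\<^sub>g\<close>. On that triangle \<open>\<alpha>\<^sub>a t + \<beta>\<^sub>b r + \<Gamma>\<^sub>a\<^sub>b t r\<close> attains its maximum at a corner or at
  the vertex of the parabola it describes on the edge \<open>t + r = k\<^sub>g\<close>. The algorithm computes
  \<open>\<Delta> = (I - w)\<^sup>-\<^sup>1\<close> by Gauss--Jordan elimination, which needs no pivoting because \<open>I - w\<close> is
  strictly diagonally dominant, then the coefficients, and finally compares the \<open>O(n\<^sup>2)\<close>
  candidates; all of this takes \<open>O(n\<^sup>3)\<close> arithmetic operations.
\<close>

section \<open>Gauss--Jordan elimination computes \<open>Delta\<close>\<close>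

abbreviation abs_row_sums_lt_one :: "nat \<Rightarrow> (nat \<Rightarrow> nat \<Rightarrow> real) \<Rightarrow> bool" where
  "abs_row_sums_lt_one n w \<equiv> \<forall>i<n. (\<Sum>j<n. \<bar>w i j\<bar>) < 1"

lemma left_inverse_imp_right_inverse:
  fixes A B :: "nat \<Rightarrow> nat \<Rightarrow> real"
  assumes BA: "\<forall>i<n. \<forall>j<n. (\<Sum>k<n. B i k * A k j) = (if i = j then 1 else 0)"
  shows "\<forall>i<n. \<forall>j<n. (\<Sum>k<n. A i k * B k j) = (if i = j then 1 else 0)"
proof -
  let ?A = "mat n n (\<lambda>(i,j). A i j)" and ?B = "mat n n (\<lambda>(i,j). B i j)"
  have entry: "\<And>X Y i j. i < n \<Longrightarrow> j < n \<Longrightarrow>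
      (mat n n (\<lambda>(i,j). X i j) * mat n n (\<lambda>(i,j). Y i j)) $$ (i,j) = (\<Sum>k<n. X i k * Y k j)"
    by (simp add: scalar_prod_def lessThan_atLeast0)
  have "?B * ?A = 1\<^sub>m n"
  proof (rule eq_matI)
    fix i j assume "i < dim_row (1\<^sub>m n :: real mat)" "j < dim_col (1\<^sub>m n :: real mat)"
    then show "(?B * ?A) $$ (i, j) = 1\<^sub>m n $$ (i, j)" using BA by (simp del: index_mult_mat add: entry)
  qed auto
  then have AB: "?A * ?B = 1\<^sub>m n"
    by (rule mat_mult_left_right_inverse[of ?B n ?A, rotated 2]) simp_all
  show ?thesis
  proof (intro allI impI)
    fix i j assume ij: "i < n" "j < n"
    have "(\<Sum>k<n. A i k * B k j) = (?A * ?B) $$ (i,j)" by (rule entry[OF ij, symmetric])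
    then show "(\<Sum>k<n. A i k * B k j) = (if i = j then 1 else 0)" using AB ij by simp
  qed
qed

lemma matinv_eqI:
  fixes A B :: "nat \<Rightarrow> nat \<Rightarrow> real"
  assumes Z: "\<forall>i j. (n \<le> i \<or> n \<le> j) \<longrightarrow> B i j = 0"
    and BA: "\<forall>i<n. \<forall>j<n. (\<Sum>k<n. B i k * A k j) = (if i = j then 1 else 0)"
  shows "matinv n A = B"
  unfolding matinv_def
proof (rule the_equality)
  show "(\<forall>i j. (n \<le> i \<or> n \<le> j) \<longrightarrow> B i j = 0) \<and>
      (\<forall>i<n. \<forall>j<n. (\<Sum>k<n. A i k * B k j) = (if i = j then 1 else 0)) \<and>
      (\<forall>i<n. \<forall>j<n. (\<Sum>k<n. B i k * A k j) = (if i = j then 1 else 0))"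
    using Z left_inverse_imp_right_inverse[OF BA] BA by blast
next
  have AB: "\<forall>i<n. \<forall>j<n. (\<Sum>k<n. A i k * B k j) = (if i = j then 1 else 0)"
    using left_inverse_imp_right_inverse[OF BA] .
  fix C assume C: "(\<forall>i j. (n \<le> i \<or> n \<le> j) \<longrightarrow> C i j = 0) \<and>
      (\<forall>i<n. \<forall>j<n. (\<Sum>k<n. A i k * C k j) = (if i = j then 1 else 0)) \<and>
      (\<forall>i<n. \<forall>j<n. (\<Sum>k<n. C i k * A k j) = (if i = j then 1 else 0))"
  show "C = B"
  proof (intro ext)
    fix i j
    show "C i j = B i j"
    proof (cases "i < n \<and> j < n")
      case False then show ?thesis using C Z by auto
    next
      case True
      have "C i j = (\<Sum>k<n. C i k * (if k = j then 1 else 0))"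
        using True by (simp add: if_distrib sum.delta' cong: if_cong)
      also have "\<dots> = (\<Sum>k<n. C i k * (\<Sum>l<n. A k l * B l j))"
        using AB True by (intro sum.cong) auto
      also have "\<dots> = (\<Sum>l<n. (\<Sum>k<n. C i k * A k l) * B l j)"
        by (simp add: sum_distrib_left sum_distrib_right mult.assoc) (rule sum.swap)
      also have "\<dots> = (\<Sum>l<n. (if i = l then B l j else 0))"
        using C True by (intro sum.cong) auto
      also have "\<dots> = B i j" using True by (simp add: sum.delta)
      finally show ?thesis .
    qed
  qed
qed

definition id_minus :: "(nat \<Rightarrow> nat \<Rightarrow> real) \<Rightarrow> nat \<Rightarrow> nat \<Rightarrow> real" where
  "id_minus w i j = (if i = j then 1 else 0) - w i j"

definition augmented :: "nat \<Rightarrow> (nat \<Rightarrow> nat \<Rightarrow> real) \<Rightarrow> nat \<Rightarrow> nat \<Rightarrow> real" where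
  "augmented n w i c = (if c < n then id_minus w i c else if c - n = i then 1 else 0)"

definition pivot_step :: "nat \<Rightarrow> (nat \<Rightarrow> nat \<Rightarrow> real) \<Rightarrow> nat \<Rightarrow> nat \<Rightarrow> real" where
  "pivot_step j G i c = (if i = j then G j c / G j j else G i c - G i j * (G j c / G j j))"

primrec gauss_jordan :: "nat \<Rightarrow> (nat \<Rightarrow> nat \<Rightarrow> real) \<Rightarrow> nat \<Rightarrow> nat \<Rightarrow> nat \<Rightarrow> real" where
  "gauss_jordan n w 0 = augmented n w"
| "gauss_jordan n w (Suc j) = pivot_step j (gauss_jordan n w j)"

text \<open>Row operations keep the left block equal to the right block times \<open>A\<close>; once the left
  block is \<open>I\<close>, the right block is \<open>A\<^sup>-\<^sup>1\<close>.\<close>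

definition left_eq_right_times :: "nat \<Rightarrow> (nat \<Rightarrow> nat \<Rightarrow> real) \<Rightarrow> (nat \<Rightarrow> nat \<Rightarrow> real) \<Rightarrow> bool" where
  "left_eq_right_times n A G \<longleftrightarrow> (\<forall>i<n. \<forall>c<n. G i c = (\<Sum>l<n. G i (n+l) * A l c))"

definition unit_columns :: "nat \<Rightarrow> nat \<Rightarrow> (nat \<Rightarrow> nat \<Rightarrow> real) \<Rightarrow> bool" where
  "unit_columns n j G \<longleftrightarrow> (\<forall>i<n. \<forall>c<j. G i c = (if i = c then 1 else 0))"

definition diag_dominant_from :: "nat \<Rightarrow> nat \<Rightarrow> (nat \<Rightarrow> nat \<Rightarrow> real) \<Rightarrow> bool" where
  "diag_dominant_from n j G \<longleftrightarrow> (\<forall>i. j \<le> i \<longrightarrow> i < n \<longrightarrow> (\<Sum>c\<in>{j..<n}-{i}. \<bar>G i c\<bar>) < \<bar>G i i\<bar>)"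

lemma pivot_step_left_eq_right_times:
  assumes "j < n" "left_eq_right_times n A G"
  shows "left_eq_right_times n A (pivot_step j G)"
  unfolding left_eq_right_times_def
proof (intro allI impI)
  fix i c assume ic: "i < n" "c < n"
  have Lj: "G j c = (\<Sum>l<n. G j (n+l) * A l c)" and Li: "G i c = (\<Sum>l<n. G i (n+l) * A l c)"
    using assms ic unfolding left_eq_right_times_def by auto
  show "pivot_step j G i c = (\<Sum>l<n. pivot_step j G i (n+l) * A l c)"
  proof (cases "i = j")
    case True
    then show ?thesis unfolding pivot_step_def using Lj
      by (simp add: sum_divide_distrib algebra_simps)
  next
    case False
    have "pivot_step j G i c = (\<Sum>l<n. G i (n+l) * A l c) - G i j * ((\<Sum>l<n. G j (n+l) * A l c) / G j j)"
      using False Li Lj by (simp add: pivot_step_def)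
    also have "\<dots> = (\<Sum>l<n. (G i (n+l) - G i j * (G j (n+l) / G j j)) * A l c)"
      by (simp add: sum_divide_distrib sum_distrib_left sum_subtractf algebra_simps)
    finally show ?thesis using False by (simp add: pivot_step_def)
  qed
qed

lemma diag_dominant_pivot_nonzero:
  assumes "j < n" "diag_dominant_from n j G"
  shows "G j j \<noteq> 0"
proof -
  have "(\<Sum>c\<in>{j..<n}-{j}. \<bar>G j c\<bar>) < \<bar>G j j\<bar>" using assms unfolding diag_dominant_from_def by auto
  moreover have "0 \<le> (\<Sum>c\<in>{j..<n}-{j}. \<bar>G j c\<bar>)" by (intro sum_nonneg) auto
  ultimately show ?thesis by linarith
qed

lemma pivot_step_unit_columns:
  assumes "j < n" "unit_columns n j G" "G j j \<noteq> 0"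
  shows "unit_columns n (Suc j) (pivot_step j G)"
  unfolding unit_columns_def
proof (intro allI impI)
  fix i c assume ic: "i < n" "c < Suc j"
  show "pivot_step j G i c = (if i = c then 1 else 0)"
  proof (cases "c = j")
    case True then show ?thesis using assms by (auto simp: pivot_step_def)
  next
    case False
    then have "c < j" using ic by auto
    then have "G j c = 0" "G i c = (if i = c then 1 else 0)"
      using assms ic unfolding unit_columns_def by auto
    then show ?thesis using \<open>c < j\<close> by (auto simp: pivot_step_def)
  qed
qed

text \<open>Eliminating with a diagonally dominant pivot row keeps the remaining rows diagonally
  dominant: the row sum of row \<open>i\<close> grows by at most \<open>\<bar>G i j\<bar> (\<bar>G j j\<bar> - \<bar>G j i\<bar>) / \<bar>G j j\<bar>\<close>,
  while its diagonal shrinks by at most \<open>\<bar>G i j\<bar> \<bar>G j i\<bar> / \<bar>G j j\<bar>\<close>.\<close>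

lemma pivot_step_diag_dominant:
  assumes jn: "j < n" and D: "diag_dominant_from n j G"
  shows "diag_dominant_from n (Suc j) (pivot_step j G)"
  unfolding diag_dominant_from_def
proof (intro allI impI)
  fix i assume i1: "Suc j \<le> i" and i2: "i < n"
  let ?p = "G j j"
  have p0: "?p \<noteq> 0" using diag_dominant_pivot_nonzero[OF jn D] .
  define Ri where "Ri = (\<Sum>c\<in>{j..<n}-{i}. \<bar>G i c\<bar>)"
  define Rj where "Rj = (\<Sum>c\<in>{j..<n}-{j}. \<bar>G j c\<bar>)"
  have Ri_lt: "Ri < \<bar>G i i\<bar>" and Rj_lt: "Rj < \<bar>?p\<bar>"
    using D i1 i2 jn unfolding diag_dominant_from_def Ri_def Rj_def by auto
  let ?S = "{Suc j..<n}-{i}"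
  have "{j..<n}-{i} = insert j ?S" "{j..<n}-{j} = insert i ?S" using i1 i2 jn by auto
  then have Ri_eq: "Ri = \<bar>G i j\<bar> + (\<Sum>c\<in>?S. \<bar>G i c\<bar>)" and Rj_eq: "Rj = \<bar>G j i\<bar> + (\<Sum>c\<in>?S. \<bar>G j c\<bar>)"
    unfolding Ri_def Rj_def by (simp_all add: sum.insert_remove)
  let ?f = "\<bar>G i j\<bar> / \<bar>?p\<bar>"
  have "(\<Sum>c\<in>?S. \<bar>pivot_step j G i c\<bar>) = (\<Sum>c\<in>?S. \<bar>G i c - G i j * (G j c / ?p)\<bar>)"
    using i1 by (intro sum.cong) (auto simp: pivot_step_def)
  also have "\<dots> \<le> (\<Sum>c\<in>?S. \<bar>G i c\<bar> + ?f * \<bar>G j c\<bar>)"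
  proof (intro sum_mono)
    fix c
    have "\<bar>G i c - G i j * (G j c / ?p)\<bar> \<le> \<bar>G i c\<bar> + \<bar>G i j * (G j c / ?p)\<bar>" by (rule abs_triangle_ineq4)
    then show "\<bar>G i c - G i j * (G j c / ?p)\<bar> \<le> \<bar>G i c\<bar> + ?f * \<bar>G j c\<bar>" by (simp add: abs_mult)
  qed
  also have "\<dots> = (Ri - \<bar>G i j\<bar>) + ?f * (Rj - \<bar>G j i\<bar>)"
    using Ri_eq Rj_eq by (simp add: sum.distrib sum_distrib_left)
  also have "\<dots> \<le> (Ri - \<bar>G i j\<bar>) + ?f * (\<bar>?p\<bar> - \<bar>G j i\<bar>)"
    using Rj_lt by (intro add_left_mono mult_left_mono) auto
  also have "\<dots> = Ri - \<bar>G i j\<bar> * \<bar>G j i\<bar> / \<bar>?p\<bar>"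
    using p0 by (simp add: field_simps)
  also have "\<dots> < \<bar>G i i\<bar> - \<bar>G i j * (G j i / ?p)\<bar>"
    using Ri_lt by (simp add: abs_mult)
  also have "\<dots> \<le> \<bar>G i i - G i j * (G j i / ?p)\<bar>" by (rule abs_triangle_ineq2)
  also have "\<dots> = \<bar>pivot_step j G i i\<bar>" using i1 by (simp add: pivot_step_def)
  finally show "(\<Sum>c\<in>{Suc j..<n}-{i}. \<bar>pivot_step j G i c\<bar>) < \<bar>pivot_step j G i i\<bar>" .
qed

lemma augmented_left_eq_right_times: "left_eq_right_times n (id_minus w) (augmented n w)"
  unfolding left_eq_right_times_def
proof (intro allI impI)
  fix i c assume ic: "i < n" "c < n"
  have "(\<Sum>l<n. augmented n w i (n+l) * id_minus w l c) = (\<Sum>l<n. if l = i then id_minus w l c else 0)"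
    by (intro sum.cong) (auto simp: augmented_def)
  then show "augmented n w i c = (\<Sum>l<n. augmented n w i (n+l) * id_minus w l c)"
    using ic by (simp add: augmented_def)
qed

lemma augmented_diag_dominant:
  assumes W: "abs_row_sums_lt_one n w"
  shows "diag_dominant_from n 0 (augmented n w)"
  unfolding diag_dominant_from_def
proof (intro allI impI)
  fix i assume i: "i < n"
  have "(\<Sum>j<n. \<bar>w i j\<bar>) = \<bar>w i i\<bar> + (\<Sum>j\<in>{..<n}-{i}. \<bar>w i j\<bar>)"
    using i by (simp add: sum.remove)
  then have "(\<Sum>j\<in>{..<n}-{i}. \<bar>w i j\<bar>) < 1 - \<bar>w i i\<bar>" using W i by auto
  also have "1 - \<bar>w i i\<bar> \<le> \<bar>augmented n w i i\<bar>" using i by (simp add: augmented_def id_minus_def)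
  also have "(\<Sum>j\<in>{..<n}-{i}. \<bar>w i j\<bar>) = (\<Sum>c\<in>{0..<n}-{i}. \<bar>augmented n w i c\<bar>)"
    by (intro sum.cong) (auto simp: augmented_def id_minus_def)
  finally show "(\<Sum>c\<in>{0..<n}-{i}. \<bar>augmented n w i c\<bar>) < \<bar>augmented n w i i\<bar>" .
qed

lemma gauss_jordan_invariants:
  assumes W: "abs_row_sums_lt_one n w" and "j \<le> n"
  shows "left_eq_right_times n (id_minus w) (gauss_jordan n w j) \<and> unit_columns n j (gauss_jordan n w j)
    \<and> diag_dominant_from n j (gauss_jordan n w j)"
  using \<open>j \<le> n\<close>
proof (induction j)
  case 0
  then show ?case using augmented_left_eq_right_times augmented_diag_dominant[OF W]
    by (simp add: unit_columns_def)
next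
  case (Suc j)
  then have jn: "j < n" and IH: "left_eq_right_times n (id_minus w) (gauss_jordan n w j)"
    "unit_columns n j (gauss_jordan n w j)" "diag_dominant_from n j (gauss_jordan n w j)" by auto
  show ?case
    using pivot_step_left_eq_right_times[OF jn IH(1)] pivot_step_diag_dominant[OF jn IH(3)]
      pivot_step_unit_columns[OF jn IH(2) diag_dominant_pivot_nonzero[OF jn IH(3)]]
    by simp
qed

lemma gauss_jordan_pivot_nonzero:
  assumes "abs_row_sums_lt_one n w" "j < n"
  shows "gauss_jordan n w j j j \<noteq> 0"
  using gauss_jordan_invariants[OF assms(1), of j] assms(2) diag_dominant_pivot_nonzero by auto

lemma Delta_eq_gauss_jordan:
  assumes W: "abs_row_sums_lt_one n w" and "i < n" "j < n"
  shows "Delta n w i j = gauss_jordan n w n i (n + j)"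
proof -
  have I: "left_eq_right_times n (id_minus w) (gauss_jordan n w n)" "unit_columns n n (gauss_jordan n w n)"
    using gauss_jordan_invariants[OF W, of n] by auto
  have "Delta n w = (\<lambda>i j. if i < n \<and> j < n then gauss_jordan n w n i (n + j) else 0)"
    unfolding Delta_def
  proof (rule matinv_eqI)
    show "\<forall>i<n. \<forall>j<n. (\<Sum>k<n. (if i < n \<and> k < n then gauss_jordan n w n i (n + k) else 0)
        * ((if k = j then 1 else 0) - w k j)) = (if i = j then 1 else 0)"
    proof (intro allI impI)
      fix i j assume ij: "i < n" "j < n"
      have "(\<Sum>k<n. (if i < n \<and> k < n then gauss_jordan n w n i (n + k) else 0) * ((if k = j then 1 else 0) - w k j))
          = (\<Sum>k<n. gauss_jordan n w n i (n + k) * id_minus w k j)"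
        using ij by (intro sum.cong) (auto simp: id_minus_def)
      then show "(\<Sum>k<n. (if i < n \<and> k < n then gauss_jordan n w n i (n + k) else 0)
          * ((if k = j then 1 else 0) - w k j)) = (if i = j then 1 else 0)"
        using I ij unfolding left_eq_right_times_def unit_columns_def by auto
    qed
  qed auto
  then show ?thesis using assms by simp
qed

section \<open>The objective is bilinear in the two investment vectors\<close>

definition col_sum :: "nat \<Rightarrow> (nat \<Rightarrow> nat \<Rightarrow> real) \<Rightarrow> nat \<Rightarrow> real" where
  "col_sum n w j = (\<Sum>i<n. Delta n w i j)"

text \<open>The opinions after phase 1 when nothing is invested.\<close>

definition free_opinion :: "nat \<Rightarrow> (nat \<Rightarrow> nat \<Rightarrow> real) \<Rightarrow> (nat \<Rightarrow> real) \<Rightarrow> (nat \<Rightarrow> real) \<Rightarrow> nat \<Rightarrow> real" where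
  "free_opinion n w w0 v0 j = (\<Sum>a<n. Delta n w j a * w0 a * v0 a)"

definition bias_gain :: "nat \<Rightarrow> (nat \<Rightarrow> nat \<Rightarrow> real) \<Rightarrow> (nat \<Rightarrow> real) \<Rightarrow> nat \<Rightarrow> real" where
  "bias_gain n w w0 a = (\<Sum>j<n. col_sum n w j * w0 j * Delta n w j a)"

definition coef0 :: "nat \<Rightarrow> (nat \<Rightarrow> nat \<Rightarrow> real) \<Rightarrow> (nat \<Rightarrow> real) \<Rightarrow> (nat \<Rightarrow> real) \<Rightarrow> real" where
  "coef0 n w w0 v0 = (\<Sum>j<n. col_sum n w j * w0 j * free_opinion n w w0 v0 j)"

definition coef1 :: "nat \<Rightarrow> (nat \<Rightarrow> nat \<Rightarrow> real) \<Rightarrow> (nat \<Rightarrow> real) \<Rightarrow> (nat \<Rightarrow> real) \<Rightarrow> (nat \<Rightarrow> real) \<Rightarrow> nat \<Rightarrow> real" where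
  "coef1 n w w0 v0 theta a = camp_weight w0 theta v0 a * bias_gain n w w0 a"

definition coef2 :: "nat \<Rightarrow> (nat \<Rightarrow> nat \<Rightarrow> real) \<Rightarrow> (nat \<Rightarrow> real) \<Rightarrow> (nat \<Rightarrow> real) \<Rightarrow> (nat \<Rightarrow> real) \<Rightarrow> nat \<Rightarrow> real" where
  "coef2 n w w0 v0 theta b = col_sum n w b * camp_weight w0 theta (free_opinion n w w0 v0) b"

definition coef2_slope :: "nat \<Rightarrow> (nat \<Rightarrow> nat \<Rightarrow> real) \<Rightarrow> (nat \<Rightarrow> real) \<Rightarrow> (nat \<Rightarrow> real) \<Rightarrow> nat \<Rightarrow> real" where
  "coef2_slope n w w0 theta b = col_sum n w b * theta b * w0 b / 2"

definition coef12 :: "nat \<Rightarrow> (nat \<Rightarrow> nat \<Rightarrow> real) \<Rightarrow> (nat \<Rightarrow> real) \<Rightarrow> (nat \<Rightarrow> real) \<Rightarrow> (nat \<Rightarrow> real) \<Rightarrow> nat \<Rightarrow> nat \<Rightarrow> real" where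
  "coef12 n w w0 v0 theta a b = coef2_slope n w w0 theta b * Delta n w b a * camp_weight w0 theta v0 a"

lemma objective_bilinear:
  "objective n w w0 v0 theta x1 x2 = coef0 n w w0 v0 + (\<Sum>a<n. coef1 n w w0 v0 theta a * x1 a)
     + (\<Sum>b<n. coef2 n w w0 v0 theta b * x2 b) + (\<Sum>a<n. \<Sum>b<n. coef12 n w w0 v0 theta a b * x1 a * x2 b)"
proof -
  let ?D = "Delta n w" and ?s = "col_sum n w"
  define v1 where "v1 = phase n w w0 theta v0 x1"
  define q where "q j = (\<Sum>a<n. ?D j a * camp_weight w0 theta v0 a * x1 a)" for j
  have v1: "v1 j = free_opinion n w w0 v0 j + q j" for j
    unfolding v1_def phase_def free_opinion_def q_def by (simp add: sum.distrib algebra_simps)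
  have "objective n w w0 v0 theta x1 x2
      = (\<Sum>i<n. \<Sum>j<n. ?D i j * (w0 j * v1 j + camp_weight w0 theta v1 j * x2 j))"
    unfolding objective_def opinions2_def v1_def phase_def by simp
  also have "\<dots> = (\<Sum>j<n. ?s j * (w0 j * v1 j + camp_weight w0 theta v1 j * x2 j))"
    unfolding col_sum_def by (subst sum.swap) (simp add: sum_distrib_right)
  also have "\<dots> = coef0 n w w0 v0 + (\<Sum>j<n. ?s j * w0 j * q j)
       + (\<Sum>j<n. coef2 n w w0 v0 theta j * x2 j) + (\<Sum>j<n. coef2_slope n w w0 theta j * q j * x2 j)"
    unfolding v1 camp_weight_def coef0_def coef2_def coef2_slope_def
    by (simp add: sum.distrib[symmetric] algebra_simps add_divide_distrib)
  also have "(\<Sum>j<n. ?s j * w0 j * q j) = (\<Sum>a<n. coef1 n w w0 v0 theta a * x1 a)"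
    unfolding q_def coef1_def bias_gain_def
    by (simp add: sum_distrib_left sum_distrib_right algebra_simps) (rule sum.swap)
  also have "(\<Sum>j<n. coef2_slope n w w0 theta j * q j * x2 j)
      = (\<Sum>a<n. \<Sum>b<n. coef12 n w w0 v0 theta a b * x1 a * x2 b)"
    unfolding q_def coef12_def
    by (simp add: sum_distrib_left sum_distrib_right algebra_simps) (rule sum.swap)
  finally show ?thesis .
qed

section \<open>Maximising a bilinear function over the budget triangle\<close>

text \<open>On the triangle \<open>t, r \<ge> 0, t + r \<le> k\<close> the function \<open>\<alpha> t + \<beta> r + \<gamma> t r\<close> is maximised
  at \<open>(0, 0)\<close>, \<open>(k, 0)\<close>, \<open>(0, k)\<close>, or, when \<open>\<gamma> > 0\<close>, at the vertex \<open>s\<close> of the concave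
  parabola it describes on the edge \<open>t + r = k\<close>: for fixed \<open>t\<close> it is affine in \<open>r\<close>.\<close>

lemma bilinear_le_on_triangle:
  fixes \<alpha> \<beta> \<gamma> k t r V :: real
  assumes t0: "0 \<le> t" and r0: "0 \<le> r" and tr: "t + r \<le> k"
    and V0: "0 \<le> V" and Va: "\<alpha> * k \<le> V" and Vb: "\<beta> * k \<le> V"
    and Vs: "\<And>s. \<gamma> > 0 \<Longrightarrow> s = (\<alpha> - \<beta> + \<gamma> * k) / (2 * \<gamma>) \<Longrightarrow> 0 < s \<Longrightarrow> s < k \<Longrightarrow>
      \<alpha> * s + \<beta> * (k - s) + \<gamma> * s * (k - s) \<le> V"
  shows "\<alpha> * t + \<beta> * r + \<gamma> * t * r \<le> V"
proof -
  define q where "q s = \<alpha> * s + \<beta> * (k - s) + \<gamma> * s * (k - s)" for s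
  have k0: "0 \<le> k" using t0 r0 tr by linarith
  have A: "\<alpha> * t \<le> V"
  proof (cases "\<alpha> \<ge> 0")
    case True then have "\<alpha> * t \<le> \<alpha> * k" using tr r0 by (intro mult_left_mono) auto
    then show ?thesis using Va by linarith
  next
    case False then have "\<alpha> * t \<le> 0" using t0 by (simp add: mult_nonpos_nonneg)
    then show ?thesis using V0 by linarith
  qed
  have Q: "q t \<le> V"
  proof (cases "\<gamma> > 0")
    case False
    show ?thesis
    proof (cases "k = 0")
      case True then have "t = 0" using t0 r0 tr by linarith
      then show ?thesis using True V0 by (simp add: q_def)
    next
      case False
      then have kp: "k > 0" using k0 by linarith
      have tk: "0 \<le> k - t" using tr r0 by linarith
      have "k * q t = t * (\<alpha> * k) + (k - t) * (\<beta> * k) + k * \<gamma> * (t * (k - t))"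
        by (simp add: q_def algebra_simps)
      also have "\<dots> \<le> t * V + (k - t) * V + 0"
      proof (intro add_mono mult_left_mono)
        show "k * \<gamma> * (t * (k - t)) \<le> 0"
          using kp \<open>\<not> \<gamma> > 0\<close> t0 tk by (simp add: mult_nonpos_nonneg mult_nonneg_nonpos)
      qed (use Va Vb t0 tk in auto)
      also have "\<dots> = k * V" by (simp add: algebra_simps)
      finally show ?thesis using kp by simp
    qed
  next
    case True
    define s where "s = (\<alpha> - \<beta> + \<gamma> * k) / (2 * \<gamma>)"
    have qs: "q x = q s - \<gamma> * (x - s)\<^sup>2" for x
      using True by (simp add: q_def s_def field_simps power2_eq_square)
    consider "s \<le> 0" | "k \<le> s" | "0 < s" "s < k" by linarith
    then show ?thesis
    proof cases
      case 1
      have "(0 - s)\<^sup>2 \<le> (t - s)\<^sup>2" using 1 t0 by (intro power_mono) auto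
      then have "q t \<le> q 0" using qs[of t] qs[of 0] True mult_left_mono[of "(0 - s)\<^sup>2" "(t - s)\<^sup>2" \<gamma>]
        by linarith
      then show ?thesis using Vb by (simp add: q_def)
    next
      case 2
      have "(k - s)\<^sup>2 \<le> (t - s)\<^sup>2"
        using 2 tr r0 power_mono[of "s - k" "s - t" 2] by (simp add: power2_commute)
      then have "q t \<le> q k" using qs[of t] qs[of k] True mult_left_mono[of "(k - s)\<^sup>2" "(t - s)\<^sup>2" \<gamma>]
        by linarith
      then show ?thesis using Va by (simp add: q_def)
    next
      case 3
      have "q t \<le> q s" using qs[of t] True by simp
      also have "q s \<le> V" using Vs[OF True s_def 3] by (simp add: q_def)
      finally show ?thesis .
    qed
  qed
  have "\<alpha> * t + \<beta> * r + \<gamma> * t * r = \<alpha> * t + r * (\<beta> + \<gamma> * t)" by (simp add: algebra_simps)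
  also have "\<dots> \<le> max (\<alpha> * t) (q t)"
  proof (cases "\<beta> + \<gamma> * t \<ge> 0")
    case True
    then have "r * (\<beta> + \<gamma> * t) \<le> (k - t) * (\<beta> + \<gamma> * t)" using tr by (intro mult_right_mono) auto
    then show ?thesis by (simp add: q_def algebra_simps)
  next
    case False
    then have "r * (\<beta> + \<gamma> * t) \<le> 0" using r0 by (simp add: mult_nonneg_nonpos)
    then show ?thesis by (simp add: le_max_iff_disj)
  qed
  finally show ?thesis using A Q by linarith
qed

lemma ex_argmax_below:
  fixes f :: "nat \<Rightarrow> real"
  assumes "0 < n"
  obtains a where "a < n" "\<And>a'. a' < n \<Longrightarrow> f a' \<le> f a"
proof -
  have fin: "finite (f ` {..<n})" and ne: "f ` {..<n} \<noteq> {}" using assms by auto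
  obtain a where "a < n" "f a = Max (f ` {..<n})" using Max_in[OF fin ne] by auto
  then show ?thesis using that Max_ge[OF fin] by auto
qed

lemma weighted_sum_le_max:
  fixes c y :: "nat \<Rightarrow> real"
  assumes "\<forall>a<n. 0 \<le> y a" "\<And>a. a < n \<Longrightarrow> c a \<le> C"
  shows "(\<Sum>a<n. c a * y a) \<le> C * (\<Sum>a<n. y a)"
proof -
  have "(\<Sum>a<n. c a * y a) \<le> (\<Sum>a<n. C * y a)"
    using assms by (intro sum_mono mult_right_mono) auto
  then show ?thesis by (simp add: sum_distrib_left)
qed

text \<open>Being linear in each of \<open>y1\<close> and \<open>y2\<close> separately, a bilinear function is dominated by
  its value after moving all of \<open>y1\<close> to a single coordinate \<open>a\<close> and then all of \<open>y2\<close> to a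
  single coordinate \<open>b\<close>.\<close>

lemma bilinear_le_concentrated:
  fixes f1 f2 :: "nat \<Rightarrow> real" and f12 :: "nat \<Rightarrow> nat \<Rightarrow> real"
  assumes n: "0 < n" and y1: "\<forall>a<n. 0 \<le> y1 a" and y2: "\<forall>b<n. 0 \<le> y2 b"
  obtains a b where "a < n" "b < n"
    "(\<Sum>a<n. f1 a * y1 a) + (\<Sum>b<n. f2 b * y2 b) + (\<Sum>a<n. \<Sum>b<n. f12 a b * y1 a * y2 b)
     \<le> f1 a * (\<Sum>a<n. y1 a) + f2 b * (\<Sum>b<n. y2 b) + f12 a b * (\<Sum>a<n. y1 a) * (\<Sum>b<n. y2 b)"
proof -
  define S1 where "S1 = (\<Sum>a<n. y1 a)"
  define S2 where "S2 = (\<Sum>b<n. y2 b)"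
  define c where "c a = f1 a + (\<Sum>b<n. f12 a b * y2 b)" for a
  obtain a where a: "a < n" "\<And>a'. a' < n \<Longrightarrow> c a' \<le> c a" using ex_argmax_below[OF n] by blast
  define d where "d b = f2 b + f12 a b * S1" for b
  obtain b where b: "b < n" "\<And>b'. b' < n \<Longrightarrow> d b' \<le> d b" using ex_argmax_below[OF n] by blast
  have "(\<Sum>a<n. f1 a * y1 a) + (\<Sum>b<n. f2 b * y2 b) + (\<Sum>a<n. \<Sum>b<n. f12 a b * y1 a * y2 b)
      = (\<Sum>a<n. c a * y1 a) + (\<Sum>b<n. f2 b * y2 b)"
    by (simp add: c_def sum.distrib algebra_simps sum_distrib_left sum_distrib_right)
  also have "\<dots> \<le> c a * S1 + (\<Sum>b<n. f2 b * y2 b)"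
    unfolding S1_def using weighted_sum_le_max[OF y1 a(2)] by simp
  also have "\<dots> = f1 a * S1 + (\<Sum>b<n. d b * y2 b)"
    by (simp add: c_def d_def S1_def sum.distrib algebra_simps sum_distrib_left sum_distrib_right)
  also have "\<dots> \<le> f1 a * S1 + d b * S2"
    unfolding S2_def using weighted_sum_le_max[OF y2 b(2)] by simp
  also have "\<dots> = f1 a * S1 + f2 b * S2 + f12 a b * S1 * S2" by (simp add: d_def algebra_simps)
  finally show ?thesis using that a b unfolding S1_def S2_def by blast
qed

lemma sum_single_support:
  fixes t :: real and a n :: nat
  assumes "a < n" "\<forall>i<n. x i = (if i = a then t else 0)"
  shows "(\<Sum>i<n. f i * x i) = f a * t"
proof -
  have "(\<Sum>i<n. f i * x i) = (\<Sum>i<n. if i = a then f i * t else 0)"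
    using assms by (intro sum.cong) auto
  also have "\<dots> = f a * t" using assms by (simp add: sum.delta)
  finally show ?thesis .
qed

section \<open>Optimality certificates\<close>

definition pair_value :: "nat \<Rightarrow> (nat \<Rightarrow> nat \<Rightarrow> real) \<Rightarrow> (nat \<Rightarrow> real) \<Rightarrow> (nat \<Rightarrow> real) \<Rightarrow> (nat \<Rightarrow> real)
    \<Rightarrow> nat \<Rightarrow> nat \<Rightarrow> real \<Rightarrow> real \<Rightarrow> real" where
  "pair_value n w w0 v0 theta a b t r = coef1 n w w0 v0 theta a * t + coef2 n w w0 v0 theta b * r
     + coef12 n w w0 v0 theta a b * t * r"

definition edge_split :: "nat \<Rightarrow> (nat \<Rightarrow> nat \<Rightarrow> real) \<Rightarrow> (nat \<Rightarrow> real) \<Rightarrow> (nat \<Rightarrow> real) \<Rightarrow> (nat \<Rightarrow> real)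
    \<Rightarrow> real \<Rightarrow> nat \<Rightarrow> nat \<Rightarrow> real" where
  "edge_split n w w0 v0 theta k a b = (coef1 n w w0 v0 theta a - coef2 n w w0 v0 theta b
     + coef12 n w w0 v0 theta a b * k) / (2 * coef12 n w w0 v0 theta a b)"

definition dominates_pair :: "nat \<Rightarrow> (nat \<Rightarrow> nat \<Rightarrow> real) \<Rightarrow> (nat \<Rightarrow> real) \<Rightarrow> (nat \<Rightarrow> real) \<Rightarrow> (nat \<Rightarrow> real)
    \<Rightarrow> real \<Rightarrow> nat \<Rightarrow> nat \<Rightarrow> real \<Rightarrow> bool" where
  "dominates_pair n w w0 v0 theta k a b V \<longleftrightarrow>
     coef1 n w w0 v0 theta a * k \<le> V \<and> coef2 n w w0 v0 theta b * k \<le> V \<and>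
     (0 < coef12 n w w0 v0 theta a b \<longrightarrow> 0 < edge_split n w w0 v0 theta k a b \<longrightarrow>
      edge_split n w w0 v0 theta k a b < k \<longrightarrow>
      pair_value n w w0 v0 theta a b (edge_split n w w0 v0 theta k a b) (k - edge_split n w w0 v0 theta k a b) \<le> V)"

definition best_pair :: "nat \<Rightarrow> (nat \<Rightarrow> nat \<Rightarrow> real) \<Rightarrow> (nat \<Rightarrow> real) \<Rightarrow> (nat \<Rightarrow> real) \<Rightarrow> (nat \<Rightarrow> real)
    \<Rightarrow> real \<Rightarrow> nat \<Rightarrow> nat \<Rightarrow> real \<Rightarrow> real \<Rightarrow> bool" where
  "best_pair n w w0 v0 theta k a b t r \<longleftrightarrow> a < n \<and> b < n \<and> 0 \<le> t \<and> 0 \<le> r \<and> t + r \<le> k \<and>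
     0 \<le> pair_value n w w0 v0 theta a b t r \<and>
     (\<forall>a'<n. \<forall>b'<n. dominates_pair n w w0 v0 theta k a' b' (pair_value n w w0 v0 theta a b t r))"

lemma best_pair_optimal:
  assumes best: "best_pair n w w0 v0 theta k a b t r"
    and x1: "\<forall>i<n. x1 i = (if i = a then t else 0)"
    and x2: "\<forall>i<n. x2 i = (if i = b then r else 0)"
  shows "optimal n w w0 v0 theta k x1 x2"
proof -
  let ?A = "coef1 n w w0 v0 theta" and ?B = "coef2 n w w0 v0 theta" and ?\<Gamma> = "coef12 n w w0 v0 theta"
  let ?V = "pair_value n w w0 v0 theta a b t r"
  have ab: "a < n" "b < n" and t0: "0 \<le> t" and r0: "0 \<le> r" and tr: "t + r \<le> k" and V0: "0 \<le> ?V"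
    and dom: "\<And>a' b'. a' < n \<Longrightarrow> b' < n \<Longrightarrow> dominates_pair n w w0 v0 theta k a' b' ?V"
    using best unfolding best_pair_def by auto
  have n: "0 < n" using ab by simp
  have "(\<Sum>i<n. x1 i) = t" "(\<Sum>i<n. x2 i) = r"
    using sum_single_support[OF ab(1) x1, of "\<lambda>_. 1"] sum_single_support[OF ab(2) x2, of "\<lambda>_. 1"] by simp_all
  then have feas: "feasible n k x1 x2" unfolding feasible_def using tr x1 x2 t0 r0 by auto
  have "(\<Sum>a'<n. \<Sum>b'<n. ?\<Gamma> a' b' * x1 a' * x2 b') = (\<Sum>a'<n. (\<Sum>b'<n. ?\<Gamma> a' b' * x2 b') * x1 a')"
    by (simp add: sum_distrib_left sum_distrib_right mult_ac)
  also have "\<dots> = ?\<Gamma> a b * t * r"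
    using sum_single_support[OF ab(1) x1] sum_single_support[OF ab(2) x2] by simp
  finally have objx: "objective n w w0 v0 theta x1 x2 = coef0 n w w0 v0 + ?V"
    unfolding objective_bilinear pair_value_def
    using sum_single_support[OF ab(1) x1, of ?A] sum_single_support[OF ab(2) x2, of ?B] by simp
  show ?thesis unfolding optimal_def
  proof (intro conjI feas allI impI)
    fix y1 y2 assume "feasible n k y1 y2"
    then have y1: "\<forall>a<n. 0 \<le> y1 a" and y2: "\<forall>b<n. 0 \<le> y2 b" and yk: "(\<Sum>i<n. y1 i) + (\<Sum>i<n. y2 i) \<le> k"
      unfolding feasible_def by auto
    obtain a' b' where ab': "a' < n" "b' < n" and
      le: "(\<Sum>a<n. ?A a * y1 a) + (\<Sum>b<n. ?B b * y2 b) + (\<Sum>a<n. \<Sum>b<n. ?\<Gamma> a b * y1 a * y2 b)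
        \<le> ?A a' * (\<Sum>a<n. y1 a) + ?B b' * (\<Sum>b<n. y2 b) + ?\<Gamma> a' b' * (\<Sum>a<n. y1 a) * (\<Sum>b<n. y2 b)"
      using bilinear_le_concentrated[OF n y1 y2] by blast
    have S: "0 \<le> (\<Sum>a<n. y1 a)" "0 \<le> (\<Sum>a<n. y2 a)" using y1 y2 by (auto intro: sum_nonneg)
    have "?A a' * (\<Sum>a<n. y1 a) + ?B b' * (\<Sum>b<n. y2 b) + ?\<Gamma> a' b' * (\<Sum>a<n. y1 a) * (\<Sum>b<n. y2 b) \<le> ?V"
    proof (rule bilinear_le_on_triangle[OF S yk V0])
      show "?A a' * k \<le> ?V" "?B b' * k \<le> ?V" using dom[OF ab'] by (auto simp: dominates_pair_def)
    next
      fix s assume "0 < ?\<Gamma> a' b'" "s = (?A a' - ?B b' + ?\<Gamma> a' b' * k) / (2 * ?\<Gamma> a' b')" "0 < s" "s < k"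
      then show "?A a' * s + ?B b' * (k - s) + ?\<Gamma> a' b' * s * (k - s) \<le> ?V"
        using dom[OF ab'] by (simp add: dominates_pair_def edge_split_def pair_value_def)
    qed
    then have "objective n w w0 v0 theta y1 y2 \<le> coef0 n w w0 v0 + ?V"
      unfolding objective_bilinear using le by linarith
    then show "objective n w w0 v0 theta y1 y2 \<le> objective n w w0 v0 theta x1 x2"
      unfolding objx .
  qed
qed

section \<open>A structured language for the real RAM, with a Hoare logic of running times\<close>

type_synonym mem = "nat \<Rightarrow> real"

fun exec_instr :: "instr \<Rightarrow> mem \<Rightarrow> mem option" where
  "exec_instr (Const i z) m = Some (m(i := of_int z))"
| "exec_instr (Add i j k) m = Some (m(i := m j + m k))"
| "exec_instr (Sub i j k) m = Some (m(i := m j - m k))"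
| "exec_instr (Mul i j k) m = Some (m(i := m j * m k))"
| "exec_instr (Div i j k) m = (if m k = 0 then None else Some (m(i := m j / m k)))"
| "exec_instr (Load i j) m = (if m j \<in> \<nat> then Some (m(i := m (nat \<lfloor>m j\<rfloor>))) else None)"
| "exec_instr (Store i j) m = (if m j \<in> \<nat> then Some (m(nat \<lfloor>m j\<rfloor> := m i)) else None)"
| "exec_instr _ m = None"

lemma step_atom:
  assumes "pc < length P" "P ! pc = ins" "exec_instr ins m = Some m'"
  shows "step P (pc, m) = Some (Suc pc, m')"
  using assms by (cases ins) (auto simp: step_def split: if_splits)

lemma step_jmpless:
  assumes "pc < length P" "P ! pc = JmpLess j k t"
  shows "step P (pc, m) = Some (if m j < m k then t else Suc pc, m)"
  using assms by (simp add: step_def)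

lemma step_jmp:
  assumes "pc < length P" "P ! pc = Jmp t"
  shows "step P (pc, m) = Some (t, m)"
  using assms by (simp add: step_def)

lemma exec_add: "exec P (a + b) c = (case exec P a c of None \<Rightarrow> None | Some c' \<Rightarrow> exec P b c')"
proof (induction a arbitrary: c)
  case 0 then show ?case by simp
next
  case (Suc a) then show ?case by (simp split: option.splits)
qed

datatype com = Skip | Atom instr | Seq com com | While nat nat com | IfLess nat nat com com

fun code_size :: "com \<Rightarrow> nat" where
  "code_size Skip = 0"
| "code_size (Atom i) = 1"
| "code_size (Seq c1 c2) = code_size c1 + code_size c2"
| "code_size (While a b c) = code_size c + 3"
| "code_size (IfLess a b c1 c2) = code_size c1 + code_size c2 + 2"

fun compile :: "nat \<Rightarrow> com \<Rightarrow> instr list" where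
  "compile p Skip = []"
| "compile p (Atom i) = [i]"
| "compile p (Seq c1 c2) = compile p c1 @ compile (p + code_size c1) c2"
| "compile p (While a b c) = [JmpLess a b (p+2), Jmp (p + 3 + code_size c)] @ compile (p+2) c @ [Jmp p]"
| "compile p (IfLess a b c1 c2) = [JmpLess a b (p + 2 + code_size c2)] @ compile (p+1) c2
      @ [Jmp (p + 2 + code_size c2 + code_size c1)] @ compile (p + 2 + code_size c2) c1"

lemma length_compile[simp]: "length (compile p c) = code_size c"
  by (induction c arbitrary: p) auto

text \<open>The time argument counts the RAM instructions executed by the compiled code.\<close>

inductive big_step :: "com \<Rightarrow> mem \<Rightarrow> nat \<Rightarrow> mem \<Rightarrow> bool" where
  big_Skip: "big_step Skip m 0 m"
| big_Atom: "exec_instr i m = Some m' \<Longrightarrow> big_step (Atom i) m 1 m'"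
| big_Seq: "big_step c1 m t1 m1 \<Longrightarrow> big_step c2 m1 t2 m2 \<Longrightarrow> big_step (Seq c1 c2) m (t1 + t2) m2"
| big_While_False: "\<not> m a < m b \<Longrightarrow> big_step (While a b c) m 2 m"
| big_While_True: "m a < m b \<Longrightarrow> big_step c m t1 m1 \<Longrightarrow> big_step (While a b c) m1 t2 m2 \<Longrightarrow> big_step (While a b c) m (t1 + t2 + 2) m2"
| big_If_True: "m a < m b \<Longrightarrow> big_step c1 m t m' \<Longrightarrow> big_step (IfLess a b c1 c2) m (t + 1) m'"
| big_If_False: "\<not> m a < m b \<Longrightarrow> big_step c2 m t m' \<Longrightarrow> big_step (IfLess a b c1 c2) m (t + 2) m'"

definition code_at :: "instr list \<Rightarrow> nat \<Rightarrow> instr list \<Rightarrow> bool" where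
  "code_at P p xs \<longleftrightarrow> (\<forall>k<length xs. p + k < length P \<and> P ! (p + k) = xs ! k)"

lemma code_at_append: "code_at P p (xs @ ys) \<longleftrightarrow> code_at P p xs \<and> code_at P (p + length xs) ys"
proof
  assume H: "code_at P p (xs @ ys)"
  show "code_at P p xs \<and> code_at P (p + length xs) ys"
    unfolding code_at_def
  proof (rule conjI; intro allI impI)
    fix k assume k: "k < length xs"
    then show "p + k < length P \<and> P ! (p + k) = xs ! k" using H[unfolded code_at_def, rule_format, of k]
      by (simp add: nth_append)
  next
    fix k assume k: "k < length ys"
    then show "p + length xs + k < length P \<and> P ! (p + length xs + k) = ys ! k"
      using H[unfolded code_at_def, rule_format, of "length xs + k"]
      by (simp add: nth_append add.assoc)
  qed
next
  assume H: "code_at P p xs \<and> code_at P (p + length xs) ys"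
  show "code_at P p (xs @ ys)" unfolding code_at_def
  proof (intro allI impI)
    fix k assume k: "k < length (xs @ ys)"
    show "p + k < length P \<and> P ! (p + k) = (xs @ ys) ! k"
    proof (cases "k < length xs")
      case True then show ?thesis using H unfolding code_at_def by (simp add: nth_append)
    next
      case False
      then obtain j where j: "k = length xs + j" by (metis le_add_diff_inverse not_less)
      then have "j < length ys" using k by simp
      then show ?thesis using H j unfolding code_at_def by (simp add: nth_append add.assoc)
    qed
  qed
qed

lemma code_at_Cons: "code_at P p (x # xs) \<longleftrightarrow> p < length P \<and> P ! p = x \<and> code_at P (Suc p) xs"
proof -
  have "code_at P p (x # xs) = code_at P p ([x] @ xs)" by simp
  also have "\<dots> \<longleftrightarrow> code_at P p [x] \<and> code_at P (Suc p) xs" using code_at_append[of P p "[x]" xs] by simp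
  also have "code_at P p [x] \<longleftrightarrow> p < length P \<and> P ! p = x" by (simp add: code_at_def)
  finally show ?thesis by simp
qed

lemma big_step_exec:
  assumes "big_step c m t m'" "code_at P p (compile p c)"
  shows "exec P t (p, m) = Some (p + code_size c, m')"
  using assms
proof (induction arbitrary: p rule: big_step.induct)
  case (big_Skip m) then show ?case by simp
next
  case (big_Atom i m m')
  then have "p < length P" "P ! p = i" by (auto simp: code_at_Cons)
  with big_Atom.hyps show ?case by (simp add: step_atom)
next
  case (big_Seq c1 m t1 m1 c2 t2 m2)
  from big_Seq.prems have C1: "code_at P p (compile p c1)" and C2: "code_at P (p + code_size c1) (compile (p + code_size c1) c2)"
    by (auto simp: code_at_append)
  show ?case using big_Seq.IH(1)[OF C1] big_Seq.IH(2)[OF C2] by (simp add: exec_add add.assoc)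
next
  case (big_While_False m a b c)
  then have "p < length P" "P ! p = JmpLess a b (p+2)" "Suc p < length P" "P ! Suc p = Jmp (p + 3 + code_size c)"
    by (auto simp: code_at_Cons)
  then show ?case using big_While_False.hyps
    by (simp add: numeral_2_eq_2 step_jmpless step_jmp)
next
  case (big_While_True m a b c t1 m1 t2 m2)
  from big_While_True.prems have J: "p < length P" "P ! p = JmpLess a b (p+2)"
    and C: "code_at P (p+2) (compile (p+2) c)" and J2: "p + 2 + code_size c < length P" "P ! (p + 2 + code_size c) = Jmp p"
    by (auto simp: code_at_Cons code_at_append)
  have e1: "exec P 1 (p, m) = Some (p + 2, m)" using J big_While_True.hyps(1) by (simp add: step_jmpless)
  have e2: "exec P t1 (p+2, m) = Some (p + 2 + code_size c, m1)" using big_While_True.IH(1)[OF C] by simp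
  have e3: "exec P 1 (p + 2 + code_size c, m1) = Some (p, m1)" using J2 by (simp add: step_jmp)
  have e4: "exec P t2 (p, m1) = Some (p + code_size (While a b c), m2)" using big_While_True.IH(2)[OF big_While_True.prems] .
  have "t1 + t2 + 2 = 1 + (t1 + (1 + t2))" by simp
  then show ?case using e1 e2 e3 e4 by (simp only: exec_add) simp
next
  case (big_If_True m a b c1 t m' c2)
  from big_If_True.prems have J: "p < length P" "P ! p = JmpLess a b (p + 2 + code_size c2)"
    and C: "code_at P (p + 2 + code_size c2) (compile (p + 2 + code_size c2) c1)"
    by (auto simp: code_at_Cons code_at_append)
  have e1: "exec P 1 (p, m) = Some (p + 2 + code_size c2, m)" using J big_If_True.hyps(1) by (simp add: step_jmpless)
  have e2: "exec P t (p + 2 + code_size c2, m) = Some (p + 2 + code_size c2 + code_size c1, m')" using big_If_True.IH[OF C] .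
  have "t + 1 = 1 + t" by simp
  then show ?case using e1 e2 by (simp only: exec_add) (simp add: algebra_simps)
next
  case (big_If_False m a b c2 t m' c1)
  from big_If_False.prems have J: "p < length P" "P ! p = JmpLess a b (p + 2 + code_size c2)"
    and C: "code_at P (p + 1) (compile (p + 1) c2)"
    and J2: "p + 1 + code_size c2 < length P" "P ! (p + 1 + code_size c2) = Jmp (p + 2 + code_size c2 + code_size c1)"
    by (auto simp: code_at_Cons code_at_append)
  have e1: "exec P 1 (p, m) = Some (p + 1, m)" using J big_If_False.hyps(1) by (simp add: step_jmpless)
  have e2: "exec P t (p + 1, m) = Some (p + 1 + code_size c2, m')" using big_If_False.IH[OF C] .
  have e3: "exec P 1 (p + 1 + code_size c2, m') = Some (p + 2 + code_size c2 + code_size c1, m')" using J2 by (simp add: step_jmp)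
  have "t + 2 = 1 + (t + 1)" by simp
  then show ?case using e1 e2 e3 by (simp only: exec_add) (simp add: algebra_simps)
qed

definition hoare :: "(mem \<Rightarrow> bool) \<Rightarrow> com \<Rightarrow> (mem \<Rightarrow> bool) \<Rightarrow> nat \<Rightarrow> bool" where
  "hoare P c Q T \<longleftrightarrow> (\<forall>m. P m \<longrightarrow> (\<exists>t m'. big_step c m t m' \<and> t \<le> T \<and> Q m'))"

lemma hoare_skip: "hoare P Skip P 0"
  unfolding hoare_def by (auto intro: big_step.intros)

lemma hoare_atom: "hoare (\<lambda>m. \<exists>m'. exec_instr i m = Some m' \<and> Q m') (Atom i) Q 1"
  unfolding hoare_def using big_Atom by fastforce

lemma hoare_seq: "hoare P c1 R T1 \<Longrightarrow> hoare R c2 Q T2 \<Longrightarrow> hoare P (Seq c1 c2) Q (T1 + T2)"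
  unfolding hoare_def by (meson add_mono big_Seq)

lemma hoare_conseq: "hoare P' c Q' T' \<Longrightarrow> (\<And>m. P m \<Longrightarrow> P' m) \<Longrightarrow> (\<And>m. Q' m \<Longrightarrow> Q m) \<Longrightarrow> T' \<le> T \<Longrightarrow> hoare P c Q T"
  unfolding hoare_def by (meson order_trans)

lemma hoare_if: "hoare (\<lambda>m. P m \<and> m a < m b) c1 Q T1 \<Longrightarrow> hoare (\<lambda>m. P m \<and> \<not> m a < m b) c2 Q T2
   \<Longrightarrow> hoare P (IfLess a b c1 c2) Q (max T1 T2 + 2)"
  unfolding hoare_def
proof (intro allI impI)
  fix m assume H1: "\<forall>m. P m \<and> m a < m b \<longrightarrow> (\<exists>t m'. big_step c1 m t m' \<and> t \<le> T1 \<and> Q m')"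
    and H2: "\<forall>m. P m \<and> \<not> m a < m b \<longrightarrow> (\<exists>t m'. big_step c2 m t m' \<and> t \<le> T2 \<and> Q m')" and P: "P m"
  show "\<exists>t m'. big_step (IfLess a b c1 c2) m t m' \<and> t \<le> max T1 T2 + 2 \<and> Q m'"
  proof (cases "m a < m b")
    case True
    then obtain t m' where "big_step c1 m t m'" "t \<le> T1" "Q m'" using H1 P by blast
    then show ?thesis using True big_If_True[of m a b c1 t m' c2] by (intro exI[of _ "t+1"] exI[of _ m']) auto
  next
    case False
    then obtain t m' where "big_step c2 m t m'" "t \<le> T2" "Q m'" using H2 P by blast
    then show ?thesis using False big_If_False[of m a b c2 t m' c1] by (intro exI[of _ "t+2"] exI[of _ m']) auto
  qed
qed

lemma hoare_while_count_from:
  assumes B: "\<And>i. i < N \<Longrightarrow> hoare (\<lambda>m. I i m \<and> m a < m b) c (I (Suc i)) Tb"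
    and C: "\<And>i m. i \<le> N \<Longrightarrow> I i m \<Longrightarrow> (m a < m b \<longleftrightarrow> i < N)"
  shows "i \<le> N \<Longrightarrow> hoare (I i) (While a b c) (I N) ((N - i) * (Tb + 2) + 2)"
proof (induction "N - i" arbitrary: i)
  case 0
  then have iN: "i = N" by simp
  show ?case unfolding hoare_def
  proof (intro allI impI)
    fix m assume "I i m"
    then have "\<not> m a < m b" using C[of i m] iN by auto
    then show "\<exists>t m'. big_step (While a b c) m t m' \<and> t \<le> (N - i) * (Tb + 2) + 2 \<and> I N m'"
      using \<open>I i m\<close> iN by (intro exI[of _ 2] exI[of _ m]) (auto intro: big_step.intros)
  qed
next
  case (Suc x)
  then have iN: "i < N" by simp
  have IH: "hoare (I (Suc i)) (While a b c) (I N) ((N - Suc i) * (Tb + 2) + 2)"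
    using Suc.hyps(1)[of "Suc i"] Suc.hyps(2) iN by auto
  show ?case unfolding hoare_def
  proof (intro allI impI)
    fix m assume Im: "I i m"
    then have lt: "m a < m b" using C[of i m] iN by auto
    obtain t1 m1 where 1: "big_step c m t1 m1" "t1 \<le> Tb" "I (Suc i) m1" using B[OF iN] Im lt unfolding hoare_def by blast
    obtain t2 m2 where 2: "big_step (While a b c) m1 t2 m2" "t2 \<le> (N - Suc i) * (Tb + 2) + 2" "I N m2"
      using IH 1(3) unfolding hoare_def by blast
    have "t1 + t2 + 2 \<le> (N - i) * (Tb + 2) + 2"
    proof -
      have "N - i = Suc (N - Suc i)" using iN by simp
      then have "(N - i) * (Tb + 2) = (Tb + 2) + (N - Suc i) * (Tb + 2)" by simp
      then show ?thesis using 1(2) 2(2) by linarith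
    qed
    then show "\<exists>t m'. big_step (While a b c) m t m' \<and> t \<le> (N - i) * (Tb + 2) + 2 \<and> I N m'"
      using big_While_True[OF lt 1(1) 2(1)] 2(3) by blast
  qed
qed

lemma hoare_while_count:
  assumes "\<And>i. i < N \<Longrightarrow> hoare (\<lambda>m. I i m \<and> m a < m b) c (I (Suc i)) Tb"
    and "\<And>i m. i \<le> N \<Longrightarrow> I i m \<Longrightarrow> (m a < m b \<longleftrightarrow> i < N)"
  shows "hoare (I 0) (While a b c) (I N) (N * (Tb + 2) + 2)"
proof -
  have "hoare (I 0) (While a b c) (I N) ((N - 0) * (Tb + 2) + 2)"
    by (rule hoare_while_count_from) (use assms in auto)
  then show ?thesis by simp
qed

lemma hoare_while_count_le:
  assumes "\<And>i. i < N \<Longrightarrow> hoare (\<lambda>m. I i m \<and> m a < m b) c (I (Suc i)) Tb"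
    and "\<And>i m. i \<le> N \<Longrightarrow> I i m \<Longrightarrow> (m a < m b \<longleftrightarrow> i < N)"
    and "N * (Tb + 2) + 2 \<le> T"
  shows "hoare (I 0) (While a b c) (I N) T"
proof -
  have "hoare (I 0) (While a b c) (I N) (N * (Tb + 2) + 2)"
    by (rule hoare_while_count) (use assms(1,2) in auto)
  then show ?thesis by (rule hoare_conseq) (use assms(3) in auto)
qed

lemma hoare_vacuous: "(\<And>m. \<not> P m) \<Longrightarrow> hoare P c Q T"
  unfolding hoare_def by blast

lemma hoare_pre_ex: "(\<And>x. hoare (P x) c Q T) \<Longrightarrow> hoare (\<lambda>m. \<exists>x. P x m) c Q T"
  unfolding hoare_def by blast

lemma hoare_pre_conj: "(R \<Longrightarrow> hoare P c Q T) \<Longrightarrow> hoare (\<lambda>m. R \<and> P m) c Q T"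
  unfolding hoare_def by blast

fun block :: "instr list \<Rightarrow> com" where
  "block [] = Skip"
| "block (i # is) = Seq (Atom i) (block is)"

fun exec_straight :: "instr list \<Rightarrow> mem \<Rightarrow> mem option" where
  "exec_straight [] m = Some m"
| "exec_straight (i # is) m = (case exec_instr i m of None \<Rightarrow> None | Some m' \<Rightarrow> exec_straight is m')"

lemma exec_straight_append: "exec_straight (xs @ ys) m = (case exec_straight xs m of None \<Rightarrow> None | Some m' \<Rightarrow> exec_straight ys m')"
  by (induction xs arbitrary: m) (auto split: option.splits)

lemma hoare_block: "hoare (\<lambda>m. \<exists>m'. exec_straight is m = Some m' \<and> Q m') (block is) Q (length is)"
proof (induction "is" arbitrary: Q)
  case Nil then show ?case by (simp add: hoare_skip)
next
  case (Cons i "is")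
  have "hoare (\<lambda>m. \<exists>m'. exec_instr i m = Some m' \<and> (\<exists>m''. exec_straight is m' = Some m'' \<and> Q m'')) (Atom i) (\<lambda>m. \<exists>m'. exec_straight is m = Some m' \<and> Q m') 1"
    by (rule hoare_atom)
  from hoare_seq[OF this Cons.IH] show ?case
    apply simp
    apply (erule hoare_conseq)
    by (auto split: option.splits)
qed

lemma hoare_blockI: "(\<And>m. P m \<Longrightarrow> \<exists>m'. exec_straight is m = Some m' \<and> Q m') \<Longrightarrow> length is \<le> T \<Longrightarrow> hoare P (block is) Q T"
  by (rule hoare_conseq[OF hoare_block]) auto

definition assemble :: "com \<Rightarrow> instr list" where
  "assemble c = compile 0 c @ [Halt]"

lemma hoare_halts_within:
  assumes "hoare P c Q T" "P m0"
  shows "\<exists>m. halts_within (assemble c) m0 T m \<and> Q m"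
proof -
  obtain t m' where 1: "big_step c m0 t m'" "t \<le> T" "Q m'" using assms unfolding hoare_def by blast
  have ca: "code_at (assemble c) 0 (compile 0 c)" unfolding assemble_def code_at_def by (auto simp: nth_append)
  have "exec (assemble c) t (0, m0) = Some (code_size c, m')" using big_step_exec[OF 1(1) ca] by simp
  moreover have "code_size c < length (assemble c)" "assemble c ! code_size c = Halt" unfolding assemble_def by (auto simp: nth_append)
  ultimately show ?thesis unfolding halts_within_def using 1 by blast
qed

section \<open>Memory layout\<close>

text \<open>Cells below 64 serve as registers.\<close>

definition input_base :: "nat \<Rightarrow> nat" where "input_base n = 64 * n * n"
definition input_size :: "nat \<Rightarrow> nat" where "input_size n = 2 + 3*n + n*n"
definition matrix_base :: "nat \<Rightarrow> nat" where "matrix_base n = input_base n + input_base n"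
definition row_addr :: "nat \<Rightarrow> nat \<Rightarrow> nat" where "row_addr n i = matrix_base n + i * (2*n)"
definition vectors_base :: "nat \<Rightarrow> nat" where "vectors_base n = matrix_base n + n * (2*n)"
definition vec_addr :: "nat \<Rightarrow> nat \<Rightarrow> nat" where "vec_addr n k = vectors_base n + k * n"
definition result_addr :: "nat \<Rightarrow> nat" where "result_addr n = vectors_base n + 6 * n"
definition w_row_addr :: "nat \<Rightarrow> nat \<Rightarrow> nat" where "w_row_addr n i = input_base n + 2 + 3*n + i*n"
definition v0_addr :: "nat \<Rightarrow> nat" where "v0_addr n = input_base n + 2"
definition w0_addr :: "nat \<Rightarrow> nat" where "w0_addr n = input_base n + 2 + n"
definition theta_addr :: "nat \<Rightarrow> nat" where "theta_addr n = input_base n + 2 + 2*n"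

lemma input_base_ge: "0 < n \<Longrightarrow> 64 \<le> input_base n"
proof -
  assume "0 < n" then have "1 \<le> n * n" by (simp add: Suc_le_eq one_le_mult_iff)
  then show ?thesis unfolding input_base_def by simp
qed

lemma input_size_le: "0 < n \<Longrightarrow> input_size n + 2 * n \<le> input_base n"
proof -
  assume n: "0 < n"
  have "n \<le> n * n" using n by simp
  moreover have "1 \<le> n * n" using n by (simp add: Suc_le_eq one_le_mult_iff)
  ultimately show ?thesis unfolding input_size_def input_base_def by linarith
qed

lemma mult_lt_bound: "(i::nat) < (n::nat) \<Longrightarrow> c < C \<Longrightarrow> i * C + c < n * C"
proof -
  assume "i < n" "c < C"
  then have "Suc i * C \<le> n * C" by (intro mult_right_mono) auto
  then show ?thesis using \<open>c < C\<close> by simp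
qed

lemma mult_idx_eq: "(i::nat) * C + c = i' * C + c' \<Longrightarrow> c < (C::nat) \<Longrightarrow> c' < C \<Longrightarrow> i = i' \<and> c = c'"
proof -
  assume e: "i * C + c = i' * C + c'" and c: "c < C" "c' < C"
  have "(i * C + c) div C = i" "(i' * C + c') div C = i'" using c by auto
  with e have "i = i'" by simp
  with e show ?thesis by simp
qed

lemma row_addr_lt_vectors_base: "i < n \<Longrightarrow> c < 2*n \<Longrightarrow> row_addr n i + c < vectors_base n"
  unfolding row_addr_def vectors_base_def using mult_lt_bound[of i n c "2*n"] by simp

lemma row_addr_ge: "0 < n \<Longrightarrow> input_size n + 2*n + input_base n \<le> row_addr n i"
  unfolding row_addr_def matrix_base_def using input_size_le[of n] by simp

lemma row_addr_inj: "row_addr n i + c = row_addr n i' + c' \<Longrightarrow> c < 2*n \<Longrightarrow> c' < 2*n \<Longrightarrow> i = i' \<and> c = c'"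
  unfolding row_addr_def using mult_idx_eq[of i "2*n" c i' c'] by simp

lemma vec_addr_inj: "vec_addr n k + j = vec_addr n k' + j' \<Longrightarrow> j < n \<Longrightarrow> j' < n \<Longrightarrow> k = k' \<and> j = j'"
  unfolding vec_addr_def using mult_idx_eq[of k n j k' j'] by simp

lemma vec_addr_ge: "vectors_base n \<le> vec_addr n k + j" unfolding vec_addr_def by simp
lemma vec_addr_lt_result_addr: "k < 6 \<Longrightarrow> j < n \<Longrightarrow> vec_addr n k + j < result_addr n"
proof -
  assume "k < 6" "j < n"
  then have "k * n + j < 6 * n" using mult_lt_bound[of k 6 j n] by (simp add: mult.commute)
  then show ?thesis unfolding vec_addr_def result_addr_def by simp
qed
lemma vectors_base_ge: "0 < n \<Longrightarrow> 2 * input_base n \<le> vectors_base n" unfolding vectors_base_def matrix_base_def by simp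

lemma input_base_ne_small[simp]: "0 < n \<Longrightarrow> r < 64 \<Longrightarrow> (input_base n = r) = False"
  using input_base_ge[of n] by auto

definition input_copied :: "nat \<Rightarrow> real \<Rightarrow> (nat \<Rightarrow> nat \<Rightarrow> real) \<Rightarrow> (nat \<Rightarrow> real) \<Rightarrow> (nat \<Rightarrow> real) \<Rightarrow> (nat \<Rightarrow> real) \<Rightarrow> mem \<Rightarrow> bool" where
  "input_copied n k w w0 v0 theta m \<longleftrightarrow> m 0 = real (input_base n) \<and> m 1 = real n \<and>
     (\<forall>a<input_size n. m (input_base n + a) = init_mem n k w w0 v0 theta a)"

definition rows_stored :: "nat \<Rightarrow> nat \<Rightarrow> mem \<Rightarrow> (nat \<Rightarrow> nat \<Rightarrow> real) \<Rightarrow> bool" where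
  "rows_stored n R m F \<longleftrightarrow> (\<forall>i<R. \<forall>c<2*n. m (row_addr n i + c) = F i c)"

definition vec_stored :: "nat \<Rightarrow> nat \<Rightarrow> nat \<Rightarrow> mem \<Rightarrow> (nat \<Rightarrow> real) \<Rightarrow> bool" where
  "vec_stored n k J m f \<longleftrightarrow> (\<forall>j<J. m (vec_addr n k + j) = f j)"

lemma input_copied_regs: "input_copied n k w w0 v0 theta m \<Longrightarrow> m 0 = real (input_base n) \<and> m 1 = real n"
  unfolding input_copied_def by simp

lemma input_copied_upd_reg[simp]: "0 < n \<Longrightarrow> 2 \<le> r \<Longrightarrow> r < 64 \<Longrightarrow> input_copied n k w w0 v0 theta (m(r := v)) = input_copied n k w w0 v0 theta m"
proof -
  assume a: "0 < n" "2 \<le> r" "r < 64"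
  have ne: "input_base n + x \<noteq> r" for x using input_base_ge[of n] a by linarith
  have r0: "0 \<noteq> r" "1 \<noteq> r" using a by auto
  show ?thesis unfolding input_copied_def using ne r0 by simp
qed

lemma input_copied_upd_hi: "0 < n \<Longrightarrow> input_base n + input_size n \<le> p \<Longrightarrow> input_copied n k w w0 v0 theta (m(p := v)) = input_copied n k w w0 v0 theta m"
proof -
  assume a: "0 < n" "input_base n + input_size n \<le> p"
  have ne: "x < input_size n \<Longrightarrow> input_base n + x \<noteq> p" for x using a by linarith
  have r0: "0 \<noteq> p" "1 \<noteq> p" using a input_base_ge[of n] by auto
  show ?thesis unfolding input_copied_def using ne r0 by simp
qed

lemma input_copied_upd_M[simp]: "0 < n \<Longrightarrow> input_copied n k w w0 v0 theta (m(row_addr n i + c := v)) = input_copied n k w w0 v0 theta m"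
  by (rule input_copied_upd_hi) (use row_addr_ge[of n i] in auto)

lemma input_copied_upd_vec_addr[simp]: "0 < n \<Longrightarrow> input_copied n k w w0 v0 theta (m(vec_addr n q + j := v)) = input_copied n k w w0 v0 theta m"
  by (rule input_copied_upd_hi) (use vec_addr_ge[of n q j] vectors_base_ge[of n] input_size_le[of n] in auto)

lemma input_copied_upd_result_addr[simp]: "0 < n \<Longrightarrow> input_copied n k w w0 v0 theta (m(result_addr n + j := v)) = input_copied n k w w0 v0 theta m"
  by (rule input_copied_upd_hi) (use vectors_base_ge[of n] input_size_le[of n] in \<open>auto simp: result_addr_def\<close>)

lemma rows_stored_upd_reg[simp]: "0 < n \<Longrightarrow> r < 64 \<Longrightarrow> rows_stored n R (m(r := v)) F = rows_stored n R m F"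
proof -
  assume a: "0 < n" "r < 64"
  have ne: "row_addr n ia + ca \<noteq> r" for ia ca
    using row_addr_ge[of n ia] input_base_ge[of n] a by linarith
  show ?thesis unfolding rows_stored_def using ne by auto
qed

lemma rows_stored_upd_hi: "vectors_base n \<le> p \<Longrightarrow> R \<le> n \<Longrightarrow> rows_stored n R (m(p := v)) F = rows_stored n R m F"
proof -
  assume a: "vectors_base n \<le> p" "R \<le> n"
  have ne: "ia < R \<Longrightarrow> ca < 2*n \<Longrightarrow> row_addr n ia + ca \<noteq> p" for ia ca
    using row_addr_lt_vectors_base[of ia n ca] a by linarith
  show ?thesis unfolding rows_stored_def using ne by simp
qed

lemma rows_stored_upd_vec_addr[simp]: "R \<le> n \<Longrightarrow> rows_stored n R (m(vec_addr n q + j := v)) F = rows_stored n R m F"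
  by (rule rows_stored_upd_hi) (auto simp: vec_addr_ge)

lemma rows_stored_upd_result_addr[simp]: "R \<le> n \<Longrightarrow> rows_stored n R (m(result_addr n + j := v)) F = rows_stored n R m F"
  by (rule rows_stored_upd_hi) (auto simp: result_addr_def)

lemma rows_stored_upd_row[simp]: "R \<le> i \<Longrightarrow> c < 2*n \<Longrightarrow> rows_stored n R (m(row_addr n i + c := v)) F = rows_stored n R m F"
proof -
  assume a: "R \<le> i" "c < 2*n"
  have ne: "row_addr n ia + ca \<noteq> row_addr n i + c" if "ia < R" "ca < 2*n" for ia ca
    using row_addr_inj[of n ia ca i c] a that by auto
  show ?thesis unfolding rows_stored_def using ne by auto
qed

lemma vec_stored_upd_reg[simp]: "0 < n \<Longrightarrow> r < 64 \<Longrightarrow> vec_stored n q J (m(r := v)) f = vec_stored n q J m f"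
proof -
  assume a: "0 < n" "r < 64"
  have ne: "vec_addr n q + ja \<noteq> r" for ja
    using vec_addr_ge[of n q ja] vectors_base_ge[of n] input_base_ge[of n] a by linarith
  show ?thesis unfolding vec_stored_def using ne by auto
qed

lemma vec_stored_upd_M[simp]: "i < n \<Longrightarrow> c < 2*n \<Longrightarrow> vec_stored n q J (m(row_addr n i + c := v)) f = vec_stored n q J m f"
proof -
  assume a: "i < n" "c < 2*n"
  have ne: "vec_addr n q + ja \<noteq> row_addr n i + c" for ja
    using vec_addr_ge[of n q ja] row_addr_lt_vectors_base[of i n c] a by linarith
  show ?thesis unfolding vec_stored_def using ne by auto
qed

lemma vec_stored_upd_vec_addr[simp]: "q \<noteq> q' \<Longrightarrow> j < n \<Longrightarrow> J \<le> n \<Longrightarrow> vec_stored n q J (m(vec_addr n q' + j := v)) f = vec_stored n q J m f"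
proof -
  assume a: "q \<noteq> q'" "j < n" "J \<le> n"
  have ne: "vec_addr n q + ja \<noteq> vec_addr n q' + j" if "ja < J" for ja
    using vec_addr_inj[of n q ja q' j] a that by auto
  show ?thesis unfolding vec_stored_def using ne by auto
qed

lemma vec_stored_upd_result_addr[simp]: "q < 6 \<Longrightarrow> J \<le> n \<Longrightarrow> vec_stored n q J (m(result_addr n + j := v)) f = vec_stored n q J m f"
proof -
  assume a: "q < 6" "J \<le> n"
  have ne: "vec_addr n q + ja \<noteq> result_addr n + j" if "ja < J" for ja
    using vec_addr_lt_result_addr[of q ja n] a that by auto
  show ?thesis unfolding vec_stored_def using ne by auto
qed

lemma vec_stored_snoc[simp]:
  "vec_stored n q J m f \<Longrightarrow> v = f J \<Longrightarrow> vec_stored n q (Suc J) (m(vec_addr n q + J := v)) f"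
  unfolding vec_stored_def by (auto simp: less_Suc_eq)

lemma rows_stored_snoc: "rows_stored n R m F \<Longrightarrow> (\<forall>c<2*n. m (row_addr n R + c) = F R c) \<Longrightarrow> rows_stored n (Suc R) m F"
  unfolding rows_stored_def
proof (intro allI impI)
  fix i c assume H: "\<forall>i<R. \<forall>c<2 * n. m (row_addr n i + c) = F i c" and H2: "\<forall>c<2*n. m (row_addr n R + c) = F R c"
    and i: "i < Suc R" and c: "c < 2 * n"
  show "m (row_addr n i + c) = F i c" using H H2 i c by (cases "i = R") auto
qed

lemma init_w: "i < n \<Longrightarrow> c < n \<Longrightarrow> init_mem n k w w0 v0 theta (2 + 3*n + i*n + c) = w i c"
proof -
  assume ic: "i < n" "c < n"
  have "i * n + c < n * n" using mult_lt_bound[OF ic] .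
  then show ?thesis using ic unfolding init_mem_def by auto
qed

lemma input_copied_w: "input_copied n k w w0 v0 theta m \<Longrightarrow> i < n \<Longrightarrow> c < n \<Longrightarrow> m (w_row_addr n i + c) = w i c"
proof -
  assume B: "input_copied n k w w0 v0 theta m" and ic: "i < n" "c < n"
  have lt: "2 + 3*n + i*n + c < input_size n" using mult_lt_bound[OF ic] unfolding input_size_def by simp
  have "m (input_base n + (2 + 3*n + i*n + c)) = w i c" using B lt init_w[OF ic] unfolding input_copied_def by auto
  then show ?thesis unfolding w_row_addr_def by (simp add: add.assoc)
qed

lemma input_copied_at: "input_copied n k w w0 v0 theta m \<Longrightarrow> a < input_size n \<Longrightarrow> m (input_base n + a) = init_mem n k w w0 v0 theta a"
  unfolding input_copied_def by auto

lemma input_copied_v0: "input_copied n k w w0 v0 theta m \<Longrightarrow> i < n \<Longrightarrow> m (v0_addr n + i) = v0 i"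
proof -
  assume B: "input_copied n k w w0 v0 theta m" and i: "i < n"
  have "m (input_base n + (2 + i)) = init_mem n k w w0 v0 theta (2 + i)" by (rule input_copied_at[OF B]) (use i in \<open>simp add: input_size_def\<close>)
  also have "\<dots> = v0 i" using i by (simp add: init_mem_def)
  finally show ?thesis by (simp add: v0_addr_def add.assoc)
qed

lemma input_copied_w0: "input_copied n k w w0 v0 theta m \<Longrightarrow> i < n \<Longrightarrow> m (w0_addr n + i) = w0 i"
proof -
  assume B: "input_copied n k w w0 v0 theta m" and i: "i < n"
  have "m (input_base n + (2 + n + i)) = init_mem n k w w0 v0 theta (2 + n + i)" by (rule input_copied_at[OF B]) (use i in \<open>simp add: input_size_def\<close>)
  also have "\<dots> = w0 i" using i by (simp add: init_mem_def)
  finally show ?thesis by (simp add: w0_addr_def add.assoc)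
qed

lemma input_copied_th: "input_copied n k w w0 v0 theta m \<Longrightarrow> i < n \<Longrightarrow> m (theta_addr n + i) = theta i"
proof -
  assume B: "input_copied n k w w0 v0 theta m" and i: "i < n"
  have "m (input_base n + (2 + 2*n + i)) = init_mem n k w w0 v0 theta (2 + 2*n + i)" by (rule input_copied_at[OF B]) (use i in \<open>simp add: input_size_def\<close>)
  also have "\<dots> = theta i" using i by (simp add: init_mem_def)
  finally show ?thesis by (simp add: theta_addr_def add.assoc)
qed

lemma input_copied_k: "input_copied n k w w0 v0 theta m \<Longrightarrow> m (input_base n + 1) = k"
proof -
  assume B: "input_copied n k w w0 v0 theta m"
  have "m (input_base n + 1) = init_mem n k w w0 v0 theta 1" by (rule input_copied_at[OF B]) (simp add: input_size_def)
  then show ?thesis by (simp add: init_mem_def)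
qed

lemma of_nat_folds:
  "real a + real b = real (a + b)" "real a * real b = real (a * b)" "real a + 1 = real (Suc a)"
  "real a + numeral x = real (a + numeral x)" "real a \<in> \<nat>" "nat \<lfloor>real a\<rfloor> = a"
  by simp_all
lemma input_size_ge6: "0 < n \<Longrightarrow> 6 \<le> input_size n"
proof -
  assume "0 < n" then have "1 \<le> n * n" by (simp add: Suc_le_eq one_le_mult_iff)
  then show ?thesis using \<open>0 < n\<close> unfolding input_size_def by linarith
qed

lemma w_row_addr_ne_reg[simp]: "0 < n \<Longrightarrow> r < 64 \<Longrightarrow> (w_row_addr n i + c = r) = False" "0 < n \<Longrightarrow> r < 64 \<Longrightarrow> (r = w_row_addr n i + c) = False"
  using input_base_ge[of n] unfolding w_row_addr_def by auto
lemma row_addr_ne_reg[simp]: "0 < n \<Longrightarrow> r < 64 \<Longrightarrow> (row_addr n i + c = r) = False" "0 < n \<Longrightarrow> r < 64 \<Longrightarrow> (r = row_addr n i + c) = False"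
  using row_addr_ge[of n i] input_base_ge[of n] by auto
lemma vec_addr_ne_reg[simp]: "0 < n \<Longrightarrow> r < 64 \<Longrightarrow> (vec_addr n k + c = r) = False" "0 < n \<Longrightarrow> r < 64 \<Longrightarrow> (r = vec_addr n k + c) = False"
  "0 < n \<Longrightarrow> r < 64 \<Longrightarrow> (vec_addr n k = r) = False" "0 < n \<Longrightarrow> r < 64 \<Longrightarrow> (r = vec_addr n k) = False"
  using vec_addr_ge[of n k c] vec_addr_ge[of n k 0] vectors_base_ge[of n] input_base_ge[of n] by auto
lemma base_ne_reg[simp]:
  "0 < n \<Longrightarrow> r < 64 \<Longrightarrow> (v0_addr n + c = r) = False" "0 < n \<Longrightarrow> r < 64 \<Longrightarrow> (r = v0_addr n + c) = False"
  "0 < n \<Longrightarrow> r < 64 \<Longrightarrow> (w0_addr n + c = r) = False" "0 < n \<Longrightarrow> r < 64 \<Longrightarrow> (r = w0_addr n + c) = False"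
  "0 < n \<Longrightarrow> r < 64 \<Longrightarrow> (theta_addr n + c = r) = False" "0 < n \<Longrightarrow> r < 64 \<Longrightarrow> (r = theta_addr n + c) = False"
  "0 < n \<Longrightarrow> r < 64 \<Longrightarrow> (result_addr n + c = r) = False" "0 < n \<Longrightarrow> r < 64 \<Longrightarrow> (r = result_addr n + c) = False"
  "0 < n \<Longrightarrow> r < 64 \<Longrightarrow> (input_base n + c = r) = False" "0 < n \<Longrightarrow> r < 64 \<Longrightarrow> (r = input_base n + c) = False"
  using input_base_ge[of n] vectors_base_ge[of n] unfolding v0_addr_def w0_addr_def theta_addr_def result_addr_def by auto
lemma addr_ne0[simp]: "0 < n \<Longrightarrow> (row_addr n i = 0) = False" "0 < n \<Longrightarrow> (w_row_addr n i = 0) = False"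
  "0 < n \<Longrightarrow> (vec_addr n k = 0) = False" "0 < n \<Longrightarrow> (v0_addr n = 0) = False" "0 < n \<Longrightarrow> (w0_addr n = 0) = False"
  "0 < n \<Longrightarrow> (theta_addr n = 0) = False" "0 < n \<Longrightarrow> (result_addr n = 0) = False" "0 < n \<Longrightarrow> (input_base n = 0) = False"
  using row_addr_ge[of n i] input_base_ge[of n] vec_addr_ge[of n k 0] vectors_base_ge[of n] by (auto simp: w_row_addr_def v0_addr_def w0_addr_def theta_addr_def result_addr_def)

lemma vec_addr_eq_vec_addr[simp]: "0 < n \<Longrightarrow> (vec_addr n k = vec_addr n k') = (k = k')"
  unfolding vec_addr_def by auto

lemma rows_stored_cell:
  assumes "rows_stored n R m F" "i < R" "c < 2*n" "v = F' i c"
    "\<And>r c'. r < R \<Longrightarrow> c' < 2*n \<Longrightarrow> \<not> (r = i \<and> c' = c) \<Longrightarrow> F' r c' = F r c'"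
  shows "rows_stored n R (m(row_addr n i + c := v)) F'"
  unfolding rows_stored_def
proof (intro allI impI)
  fix r c' assume rc: "r < R" "c' < 2*n"
  show "(m(row_addr n i + c := v)) (row_addr n r + c') = F' r c'"
  proof (cases "r = i \<and> c' = c")
    case True then show ?thesis using assms by simp
  next
    case False
    then have "row_addr n r + c' \<noteq> row_addr n i + c" using row_addr_inj[of n r c' i c] rc assms(3) by auto
    moreover have "F' r c' = F r c'" using assms(5)[OF rc False] .
    ultimately show ?thesis using assms(1) rc unfolding rows_stored_def by simp
  qed
qed

lemma rows_stored_ext: "rows_stored n R m F \<Longrightarrow> (\<And>r c. r < R \<Longrightarrow> c < 2*n \<Longrightarrow> F r c = F' r c) \<Longrightarrow> rows_stored n R m F'"
  unfolding rows_stored_def by simp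

lemma vec_stored_get: "vec_stored n q J m f \<Longrightarrow> j < J \<Longrightarrow> m (vec_addr n q + j) = f j"
  unfolding vec_stored_def by simp

lemma rows_stored_get: "rows_stored n R m F \<Longrightarrow> i < R \<Longrightarrow> c < 2*n \<Longrightarrow> m (row_addr n i + c) = F i c"
  unfolding rows_stored_def by simp

lemma vec_stored_0[simp]: "vec_stored n q 0 m f" unfolding vec_stored_def by simp
lemma rows_stored_0[simp]: "rows_stored n 0 m F" unfolding rows_stored_def by simp
lemma row_addr_Suc: "row_addr n i + 2 * n = row_addr n (Suc i)" unfolding row_addr_def by simp
lemma w_row_addr_Suc: "w_row_addr n i + n = w_row_addr n (Suc i)" unfolding w_row_addr_def by simp

lemma real_lt_2[simp]: "(real a < 2 * real b) = (a < 2 * b)"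
proof -
  have "2 * real b = real (2 * b)" by simp
  then show ?thesis by (simp only: of_nat_less_iff)
qed

section \<open>Relocating the input\<close>

text \<open>The input occupies the cells the program uses as registers. Using only cells 0 and 1, the
  prologue turns cell 0 (holding \<open>n\<close>) into \<open>A = 64 n\<^sup>2\<close> and stores \<open>k A\<close> at address \<open>A\<close>; if
  \<open>n > 0\<close>, cells 2--31 are then copied to \<open>A + 2, \<dots>, A + 31\<close>, \<open>n\<close> is recovered from \<open>A\<close> by
  counting, \<open>k\<close> as \<open>k A / A\<close>, and the remaining input cells are copied.\<close>

lemma of_nat_mult_numeral_fold: "real a * numeral x = real (a * numeral x)" by simp

definition prologue :: "instr list" where
  "prologue = [Add 0 0 0, Add 0 0 0, Add 0 0 0, Mul 0 0 0, Mul 1 1 0, Store 1 0, Const 1 1]"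

definition after_prologue :: "nat \<Rightarrow> real \<Rightarrow> (nat \<Rightarrow> nat \<Rightarrow> real) \<Rightarrow> (nat \<Rightarrow> real) \<Rightarrow> (nat \<Rightarrow> real) \<Rightarrow> (nat \<Rightarrow> real) \<Rightarrow> mem \<Rightarrow> bool" where
  "after_prologue n k w w0 v0 theta m \<longleftrightarrow> m 0 = real (input_base n) \<and> m 1 = 1 \<and> (\<forall>x. 2 \<le> x \<longrightarrow> x \<noteq> input_base n \<longrightarrow> m x = init_mem n k w w0 v0 theta x) \<and>
   m (input_base n) = k * real (input_base n)"

lemma input_base_sq: "(n + n + (n + n) + (n + n + (n + n))) * (n + n + (n + n) + (n + n + (n + n))) = input_base n"
  unfolding input_base_def by (simp add: algebra_simps)

lemma prologue_hoare: "hoare (\<lambda>m. m = init_mem n k w w0 v0 theta) (block prologue) (after_prologue n k w w0 v0 theta) 7"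
  unfolding prologue_def
proof (rule hoare_blockI)
  fix m assume m: "m = init_mem n k w w0 v0 theta"
  have m0: "m 0 = real n" and m1: "m 1 = k" unfolding m init_mem_def by simp_all
  show "\<exists>m'. exec_straight [Add 0 0 0, Add 0 0 0, Add 0 0 0, Mul 0 0 0, Mul 1 1 0, Store 1 0, Const 1 1] m = Some m' \<and> after_prologue n k w w0 v0 theta m'"
  proof (cases "n = 0")
    case True
    then show ?thesis using m0 m1 by (simp del: of_nat_add of_nat_mult of_nat_Suc add: of_nat_folds after_prologue_def input_base_def m)
  next
    case False
    then have A: "64 \<le> input_base n" using input_base_ge by auto
    have ne: "(input_base n = 0) = False" "(input_base n = 1) = False" "(0 = input_base n) = False" "(1 = input_base n) = False" using A by auto
    have X: "\<forall>x. 2 \<le> x \<longrightarrow> x \<noteq> input_base n \<longrightarrow> (m(0 := a0, 1 := a1, input_base n := a2, 1 := a3)) x = init_mem n k w w0 v0 theta x"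
      for a0 a1 a2 a3 unfolding m by auto
    show ?thesis using m0 m1 A X by (simp del: of_nat_add of_nat_mult of_nat_Suc add: of_nat_folds after_prologue_def input_base_sq ne)
  qed
qed simp

definition save_cell :: "nat \<Rightarrow> instr list" where
  "save_cell a = [Const 1 (int a), Add 1 1 0, Store a 1]"
definition save_low_cells :: "instr list" where
  "save_low_cells = concat (map save_cell [2..<32])"

lemma exec_straight_save_cell: assumes "m 0 = real A" "2 \<le> a" "a < 32" "32 \<le> A"
  shows "exec_straight (save_cell a) m = Some (m(1 := real (a + A), a + A := m a))"
  using assms by (simp del: of_nat_add of_nat_mult of_nat_Suc add: of_nat_folds save_cell_def)

definition saved_upto :: "nat \<Rightarrow> mem \<Rightarrow> nat \<Rightarrow> mem \<Rightarrow> bool" where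
  "saved_upto A mb j m \<longleftrightarrow> m 0 = real A \<and> (\<forall>x. 2 \<le> x \<longrightarrow> x < 32 \<longrightarrow> m x = mb x) \<and>
   (\<forall>x. 32 \<le> x \<longrightarrow> \<not> (A + 2 \<le> x \<and> x < A + j) \<longrightarrow> m x = mb x) \<and> (\<forall>a. 2 \<le> a \<longrightarrow> a < j \<longrightarrow> m (A + a) = mb a)"

lemma exec_straight_save_cells: assumes "saved_upto A mb 2 m" "32 \<le> A" "2 \<le> j" "j \<le> 32"
  shows "\<exists>m'. exec_straight (concat (map save_cell [2..<j])) m = Some m' \<and> saved_upto A mb j m'"
  using assms(3,4)
proof (induction j rule: dec_induct)
  case base then show ?case using assms(1) by simp
next
  case (step j)
  then obtain m' where m': "exec_straight (concat (map save_cell [2..<j])) m = Some m'" "saved_upto A mb j m'" by auto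
  have e: "[2..<Suc j] = [2..<j] @ [j]" using step by simp
  have S: "exec_straight (save_cell j) m' = Some (m'(1 := real (j + A), j + A := m' j))"
    by (rule exec_straight_save_cell) (use m'(2) step assms(2) in \<open>auto simp: saved_upto_def\<close>)
  have "saved_upto A mb (Suc j) (m'(1 := real (j + A), j + A := m' j))"
    using m'(2) step assms(2) unfolding saved_upto_def
    by (auto simp: less_Suc_eq add.commute)
  then show ?case using m' S e by (simp add: exec_straight_append)
qed

lemma save_low_cells_hoare: assumes n: "0 < n"
  shows "hoare (\<lambda>m. after_prologue n k w w0 v0 theta m \<and> \<not> m 0 < m 1) (block save_low_cells)
    (\<lambda>m. saved_upto (input_base n) (\<lambda>x. if x = input_base n then k * real (input_base n) else init_mem n k w w0 v0 theta x) 32 m) (length save_low_cells)"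
proof (rule hoare_blockI)
  fix m assume H: "after_prologue n k w w0 v0 theta m \<and> \<not> m 0 < m 1"
  have A: "64 \<le> input_base n" using input_base_ge[OF n] .
  have S2: "saved_upto (input_base n) m 2 m" unfolding saved_upto_def using H by (auto simp: after_prologue_def)
  obtain m' where m': "exec_straight (concat (map save_cell [2..<32])) m = Some m'" "saved_upto (input_base n) m 32 m'"
    using exec_straight_save_cells[OF S2, of 32] A by auto
  have "saved_upto (input_base n) (\<lambda>x. if x = input_base n then k * real (input_base n) else init_mem n k w w0 v0 theta x) 32 m'"
    using m'(2) H A unfolding saved_upto_def after_prologue_def by auto
  then show "\<exists>m'. exec_straight save_low_cells m = Some m' \<and> saved_upto (input_base n) (\<lambda>x. if x = input_base n then k * real (input_base n) else init_mem n k w w0 v0 theta x) 32 m'"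
    using m'(1) unfolding save_low_cells_def by blast
qed simp

definition low_cells_saved :: "nat \<Rightarrow> real \<Rightarrow> (nat \<Rightarrow> nat \<Rightarrow> real) \<Rightarrow> (nat \<Rightarrow> real) \<Rightarrow> (nat \<Rightarrow> real) \<Rightarrow> (nat \<Rightarrow> real) \<Rightarrow> mem \<Rightarrow> bool" where
  "low_cells_saved n k w w0 v0 theta m \<longleftrightarrow> m 0 = real (input_base n) \<and> (\<forall>x. 32 \<le> x \<longrightarrow> x < input_base n \<longrightarrow> m x = init_mem n k w w0 v0 theta x) \<and>
   m (input_base n) = k * real (input_base n) \<and> (\<forall>a. 2 \<le> a \<longrightarrow> a < 32 \<longrightarrow> m (input_base n + a) = init_mem n k w w0 v0 theta a)"

lemma low_cells_saved_reg[simp]: "0 < n \<Longrightarrow> 0 < r \<Longrightarrow> r < 32 \<Longrightarrow> low_cells_saved n k w w0 v0 theta (m(r := v)) = low_cells_saved n k w w0 v0 theta m"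
proof -
  assume a: "0 < n" "0 < r" "r < 32"
  have A: "64 \<le> input_base n" using input_base_ge[OF a(1)] .
  have ne: "input_base n + x \<noteq> r" "input_base n \<noteq> r" "0 \<noteq> r" for x :: nat using A a by auto
  have ne2: "32 \<le> x \<Longrightarrow> x \<noteq> r" for x :: nat using a by auto
  show ?thesis unfolding low_cells_saved_def using ne ne2 by auto
qed

lemma saved_upto_low_cells_saved: "0 < n \<Longrightarrow> saved_upto (input_base n) (\<lambda>x. if x = input_base n then k * real (input_base n) else init_mem n k w w0 v0 theta x) 32 m \<Longrightarrow> low_cells_saved n k w w0 v0 theta m"
proof -
  assume n: "0 < n" and S: "saved_upto (input_base n) (\<lambda>x. if x = input_base n then k * real (input_base n) else init_mem n k w w0 v0 theta x) 32 m"
  have A: "64 \<le> input_base n" using input_base_ge[OF n] .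
  show ?thesis unfolding low_cells_saved_def
  proof (intro conjI allI impI)
    show "m 0 = real (input_base n)" using S by (simp add: saved_upto_def)
  next
    fix x :: nat assume "32 \<le> x" "x < input_base n" then show "m x = init_mem n k w w0 v0 theta x" using S by (auto simp: saved_upto_def)
  next
    show "m (input_base n) = k * real (input_base n)" using S A by (auto simp: saved_upto_def)
  next
    fix a :: nat assume "2 \<le> a" "a < 32" then show "m (input_base n + a) = init_mem n k w w0 v0 theta a" using S A by (auto simp: saved_upto_def)
  qed
qed

definition root_init :: "instr list" where
  "root_init = [Const 2 0, Const 3 0, Const 4 1, Const 5 64]"
definition root_step :: "instr list" where
  "root_step = [Add 2 2 4, Mul 3 2 2, Mul 3 3 5]"

definition root_inv :: "nat \<Rightarrow> real \<Rightarrow> (nat \<Rightarrow> nat \<Rightarrow> real) \<Rightarrow> (nat \<Rightarrow> real) \<Rightarrow> (nat \<Rightarrow> real) \<Rightarrow> (nat \<Rightarrow> real) \<Rightarrow> nat \<Rightarrow> mem \<Rightarrow> bool" where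
  "root_inv n k w w0 v0 theta i m \<longleftrightarrow> low_cells_saved n k w w0 v0 theta m \<and> m 2 = real i \<and> m 3 = real (64 * i * i) \<and> m 4 = 1 \<and> m 5 = 64"

lemma real_square_less_iff: "(real i * real i < real n * real n) = (i < n)"
  using power_mono_iff[of "real n" "real i" 2] by (auto simp: power2_eq_square not_le[symmetric])

lemma root_init_hoare: "0 < n \<Longrightarrow> hoare (low_cells_saved n k w w0 v0 theta) (block root_init) (root_inv n k w w0 v0 theta 0) 4"
  unfolding root_init_def by (rule hoare_blockI) (auto simp: root_inv_def)

lemma root_step_hoare: "0 < n \<Longrightarrow> hoare (\<lambda>m. root_inv n k w w0 v0 theta i m \<and> m 3 < m 0) (block root_step) (root_inv n k w w0 v0 theta (Suc i)) 3"
  unfolding root_step_def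
  by (rule hoare_blockI) (auto simp del: of_nat_add of_nat_mult of_nat_Suc simp add: of_nat_folds of_nat_mult_numeral_fold root_inv_def algebra_simps)

lemma root_loop_hoare: "0 < n \<Longrightarrow> hoare (root_inv n k w w0 v0 theta 0) (While 3 0 (block root_step)) (root_inv n k w w0 v0 theta n) (n * (3 + 2) + 2)"
  apply (rule hoare_while_count)
   apply (rule root_step_hoare; simp)
  apply (simp add: root_inv_def low_cells_saved_def input_base_def mult.assoc real_square_less_iff)
  done

definition restore_nk :: "instr list" where
  "restore_nk = [Const 6 0, Add 1 2 6, Load 3 0, Div 3 3 0, Const 4 1, Add 4 0 4, Store 3 4, Store 1 0]"

definition nk_restored :: "nat \<Rightarrow> real \<Rightarrow> (nat \<Rightarrow> nat \<Rightarrow> real) \<Rightarrow> (nat \<Rightarrow> real) \<Rightarrow> (nat \<Rightarrow> real) \<Rightarrow> (nat \<Rightarrow> real) \<Rightarrow> mem \<Rightarrow> bool" where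
  "nk_restored n k w w0 v0 theta m \<longleftrightarrow> m 0 = real (input_base n) \<and> m 1 = real n \<and> (\<forall>x. 32 \<le> x \<longrightarrow> x < input_base n \<longrightarrow> m x = init_mem n k w w0 v0 theta x) \<and>
   (\<forall>a<32. m (input_base n + a) = init_mem n k w w0 v0 theta a)"

lemma restore_nk_hoare: assumes n: "0 < n" shows "hoare (root_inv n k w w0 v0 theta n) (block restore_nk) (nk_restored n k w w0 v0 theta) 8"
  unfolding restore_nk_def
proof (rule hoare_blockI)
  fix m assume H: "root_inv n k w w0 v0 theta n m"
  have A: "64 \<le> input_base n" using input_base_ge[OF n] .
  then have id_minus: "real (input_base n) \<noteq> 0" by simp
  have D: "low_cells_saved n k w w0 v0 theta m" and r: "m 2 = real n" using H by (auto simp: root_inv_def)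
  let ?M = "m(6 := 0, 1 := real n, 3 := k, 4 := real (Suc (input_base n)), Suc (input_base n) := k, input_base n := real n)"
  have E: "nk_restored n k w w0 v0 theta ?M"
    unfolding nk_restored_def
  proof (intro conjI allI impI)
    show "?M 0 = real (input_base n)" using D A by (simp add: low_cells_saved_def)
    show "?M 1 = real n" using A by simp
  next
    fix x assume x: "32 \<le> x" "x < input_base n"
    then show "?M x = init_mem n k w w0 v0 theta x" using D by (simp add: low_cells_saved_def)
  next
    fix a assume a: "a < (32::nat)"
    show "?M (input_base n + a) = init_mem n k w w0 v0 theta a"
    proof (cases "a = 0 \<or> a = 1")
      case True then show ?thesis by (auto simp: init_mem_def)
    next
      case False then show ?thesis using D a n by (simp add: low_cells_saved_def)
    qed
  qed
  have c: "k * real (input_base n) / real (input_base n) = k" using id_minus by simp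
  show "\<exists>m'. exec_straight [Const 6 0, Add 1 2 6, Load 3 0, Div 3 3 0, Const 4 1, Add 4 0 4, Store 3 4, Store 1 0] m = Some m' \<and> nk_restored n k w w0 v0 theta m'"
    using D r n id_minus E c by (simp del: of_nat_add of_nat_mult of_nat_Suc add: of_nat_folds low_cells_saved_def)
qed simp

definition copy_init :: "instr list" where
  "copy_init = [Mul 3 1 1, Add 3 3 1, Add 3 3 1, Add 3 3 1, Const 4 2, Add 3 3 4, Const 2 32, Const 4 1]"
definition copy_step :: "instr list" where
  "copy_step = [Load 6 2, Add 5 0 2, Store 6 5, Add 2 2 4]"

definition copied_upto :: "nat \<Rightarrow> real \<Rightarrow> (nat \<Rightarrow> nat \<Rightarrow> real) \<Rightarrow> (nat \<Rightarrow> real) \<Rightarrow> (nat \<Rightarrow> real) \<Rightarrow> (nat \<Rightarrow> real) \<Rightarrow> nat \<Rightarrow> mem \<Rightarrow> bool" where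
  "copied_upto n k w w0 v0 theta t m \<longleftrightarrow> m 0 = real (input_base n) \<and> m 1 = real n \<and> m 2 = real (32 + t) \<and> m 3 = real (input_size n) \<and> m 4 = 1 \<and>
   (\<forall>x. 32 \<le> x \<longrightarrow> x < input_base n \<longrightarrow> m x = init_mem n k w w0 v0 theta x) \<and> (\<forall>a < 32 + t. m (input_base n + a) = init_mem n k w w0 v0 theta a)"

lemma copy_init_hoare: assumes n: "0 < n" shows "hoare (nk_restored n k w w0 v0 theta) (block copy_init) (copied_upto n k w w0 v0 theta 0) 8"
  unfolding copy_init_def
proof (rule hoare_blockI)
  fix m assume H: "nk_restored n k w w0 v0 theta m"
  have A: "64 \<le> input_base n" using input_base_ge[OF n] .
  have ne: "input_base n + x \<noteq> r" if "r < 32" for x r :: nat using A that by auto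
  have ne2: "32 \<le> x \<Longrightarrow> x \<noteq> r" if "r < 32" for x r :: nat using that by auto
  show "\<exists>m'. exec_straight [Mul 3 1 1, Add 3 3 1, Add 3 3 1, Add 3 3 1, Const 4 2, Add 3 3 4, Const 2 32, Const 4 1] m = Some m' \<and> copied_upto n k w w0 v0 theta 0 m'"
    using H n A ne ne2 by (simp del: of_nat_add of_nat_mult of_nat_Suc add: of_nat_folds nk_restored_def copied_upto_def input_size_def)
qed simp

lemma copy_step_hoare: assumes n: "0 < n" and t: "t < input_size n - 32"
  shows "hoare (\<lambda>m. copied_upto n k w w0 v0 theta t m \<and> m 2 < m 3) (block copy_step) (copied_upto n k w w0 v0 theta (Suc t)) 4"
  unfolding copy_step_def
proof (rule hoare_blockI)
  fix m assume H: "copied_upto n k w w0 v0 theta t m \<and> m 2 < m 3"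
  have A: "64 \<le> input_base n" using input_base_ge[OF n] .
  have L: "input_size n + 2 * n \<le> input_base n" using input_size_le[OF n] .
  have tl: "32 + t < input_size n" using t by simp
  have X: "\<forall>x. 32 \<le> x \<longrightarrow> x < input_base n \<longrightarrow> m x = init_mem n k w w0 v0 theta x" and Y: "\<forall>a < 32 + t. m (input_base n + a) = init_mem n k w w0 v0 theta a"
    using H by (auto simp: copied_upto_def)
  have g: "m (32 + t) = init_mem n k w w0 v0 theta (32 + t)" using X tl L by auto
  let ?M = "m(6 := init_mem n k w w0 v0 theta (32 + t), 5 := real (input_base n + (32 + t)), input_base n + (32 + t) := init_mem n k w w0 v0 theta (32 + t),
     2 := real (Suc (32 + t)))"
  have C: "copied_upto n k w w0 v0 theta (Suc t) ?M"
    unfolding copied_upto_def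
  proof (intro conjI allI impI)
    show "?M 0 = real (input_base n)" "?M 1 = real n" "?M 3 = real (input_size n)" "?M 4 = 1" using H A by (auto simp: copied_upto_def)
    show "?M 2 = real (32 + Suc t)" by simp
  next
    fix x assume x: "32 \<le> x" "x < input_base n"
    then show "?M x = init_mem n k w w0 v0 theta x" using X by auto
  next
    fix a assume a: "a < 32 + Suc t"
    show "?M (input_base n + a) = init_mem n k w w0 v0 theta a"
      using Y a A by (cases "a = 32 + t") auto
  qed
  show "\<exists>m'. exec_straight [Load 6 2, Add 5 0 2, Store 6 5, Add 2 2 4] m = Some m' \<and> copied_upto n k w w0 v0 theta (Suc t) m'"
    using H n A g C by (simp del: of_nat_add of_nat_mult of_nat_Suc add: of_nat_folds copied_upto_def)
qed simp

lemma copy_loop_hoare: assumes n: "0 < n"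
  shows "hoare (copied_upto n k w w0 v0 theta 0) (While 2 3 (block copy_step)) (copied_upto n k w w0 v0 theta (input_size n - 32)) ((input_size n - 32) * (4 + 2) + 2)"
  apply (rule hoare_while_count)
   apply (rule copy_step_hoare[OF n]; simp)
  apply (auto simp: copied_upto_def)
  done

lemma copied_upto_input_copied: assumes n: "0 < n" shows "copied_upto n k w w0 v0 theta (input_size n - 32) m \<Longrightarrow> input_copied n k w w0 v0 theta m"
  unfolding copied_upto_def input_copied_def by auto

definition relocate_prog :: "com" where
  "relocate_prog = Seq (block save_low_cells) (Seq (block root_init) (Seq (While 3 0 (block root_step)) (Seq (block restore_nk) (Seq (block copy_init) (While 2 3 (block copy_step))))))"

lemma length_save_low_cells: "length save_low_cells = 90"
  by (simp add: save_low_cells_def save_cell_def)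

lemma relocate_prog_hoare: assumes n: "0 < n"
  shows "hoare (\<lambda>m. after_prologue n k w w0 v0 theta m \<and> \<not> m 0 < m 1) relocate_prog (input_copied n k w w0 v0 theta)
    (6 * n\<^sup>2 + 23 * n + 114)"
proof -
  have s: "hoare (\<lambda>m. after_prologue n k w w0 v0 theta m \<and> \<not> m 0 < m 1) (block save_low_cells) (low_cells_saved n k w w0 v0 theta) (length save_low_cells)"
    by (rule hoare_conseq[OF save_low_cells_hoare[OF n]]) (use saved_upto_low_cells_saved[OF n] in auto)
  have c: "hoare (copied_upto n k w w0 v0 theta 0) (While 2 3 (block copy_step)) (input_copied n k w w0 v0 theta) ((input_size n - 32) * (4 + 2) + 2)"
    by (rule hoare_conseq[OF copy_loop_hoare[OF n]]) (use copied_upto_input_copied[OF n] in auto)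
  have "input_size n - 32 \<le> n\<^sup>2 + 3 * n"
    unfolding input_size_def by (simp add: power2_eq_square)
  then show ?thesis unfolding relocate_prog_def
    by (intro hoare_conseq[OF hoare_seq[OF s hoare_seq[OF root_init_hoare[OF n] hoare_seq[OF root_loop_hoare[OF n]
      hoare_seq[OF restore_nk_hoare[OF n] hoare_seq[OF copy_init_hoare[OF n] c]]]]]])
      (simp_all add: length_save_low_cells power2_eq_square)
qed

section \<open>Phase 1: the augmented matrix\<close>

definition p1a :: "instr list" where
  "p1a = [Const 2 0, Const 5 1, Add 6 1 1, Add 7 0 0, Const 12 2, Add 8 0 12, Add 8 8 1, Add 8 8 1, Add 8 8 1, Const 11 0]"
definition p1inner :: "instr list" where
  "p1inner = [Add 9 8 3, Load 10 9, Sub 10 11 10, Add 9 7 3, Store 10 9, Add 13 1 3, Add 9 7 13, Store 11 9, Add 3 3 5]"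
definition p1post :: "instr list" where
  "p1post = [Add 9 7 2, Load 10 9, Add 10 10 5, Add 13 1 2, Add 14 7 13, Store 10 9, Store 5 14, Add 7 7 6, Add 8 8 1, Add 2 2 5]"
definition augment_prog :: "com" where
  "augment_prog = Seq (block p1a) (While 2 1 (Seq (block [Const 3 0]) (Seq (While 3 1 (block p1inner)) (block p1post))))"

definition p1row :: "nat \<Rightarrow> nat \<Rightarrow> nat \<Rightarrow> mem \<Rightarrow> (nat \<Rightarrow> nat \<Rightarrow> real) \<Rightarrow> bool" where
  "p1row n i c m w \<longleftrightarrow> (\<forall>c'<c. m (row_addr n i + c') = - w i c' \<and> m (row_addr n i + (n + c')) = 0)"

lemma p1row_reg[simp]: "0 < n \<Longrightarrow> r < 64 \<Longrightarrow> p1row n i c (m(r := v)) w = p1row n i c m w"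
  unfolding p1row_def by simp

lemma p1row_Suc[simp]: "p1row n i (Suc c) m w \<longleftrightarrow> p1row n i c m w \<and> m (row_addr n i + c) = - w i c \<and> m (row_addr n i + (n + c)) = 0"
  unfolding p1row_def by (auto simp: less_Suc_eq)

lemma p1row_0[simp]: "p1row n i 0 m w" unfolding p1row_def by simp

lemma p1row_upd: "(c \<le> x \<and> x < n) \<or> n + c \<le> x \<Longrightarrow> p1row n i c (m(row_addr n i + x := v)) w = p1row n i c m w"
proof -
  assume a: "(c \<le> x \<and> x < n) \<or> n + c \<le> x"
  have ne: "c' < c \<Longrightarrow> row_addr n i + c' \<noteq> row_addr n i + x \<and> row_addr n i + (n + c') \<noteq> row_addr n i + x" for c'
    using a by auto
  show ?thesis unfolding p1row_def using ne by simp
qed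

lemma p1row_upd1[simp]: "c < n \<Longrightarrow> p1row n i c (m(row_addr n i + c := v)) w = p1row n i c m w" "p1row n i c (m(row_addr n i + (n + c) := v)) w = p1row n i c m w"
  by (rule p1row_upd, simp)+

definition I1 :: "nat \<Rightarrow> real \<Rightarrow> (nat \<Rightarrow> nat \<Rightarrow> real) \<Rightarrow> (nat \<Rightarrow> real) \<Rightarrow> (nat \<Rightarrow> real) \<Rightarrow> (nat \<Rightarrow> real) \<Rightarrow> nat \<Rightarrow> mem \<Rightarrow> bool" where
  "I1 n k w w0 v0 theta i m \<longleftrightarrow> input_copied n k w w0 v0 theta m \<and> m 0 = real (input_base n) \<and> m 1 = real n \<and> m 2 = real i \<and> m 5 = 1 \<and>
   m 6 = real (2*n) \<and> m 7 = real (row_addr n i) \<and> m 8 = real (w_row_addr n i) \<and> m 11 = 0 \<and> rows_stored n i m (augmented n w)"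

definition J1 :: "nat \<Rightarrow> real \<Rightarrow> (nat \<Rightarrow> nat \<Rightarrow> real) \<Rightarrow> (nat \<Rightarrow> real) \<Rightarrow> (nat \<Rightarrow> real) \<Rightarrow> (nat \<Rightarrow> real) \<Rightarrow> nat \<Rightarrow> nat \<Rightarrow> mem \<Rightarrow> bool" where
  "J1 n k w w0 v0 theta i c m \<longleftrightarrow> I1 n k w w0 v0 theta i m \<and> m 3 = real c \<and> p1row n i c m w"

lemma p1_inner: "0 < n \<Longrightarrow> i < n \<Longrightarrow> hoare (\<lambda>m. J1 n k w w0 v0 theta i c m \<and> m 3 < m 1)
  (block p1inner) (J1 n k w w0 v0 theta i (Suc c)) 9"
  unfolding p1inner_def
proof (rule hoare_blockI)
  fix m assume n: "0 < n" and i: "i < n" and H: "J1 n k w w0 v0 theta i c m \<and> m 3 < m 1"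
  then have B: "input_copied n k w w0 v0 theta m" and c: "c < n" by (auto simp: J1_def I1_def)
  show "\<exists>m'. exec_straight [Add 9 8 3, Load 10 9, Sub 10 11 10, Add 9 7 3, Store 10 9, Add 13 1 3, Add 9 7 13, Store 11 9, Add 3 3 5] m = Some m' \<and> J1 n k w w0 v0 theta i (Suc c) m'"
    using H n i c by (simp del: of_nat_add of_nat_mult of_nat_Suc add: of_nat_folds J1_def I1_def input_copied_w[OF B])
qed simp

lemma p1_innerloop: "0 < n \<Longrightarrow> i < n \<Longrightarrow> hoare (J1 n k w w0 v0 theta i 0) (While 3 1 (block p1inner)) (J1 n k w w0 v0 theta i n) (n * 11 + 2)"
  apply (rule hoare_while_count_le[where Tb = 9])
    apply (rule p1_inner; simp)
   apply (simp add: J1_def I1_def)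
  apply simp
  done

lemma p1_prerow: "hoare (\<lambda>m. I1 n k w w0 v0 theta i m \<and> m 2 < m 1) (block [Const 3 0]) (J1 n k w w0 v0 theta i 0) 1"
  by (rule hoare_blockI) (auto simp: J1_def I1_def)

definition rowok :: "nat \<Rightarrow> nat \<Rightarrow> mem \<Rightarrow> (nat \<Rightarrow> nat \<Rightarrow> real) \<Rightarrow> bool" where
  "rowok n i m w \<longleftrightarrow> (\<forall>c<2*n. m (row_addr n i + c) = augmented n w i c)"

lemma rowok_fin:
  assumes "p1row n i n M w" "i < n" "v = 1 - w i i"
  shows "rowok n i (M(row_addr n i + i := v, row_addr n i + (n + i) := 1)) w"
  unfolding rowok_def
proof (intro allI impI)
  fix c assume c: "c < 2*n"
  show "(M(row_addr n i + i := v, row_addr n i + (n + i) := 1)) (row_addr n i + c) = augmented n w i c"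
  proof (cases "c < n")
    case True
    then have "M (row_addr n i + c) = - w i c" using assms(1) unfolding p1row_def by auto
    then show ?thesis using True assms(2,3) by (auto simp: augmented_def id_minus_def)
  next
    case False
    then obtain c' where c': "c = n + c'" "c' < n" using c by (metis add_less_cancel_left le_add_diff_inverse not_less mult_2)
    then have "M (row_addr n i + (n + c')) = 0" using assms(1) unfolding p1row_def by auto
    then show ?thesis using c' assms(2,3) by (auto simp: augmented_def id_minus_def)
  qed
qed

lemma p1_post: "0 < n \<Longrightarrow> i < n \<Longrightarrow> hoare (J1 n k w w0 v0 theta i n) (block p1post) (I1 n k w w0 v0 theta (Suc i)) 10"
  unfolding p1post_def
proof (rule hoare_blockI)
  fix m assume n: "0 < n" and i: "i < n" and H: "J1 n k w w0 v0 theta i n m"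
  then have P: "p1row n i n m w" and R: "rows_stored n i m (augmented n w)" by (auto simp: J1_def I1_def)
  have g: "m (row_addr n i + i) = - w i i" using P i unfolding p1row_def by auto
  let ?M = "m(9 := real (row_addr n i + i), 10 := - w i i + 1, 13 := real (n + i), 14 := real (row_addr n i + (n + i)))"
  have rs: "rows_stored n (Suc i) (?M(row_addr n i + i := - w i i + 1, row_addr n i + (n + i) := 1)) (augmented n w)"
  proof (rule rows_stored_snoc)
    show "rows_stored n i (?M(row_addr n i + i := - w i i + 1, row_addr n i + (n + i) := 1)) (augmented n w)" using R n i by simp
    have "rowok n i (?M(row_addr n i + i := - w i i + 1, row_addr n i + (n + i) := 1)) w"
      by (rule rowok_fin) (use P n i in auto)
    then show "\<forall>c<2 * n. (?M(row_addr n i + i := - w i i + 1, row_addr n i + (n + i) := 1)) (row_addr n i + c) = augmented n w i c"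
      unfolding rowok_def .
  qed
  show "\<exists>m'. exec_straight [Add 9 7 2, Load 10 9, Add 10 10 5, Add 13 1 2, Add 14 7 13, Store 10 9, Store 5 14, Add 7 7 6, Add 8 8 1, Add 2 2 5] m = Some m' \<and> I1 n k w w0 v0 theta (Suc i) m'"
    using H n i rs g by (simp del: of_nat_add of_nat_mult of_nat_Suc add: of_nat_folds J1_def I1_def row_addr_Suc w_row_addr_Suc)
qed simp

lemma p1_body: assumes "0 < n" "i < n" shows "hoare (\<lambda>m. I1 n k w w0 v0 theta i m \<and> m 2 < m 1)
   (Seq (block [Const 3 0]) (Seq (While 3 1 (block p1inner)) (block p1post))) (I1 n k w w0 v0 theta (Suc i)) (1 + (n * 11 + 2 + 10))"
  using hoare_seq[OF p1_prerow hoare_seq[OF p1_innerloop[OF assms] p1_post[OF assms]]] .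

lemma p1_pre: "0 < n \<Longrightarrow> hoare (input_copied n k w w0 v0 theta) (block p1a) (I1 n k w w0 v0 theta 0) 10"
  unfolding p1a_def
  by (rule hoare_blockI) (auto simp del: of_nat_add of_nat_mult of_nat_Suc
      simp add: of_nat_folds I1_def row_addr_def matrix_base_def w_row_addr_def dest: input_copied_regs)

lemma augment_prog_hoare: "0 < n \<Longrightarrow> hoare (input_copied n k w w0 v0 theta) augment_prog (I1 n k w w0 v0 theta n) (10 + (n * (n * 11 + 15 + 2) + 2))"
  unfolding augment_prog_def
  apply (rule hoare_seq[OF p1_pre], assumption)
  apply (rule hoare_while_count_le[where Tb = "1 + (n * 11 + 2 + 10)"])
    apply (rule p1_body; simp)
   apply (simp add: I1_def)
  apply simp
  done

section \<open>Phase 2: Gauss--Jordan elimination\<close>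

definition p2a :: "instr list" where
  "p2a = [Const 2 0, Const 5 1, Add 6 1 1, Add 7 0 0]"
definition p2b :: "instr list" where
  "p2b = [Add 9 7 2, Load 12 9, Const 3 0]"
definition p2norm :: "instr list" where
  "p2norm = [Add 9 7 3, Load 10 9, Div 10 10 12, Store 10 9, Add 3 3 5]"
definition p2c :: "instr list" where
  "p2c = [Const 4 0, Add 8 0 0]"
definition e1 :: "instr list" where
  "e1 = [Add 9 8 2, Load 13 9]"
definition eIf :: "com" where
  "eIf = IfLess 4 2 Skip (IfLess 2 4 Skip (block [Const 13 0]))"
definition e2 :: "instr list" where
  "e2 = [Add 9 7 3, Load 10 9, Mul 10 10 13, Add 9 8 3, Load 14 9, Sub 14 14 10, Store 14 9, Add 3 3 5]"
definition e3 :: "instr list" where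
  "e3 = [Add 8 8 6, Add 4 4 5]"
definition p2d :: "instr list" where
  "p2d = [Add 7 7 6, Add 2 2 5]"
definition ELIM :: "com" where
  "ELIM = Seq (block e1) (Seq eIf (Seq (block [Const 3 0]) (Seq (While 3 6 (block e2)) (block e3))))"
definition eliminate_prog :: "com" where
  "eliminate_prog = Seq (block p2a) (While 2 1 (Seq (block p2b) (Seq (While 3 6 (block p2norm)) (Seq (block p2c) (Seq (While 4 1 ELIM) (block p2d))))))"

definition I2 :: "nat \<Rightarrow> real \<Rightarrow> (nat \<Rightarrow> nat \<Rightarrow> real) \<Rightarrow> (nat \<Rightarrow> real) \<Rightarrow> (nat \<Rightarrow> real) \<Rightarrow> (nat \<Rightarrow> real) \<Rightarrow> nat \<Rightarrow> mem \<Rightarrow> bool" where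
  "I2 n k w w0 v0 theta j m \<longleftrightarrow> input_copied n k w w0 v0 theta m \<and> m 0 = real (input_base n) \<and> m 1 = real n \<and> m 2 = real j \<and> m 5 = 1 \<and>
   m 6 = real (2*n) \<and> m 7 = real (row_addr n j) \<and> rows_stored n n m (gauss_jordan n w j)"

definition Fn :: "nat \<Rightarrow> (nat \<Rightarrow> nat \<Rightarrow> real) \<Rightarrow> nat \<Rightarrow> nat \<Rightarrow> nat \<Rightarrow> nat \<Rightarrow> real" where
  "Fn n w j c = (\<lambda>r c'. if r = j \<and> c' < c then gauss_jordan n w j j c' / gauss_jordan n w j j j else gauss_jordan n w j r c')"

definition N2 :: "nat \<Rightarrow> real \<Rightarrow> (nat \<Rightarrow> nat \<Rightarrow> real) \<Rightarrow> (nat \<Rightarrow> real) \<Rightarrow> (nat \<Rightarrow> real) \<Rightarrow> (nat \<Rightarrow> real) \<Rightarrow> nat \<Rightarrow> nat \<Rightarrow> mem \<Rightarrow> bool" where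
  "N2 n k w w0 v0 theta j c m \<longleftrightarrow> input_copied n k w w0 v0 theta m \<and> m 0 = real (input_base n) \<and> m 1 = real n \<and> m 2 = real j \<and> m 5 = 1 \<and>
   m 6 = real (2*n) \<and> m 7 = real (row_addr n j) \<and> m 12 = gauss_jordan n w j j j \<and> m 3 = real c \<and> rows_stored n n m (Fn n w j c)"

definition Fe :: "nat \<Rightarrow> (nat \<Rightarrow> nat \<Rightarrow> real) \<Rightarrow> nat \<Rightarrow> nat \<Rightarrow> nat \<Rightarrow> nat \<Rightarrow> real" where
  "Fe n w j i = (\<lambda>r c. if r < i \<or> r = j then pivot_step j (gauss_jordan n w j) r c else gauss_jordan n w j r c)"

definition E2 :: "nat \<Rightarrow> real \<Rightarrow> (nat \<Rightarrow> nat \<Rightarrow> real) \<Rightarrow> (nat \<Rightarrow> real) \<Rightarrow> (nat \<Rightarrow> real) \<Rightarrow> (nat \<Rightarrow> real) \<Rightarrow> nat \<Rightarrow> nat \<Rightarrow> mem \<Rightarrow> bool" where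
  "E2 n k w w0 v0 theta j i m \<longleftrightarrow> input_copied n k w w0 v0 theta m \<and> m 0 = real (input_base n) \<and> m 1 = real n \<and> m 2 = real j \<and> m 5 = 1 \<and>
   m 6 = real (2*n) \<and> m 7 = real (row_addr n j) \<and> m 4 = real i \<and> m 8 = real (row_addr n i) \<and> rows_stored n n m (Fe n w j i)"

text \<open>The pivot row is normalised first; every other row \<open>i\<close> then subtracts \<open>fval n w j i\<close> times
  it, the factor being 0 for the pivot row itself.\<close>

definition fval :: "nat \<Rightarrow> (nat \<Rightarrow> nat \<Rightarrow> real) \<Rightarrow> nat \<Rightarrow> nat \<Rightarrow> real" where
  "fval n w j i = (if i = j then 0 else gauss_jordan n w j i j)"

definition Fc :: "nat \<Rightarrow> (nat \<Rightarrow> nat \<Rightarrow> real) \<Rightarrow> nat \<Rightarrow> nat \<Rightarrow> nat \<Rightarrow> nat \<Rightarrow> nat \<Rightarrow> real" where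
  "Fc n w j i c = (\<lambda>r c'. if r = i \<and> c' < c then pivot_step j (gauss_jordan n w j) r c' else Fe n w j i r c')"

definition EC :: "nat \<Rightarrow> real \<Rightarrow> (nat \<Rightarrow> nat \<Rightarrow> real) \<Rightarrow> (nat \<Rightarrow> real) \<Rightarrow> (nat \<Rightarrow> real) \<Rightarrow> (nat \<Rightarrow> real) \<Rightarrow> nat \<Rightarrow> nat \<Rightarrow> nat \<Rightarrow> mem \<Rightarrow> bool" where
  "EC n k w w0 v0 theta j i c m \<longleftrightarrow> input_copied n k w w0 v0 theta m \<and> m 0 = real (input_base n) \<and> m 1 = real n \<and> m 2 = real j \<and> m 5 = 1 \<and>
   m 6 = real (2*n) \<and> m 7 = real (row_addr n j) \<and> m 4 = real i \<and> m 8 = real (row_addr n i) \<and> m 13 = fval n w j i \<and> m 3 = real c \<and>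
   rows_stored n n m (Fc n w j i c)"

lemma p2_norm: assumes n: "0 < n" and j: "j < n" and W: "abs_row_sums_lt_one n w"
  shows "hoare (\<lambda>m. N2 n k w w0 v0 theta j c m \<and> m 3 < m 6) (block p2norm) (N2 n k w w0 v0 theta j (Suc c)) 5"
  unfolding p2norm_def
proof (rule hoare_blockI)
  fix m assume H: "N2 n k w w0 v0 theta j c m \<and> m 3 < m 6"
  then have R: "rows_stored n n m (Fn n w j c)" and c: "c < 2*n" by (auto simp: N2_def)
  have piv: "gauss_jordan n w j j j \<noteq> 0" using gauss_jordan_pivot_nonzero[OF W j] .
  have g: "m (row_addr n j + c) = gauss_jordan n w j j c" using rows_stored_get[OF R j c] by (simp add: Fn_def)
  let ?M = "m(9 := real (row_addr n j + c), 10 := gauss_jordan n w j j c / gauss_jordan n w j j j)"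
  have rs: "rows_stored n n (?M(row_addr n j + c := gauss_jordan n w j j c / gauss_jordan n w j j j)) (Fn n w j (Suc c))"
    by (rule rows_stored_cell[where F = "Fn n w j c"]) (use R j c n in \<open>auto simp: Fn_def\<close>)
  show "\<exists>m'. exec_straight [Add 9 7 3, Load 10 9, Div 10 10 12, Store 10 9, Add 3 3 5] m = Some m' \<and> N2 n k w w0 v0 theta j (Suc c) m'"
    using H n j rs g piv by (simp del: of_nat_add of_nat_mult of_nat_Suc add: of_nat_folds N2_def)
qed simp

lemma p2_normloop: "0 < n \<Longrightarrow> j < n \<Longrightarrow> abs_row_sums_lt_one n w \<Longrightarrow>
   hoare (N2 n k w w0 v0 theta j 0) (While 3 6 (block p2norm)) (N2 n k w w0 v0 theta j (2*n)) (2 * n * (5 + 2) + 2)"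
  apply (rule hoare_while_count)
   apply (rule p2_norm; simp)
  apply (simp add: N2_def)
  done

lemma p2_pre_norm: "0 < n \<Longrightarrow> j < n \<Longrightarrow> hoare (\<lambda>m. I2 n k w w0 v0 theta j m \<and> m 2 < m 1) (block p2b) (N2 n k w w0 v0 theta j 0) 3"
  unfolding p2b_def
proof (rule hoare_blockI)
  fix m assume n: "0 < n" and j: "j < n" and H: "I2 n k w w0 v0 theta j m \<and> m 2 < m 1"
  then have R: "rows_stored n n m (gauss_jordan n w j)" by (auto simp: I2_def)
  have g: "m (row_addr n j + j) = gauss_jordan n w j j j" using rows_stored_get[OF R j] j by simp
  have R0: "rows_stored n n m (Fn n w j 0)" using R by (simp add: Fn_def)
  show "\<exists>m'. exec_straight [Add 9 7 2, Load 12 9, Const 3 0] m = Some m' \<and> N2 n k w w0 v0 theta j 0 m'"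
    using H n j g R0 by (simp del: of_nat_add of_nat_mult of_nat_Suc add: of_nat_folds N2_def I2_def)
qed simp

lemma p2_pre_elim: "0 < n \<Longrightarrow> j < n \<Longrightarrow> hoare (N2 n k w w0 v0 theta j (2*n)) (block p2c) (E2 n k w w0 v0 theta j 0) 2"
  unfolding p2c_def
proof (rule hoare_blockI)
  fix m assume n: "0 < n" and j: "j < n" and H: "N2 n k w w0 v0 theta j (2*n) m"
  then have R: "rows_stored n n m (Fn n w j (2*n))" by (auto simp: N2_def)
  have R0: "rows_stored n n m (Fe n w j 0)" by (rule rows_stored_ext[OF R]) (auto simp: Fn_def Fe_def pivot_step_def)
  show "\<exists>m'. exec_straight [Const 4 0, Add 8 0 0] m = Some m' \<and> E2 n k w w0 v0 theta j 0 m'"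
    using H n j R0 by (simp del: of_nat_add of_nat_mult of_nat_Suc add: of_nat_folds N2_def E2_def row_addr_def matrix_base_def)
qed simp

lemma p2_e2: assumes n: "0 < n" and j: "j < n" and i: "i < n"
  shows "hoare (\<lambda>m. EC n k w w0 v0 theta j i c m \<and> m 3 < m 6) (block e2) (EC n k w w0 v0 theta j i (Suc c)) 8"
  unfolding e2_def
proof (rule hoare_blockI)
  fix m assume H: "EC n k w w0 v0 theta j i c m \<and> m 3 < m 6"
  then have R: "rows_stored n n m (Fc n w j i c)" and c: "c < 2*n" by (auto simp: EC_def)
  let ?G = "gauss_jordan n w j"
  have gauss_jordan: "m (row_addr n j + c) = pivot_step j ?G j c" using rows_stored_get[OF R j c] by (simp add: Fc_def Fe_def)
  have gi: "m (row_addr n i + c) = Fe n w j i i c" using rows_stored_get[OF R i c] by (simp add: Fc_def)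
  let ?v = "Fe n w j i i c - pivot_step j ?G j c * fval n w j i"
  have vv: "?v = pivot_step j ?G i c"
    by (cases "i = j") (auto simp: Fe_def fval_def pivot_step_def algebra_simps)
  let ?M = "m(10 := pivot_step j ?G j c * fval n w j i, 9 := real (row_addr n i + c), 14 := ?v)"
  have rs: "rows_stored n n (?M(row_addr n i + c := ?v)) (Fc n w j i (Suc c))"
    by (rule rows_stored_cell[where F = "Fc n w j i c"]) (use R i c n vv in \<open>auto simp: Fc_def\<close>)
  show "\<exists>m'. exec_straight [Add 9 7 3, Load 10 9, Mul 10 10 13, Add 9 8 3, Load 14 9, Sub 14 14 10, Store 14 9, Add 3 3 5] m = Some m' \<and>
     EC n k w w0 v0 theta j i (Suc c) m'"
    using H n j i rs gauss_jordan gi by (simp del: of_nat_add of_nat_mult of_nat_Suc add: of_nat_folds EC_def)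
qed simp

lemma p2_e2loop: "0 < n \<Longrightarrow> j < n \<Longrightarrow> i < n \<Longrightarrow>
   hoare (EC n k w w0 v0 theta j i 0) (While 3 6 (block e2)) (EC n k w w0 v0 theta j i (2*n)) (2 * n * (8 + 2) + 2)"
  apply (rule hoare_while_count)
   apply (rule p2_e2; simp)
  apply (simp add: EC_def)
  done

definition X2 :: "nat \<Rightarrow> real \<Rightarrow> (nat \<Rightarrow> nat \<Rightarrow> real) \<Rightarrow> (nat \<Rightarrow> real) \<Rightarrow> (nat \<Rightarrow> real) \<Rightarrow> (nat \<Rightarrow> real) \<Rightarrow> nat \<Rightarrow> nat \<Rightarrow> mem \<Rightarrow> bool" where
  "X2 n k w w0 v0 theta j i m \<longleftrightarrow> E2 n k w w0 v0 theta j i m \<and> m 13 = Fe n w j i i j"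
definition Y2 :: "nat \<Rightarrow> real \<Rightarrow> (nat \<Rightarrow> nat \<Rightarrow> real) \<Rightarrow> (nat \<Rightarrow> real) \<Rightarrow> (nat \<Rightarrow> real) \<Rightarrow> (nat \<Rightarrow> real) \<Rightarrow> nat \<Rightarrow> nat \<Rightarrow> mem \<Rightarrow> bool" where
  "Y2 n k w w0 v0 theta j i m \<longleftrightarrow> E2 n k w w0 v0 theta j i m \<and> m 13 = fval n w j i"

lemma p2_e1: assumes n: "0 < n" and j: "j < n" and i: "i < n"
  shows "hoare (\<lambda>m. E2 n k w w0 v0 theta j i m \<and> m 4 < m 1) (block e1) (X2 n k w w0 v0 theta j i) 2"
  unfolding e1_def
proof (rule hoare_blockI)
  fix m assume H: "E2 n k w w0 v0 theta j i m \<and> m 4 < m 1"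
  then have R: "rows_stored n n m (Fe n w j i)" by (auto simp: E2_def)
  have g: "m (row_addr n i + j) = Fe n w j i i j" using rows_stored_get[OF R i] j by simp
  show "\<exists>m'. exec_straight [Add 9 8 2, Load 13 9] m = Some m' \<and> X2 n k w w0 v0 theta j i m'"
    using H n j i g by (simp del: of_nat_add of_nat_mult of_nat_Suc add: of_nat_folds E2_def X2_def)
qed simp

lemma p2_eIf: assumes n: "0 < n" and j: "j < n" and i: "i < n"
  shows "hoare (X2 n k w w0 v0 theta j i) eIf (Y2 n k w w0 v0 theta j i) 5"
proof -
  have t1: "hoare (\<lambda>m. X2 n k w w0 v0 theta j i m \<and> m 4 < m 2) Skip (Y2 n k w w0 v0 theta j i) 0"
    by (rule hoare_conseq[OF hoare_skip]) (auto simp: X2_def Y2_def E2_def Fe_def fval_def)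
  have t2: "hoare (\<lambda>m. (X2 n k w w0 v0 theta j i m \<and> \<not> m 4 < m 2) \<and> m 2 < m 4) Skip (Y2 n k w w0 v0 theta j i) 0"
    by (rule hoare_conseq[OF hoare_skip]) (auto simp: X2_def Y2_def E2_def Fe_def fval_def)
  have t3: "hoare (\<lambda>m. (X2 n k w w0 v0 theta j i m \<and> \<not> m 4 < m 2) \<and> \<not> m 2 < m 4) (block [Const 13 0]) (Y2 n k w w0 v0 theta j i) 1"
    by (rule hoare_blockI) (use n in \<open>auto simp: X2_def Y2_def E2_def fval_def\<close>)
  have "hoare (X2 n k w w0 v0 theta j i) eIf (Y2 n k w w0 v0 theta j i) (max 0 (max 0 1 + 2) + 2)"
    unfolding eIf_def by (intro hoare_if t1 t2 t3)
  then show ?thesis by (rule hoare_conseq) auto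
qed

lemma p2_pre_e2: "0 < n \<Longrightarrow> hoare (Y2 n k w w0 v0 theta j i) (block [Const 3 0]) (EC n k w w0 v0 theta j i 0) 1"
  by (rule hoare_blockI) (auto simp: Y2_def E2_def EC_def Fc_def)

lemma p2_e3: assumes n: "0 < n" and j: "j < n" and i: "i < n"
  shows "hoare (EC n k w w0 v0 theta j i (2*n)) (block e3) (E2 n k w w0 v0 theta j (Suc i)) 2"
  unfolding e3_def
proof (rule hoare_blockI)
  fix m assume H: "EC n k w w0 v0 theta j i (2*n) m"
  then have R: "rows_stored n n m (Fc n w j i (2*n))" by (auto simp: EC_def)
  have R1: "rows_stored n n m (Fe n w j (Suc i))" by (rule rows_stored_ext[OF R]) (auto simp: Fc_def Fe_def)
  show "\<exists>m'. exec_straight [Add 8 8 6, Add 4 4 5] m = Some m' \<and> E2 n k w w0 v0 theta j (Suc i) m'"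
    using H n j i R1 by (simp del: of_nat_add of_nat_mult of_nat_Suc add: of_nat_folds EC_def E2_def row_addr_Suc)
qed simp

lemma p2_elimbody: assumes n: "0 < n" and j: "j < n" and i: "i < n"
  shows "hoare (\<lambda>m. E2 n k w w0 v0 theta j i m \<and> m 4 < m 1) ELIM (E2 n k w w0 v0 theta j (Suc i)) (2 + (5 + (1 + ((2 * n * (8 + 2) + 2) + 2))))"
  unfolding ELIM_def
  using hoare_seq[OF p2_e1[OF assms] hoare_seq[OF p2_eIf[OF assms] hoare_seq[OF p2_pre_e2[OF n] hoare_seq[OF p2_e2loop[OF assms] p2_e3[OF assms]]]]] .

lemma p2_elimloop: "0 < n \<Longrightarrow> j < n \<Longrightarrow>
   hoare (E2 n k w w0 v0 theta j 0) (While 4 1 ELIM) (E2 n k w w0 v0 theta j n) (n * ((2 + (5 + (1 + ((2 * n * (8 + 2) + 2) + 2)))) + 2) + 2)"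
  apply (rule hoare_while_count)
   apply (rule p2_elimbody; simp)
  apply (simp add: E2_def)
  done

lemma p2_post: assumes n: "0 < n" and j: "j < n"
  shows "hoare (E2 n k w w0 v0 theta j n) (block p2d) (I2 n k w w0 v0 theta (Suc j)) 2"
  unfolding p2d_def
proof (rule hoare_blockI)
  fix m assume H: "E2 n k w w0 v0 theta j n m"
  then have R: "rows_stored n n m (Fe n w j n)" by (auto simp: E2_def)
  have R1: "rows_stored n n m (gauss_jordan n w (Suc j))" by (rule rows_stored_ext[OF R]) (auto simp: Fe_def)
  show "\<exists>m'. exec_straight [Add 7 7 6, Add 2 2 5] m = Some m' \<and> I2 n k w w0 v0 theta (Suc j) m'"
    using H n j R1 by (simp del: of_nat_add of_nat_mult of_nat_Suc add: of_nat_folds E2_def I2_def row_addr_Suc)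
qed simp

definition T2body :: "nat \<Rightarrow> nat" where
  "T2body n = 3 + ((2 * n * (5 + 2) + 2) + (2 + ((n * ((2 + (5 + (1 + ((2 * n * (8 + 2) + 2) + 2)))) + 2) + 2) + 2)))"

lemma p2_body: assumes n: "0 < n" and j: "j < n" and W: "abs_row_sums_lt_one n w"
  shows "hoare (\<lambda>m. I2 n k w w0 v0 theta j m \<and> m 2 < m 1)
    (Seq (block p2b) (Seq (While 3 6 (block p2norm)) (Seq (block p2c) (Seq (While 4 1 ELIM) (block p2d)))))
    (I2 n k w w0 v0 theta (Suc j)) (T2body n)"
  unfolding T2body_def
  using hoare_seq[OF p2_pre_norm[OF n j] hoare_seq[OF p2_normloop[OF n j W] hoare_seq[OF p2_pre_elim[OF n j] hoare_seq[OF p2_elimloop[OF n j] p2_post[OF n j]]]]] .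

lemma p2_pre: "0 < n \<Longrightarrow> hoare (I1 n k w w0 v0 theta n) (block p2a) (I2 n k w w0 v0 theta 0) 4"
  unfolding p2a_def
  by (rule hoare_blockI) (auto simp del: of_nat_add of_nat_mult of_nat_Suc simp add: of_nat_folds I1_def I2_def row_addr_def matrix_base_def)

lemma eliminate_prog_hoare: "0 < n \<Longrightarrow> abs_row_sums_lt_one n w \<Longrightarrow> hoare (I1 n k w w0 v0 theta n) eliminate_prog (I2 n k w w0 v0 theta n) (4 + (n * (T2body n + 2) + 2))"
  unfolding eliminate_prog_def
  apply (rule hoare_seq[OF p2_pre], assumption)
  apply (rule hoare_while_count)
   apply (rule p2_body; simp)
  apply (simp add: I2_def)
  done

section \<open>Phase 3: column sums of \<open>Delta\<close>\<close>

lemma rows_stored_Delta: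
  assumes "abs_row_sums_lt_one n w" "rows_stored n n m (gauss_jordan n w n)" "i < n" "j < n"
  shows "m (row_addr n i + (n + j)) = Delta n w i j"
  using rows_stored_get[OF assms(2,3), of "n + j"] Delta_eq_gauss_jordan[OF assms(1,3,4)] assms(4) by simp

definition p3a :: "instr list" where
  "p3a = [Const 2 0, Const 5 1, Add 6 1 1, Const 11 0, Add 7 1 11, Add 12 0 0, Mul 13 1 6, Add 12 12 13]"
definition p3pre :: "instr list" where
  "p3pre = [Const 3 0, Const 10 0, Add 8 0 0]"
definition p3inner :: "instr list" where
  "p3inner = [Add 9 8 7, Load 11 9, Add 10 10 11, Add 8 8 6, Add 3 3 5]"
definition p3post :: "instr list" where
  "p3post = [Add 9 12 2, Store 10 9, Add 7 7 5, Add 2 2 5]"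
definition col_sums_prog :: "com" where
  "col_sums_prog = Seq (block p3a) (While 2 1 (Seq (block p3pre) (Seq (While 3 1 (block p3inner)) (block p3post))))"

definition I3 :: "nat \<Rightarrow> real \<Rightarrow> (nat \<Rightarrow> nat \<Rightarrow> real) \<Rightarrow> (nat \<Rightarrow> real) \<Rightarrow> (nat \<Rightarrow> real) \<Rightarrow> (nat \<Rightarrow> real) \<Rightarrow> nat \<Rightarrow> mem \<Rightarrow> bool" where
  "I3 n k w w0 v0 theta j m \<longleftrightarrow> input_copied n k w w0 v0 theta m \<and> m 0 = real (input_base n) \<and> m 1 = real n \<and> m 2 = real j \<and> m 5 = 1 \<and>
   m 6 = real (2*n) \<and> m 7 = real (n + j) \<and> m 12 = real (vec_addr n 0) \<and> rows_stored n n m (gauss_jordan n w n) \<and> vec_stored n 0 j m (col_sum n w)"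

definition K3 :: "nat \<Rightarrow> real \<Rightarrow> (nat \<Rightarrow> nat \<Rightarrow> real) \<Rightarrow> (nat \<Rightarrow> real) \<Rightarrow> (nat \<Rightarrow> real) \<Rightarrow> (nat \<Rightarrow> real) \<Rightarrow> nat \<Rightarrow> nat \<Rightarrow> mem \<Rightarrow> bool" where
  "K3 n k w w0 v0 theta j i m \<longleftrightarrow> I3 n k w w0 v0 theta j m \<and> m 3 = real i \<and> m 8 = real (row_addr n i) \<and>
   m 10 = (\<Sum>i'<i. Delta n w i' j)"

lemma p3_inner: assumes n: "0 < n" and j: "j < n" and W: "abs_row_sums_lt_one n w"
  shows "hoare (\<lambda>m. K3 n k w w0 v0 theta j i m \<and> m 3 < m 1) (block p3inner) (K3 n k w w0 v0 theta j (Suc i)) 5"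
  unfolding p3inner_def
proof (rule hoare_blockI)
  fix m assume H: "K3 n k w w0 v0 theta j i m \<and> m 3 < m 1"
  then have R: "rows_stored n n m (gauss_jordan n w n)" and i: "i < n" by (auto simp: K3_def I3_def)
  have g: "m (row_addr n i + (n + j)) = Delta n w i j" using rows_stored_Delta[OF W R i j] .
  show "\<exists>m'. exec_straight [Add 9 8 7, Load 11 9, Add 10 10 11, Add 8 8 6, Add 3 3 5] m = Some m' \<and> K3 n k w w0 v0 theta j (Suc i) m'"
    using H n j i g by (simp del: of_nat_add of_nat_mult of_nat_Suc add: of_nat_folds K3_def I3_def row_addr_Suc)
qed simp

lemma p3_innerloop: "0 < n \<Longrightarrow> j < n \<Longrightarrow> abs_row_sums_lt_one n w \<Longrightarrow>
   hoare (K3 n k w w0 v0 theta j 0) (While 3 1 (block p3inner)) (K3 n k w w0 v0 theta j n) (n * (5 + 2) + 2)"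
  apply (rule hoare_while_count)
   apply (rule p3_inner; simp)
  apply (simp add: K3_def I3_def)
  done

lemma p3_pre: "0 < n \<Longrightarrow> hoare (\<lambda>m. I3 n k w w0 v0 theta j m \<and> m 2 < m 1) (block p3pre) (K3 n k w w0 v0 theta j 0) 3"
  unfolding p3pre_def
  by (rule hoare_blockI) (auto simp del: of_nat_add of_nat_mult of_nat_Suc simp add: of_nat_folds K3_def I3_def row_addr_def matrix_base_def)

lemma p3_post: assumes n: "0 < n" and j: "j < n"
  shows "hoare (K3 n k w w0 v0 theta j n) (block p3post) (I3 n k w w0 v0 theta (Suc j)) 4"
  unfolding p3post_def
  by (rule hoare_blockI) (use n j in \<open>auto simp del: of_nat_add of_nat_mult of_nat_Suc simp add: of_nat_folds K3_def I3_def col_sum_def\<close>)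

lemma p3_start: "0 < n \<Longrightarrow> hoare (I2 n k w w0 v0 theta n) (block p3a) (I3 n k w w0 v0 theta 0) 8"
  unfolding p3a_def
  by (rule hoare_blockI) (auto simp del: of_nat_add of_nat_mult of_nat_Suc simp add: of_nat_folds I2_def I3_def vec_addr_def vectors_base_def matrix_base_def)

lemma col_sums_prog_hoare: assumes n: "0 < n" and W: "abs_row_sums_lt_one n w"
  shows "hoare (I2 n k w w0 v0 theta n) col_sums_prog (I3 n k w w0 v0 theta n) (8 + (n * ((3 + ((n * (5 + 2) + 2) + 4)) + 2) + 2))"
  unfolding col_sums_prog_def
  apply (rule hoare_seq[OF p3_start[OF n]])
  apply (rule hoare_while_count)
   apply (rule hoare_seq[OF p3_pre[OF n] hoare_seq[OF p3_innerloop p3_post]]; (simp add: n W)?)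
  apply (simp add: I3_def)
  done

section \<open>Phase 4: the opinions after an idle first phase\<close>

definition p4a :: "instr list" where
  "p4a = [Const 2 0, Const 5 1, Add 6 1 1, Add 7 0 0, Add 12 0 0, Mul 13 1 6, Add 12 12 13, Add 12 12 1, Const 14 2, Add 15 0 14, Add 16 15 1]"
definition p4pre :: "instr list" where
  "p4pre = [Const 3 0, Const 10 0, Const 19 0, Add 19 1 19]"
definition p4inner :: "instr list" where
  "p4inner = [Add 9 7 19, Load 11 9, Add 9 16 3, Load 18 9, Mul 11 11 18, Add 9 15 3, Load 18 9, Mul 11 11 18, Add 10 10 11, Add 19 19 5, Add 3 3 5]"
definition p4post :: "instr list" where
  "p4post = [Add 9 12 2, Store 10 9, Add 7 7 6, Add 2 2 5]"
definition free_opinions_prog :: "com" where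
  "free_opinions_prog = Seq (block p4a) (While 2 1 (Seq (block p4pre) (Seq (While 3 1 (block p4inner)) (block p4post))))"

definition I4 :: "nat \<Rightarrow> real \<Rightarrow> (nat \<Rightarrow> nat \<Rightarrow> real) \<Rightarrow> (nat \<Rightarrow> real) \<Rightarrow> (nat \<Rightarrow> real) \<Rightarrow> (nat \<Rightarrow> real) \<Rightarrow> nat \<Rightarrow> mem \<Rightarrow> bool" where
  "I4 n k w w0 v0 theta i m \<longleftrightarrow> input_copied n k w w0 v0 theta m \<and> m 0 = real (input_base n) \<and> m 1 = real n \<and> m 2 = real i \<and> m 5 = 1 \<and>
   m 6 = real (2*n) \<and> m 7 = real (row_addr n i) \<and> m 12 = real (vec_addr n 1) \<and> m 15 = real (v0_addr n) \<and> m 16 = real (w0_addr n) \<and>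
   rows_stored n n m (gauss_jordan n w n) \<and> vec_stored n 0 n m (col_sum n w) \<and> vec_stored n 1 i m (free_opinion n w w0 v0)"

definition K4 :: "nat \<Rightarrow> real \<Rightarrow> (nat \<Rightarrow> nat \<Rightarrow> real) \<Rightarrow> (nat \<Rightarrow> real) \<Rightarrow> (nat \<Rightarrow> real) \<Rightarrow> (nat \<Rightarrow> real) \<Rightarrow> nat \<Rightarrow> nat \<Rightarrow> mem \<Rightarrow> bool" where
  "K4 n k w w0 v0 theta i j m \<longleftrightarrow> I4 n k w w0 v0 theta i m \<and> m 3 = real j \<and> m 19 = real (n + j) \<and>
   m 10 = (\<Sum>j'<j. Delta n w i j' * w0 j' * v0 j')"

lemma p4_inner: assumes n: "0 < n" and i: "i < n" and W: "abs_row_sums_lt_one n w"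
  shows "hoare (\<lambda>m. K4 n k w w0 v0 theta i j m \<and> m 3 < m 1) (block p4inner) (K4 n k w w0 v0 theta i (Suc j)) 11"
  unfolding p4inner_def
proof (rule hoare_blockI)
  fix m assume H: "K4 n k w w0 v0 theta i j m \<and> m 3 < m 1"
  then have R: "rows_stored n n m (gauss_jordan n w n)" and B: "input_copied n k w w0 v0 theta m" and j: "j < n" by (auto simp: K4_def I4_def)
  have g: "m (row_addr n i + (n + j)) = Delta n w i j" using rows_stored_Delta[OF W R i j] .
  show "\<exists>m'. exec_straight [Add 9 7 19, Load 11 9, Add 9 16 3, Load 18 9, Mul 11 11 18, Add 9 15 3, Load 18 9, Mul 11 11 18, Add 10 10 11, Add 19 19 5, Add 3 3 5] m = Some m' \<and> K4 n k w w0 v0 theta i (Suc j) m'"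
    using H n j i g by (simp del: of_nat_add of_nat_mult of_nat_Suc add: of_nat_folds K4_def I4_def input_copied_w0[OF B] input_copied_v0[OF B])
qed simp

lemma p4_innerloop: "0 < n \<Longrightarrow> i < n \<Longrightarrow> abs_row_sums_lt_one n w \<Longrightarrow>
   hoare (K4 n k w w0 v0 theta i 0) (While 3 1 (block p4inner)) (K4 n k w w0 v0 theta i n) (n * (11 + 2) + 2)"
  apply (rule hoare_while_count)
   apply (rule p4_inner; simp)
  apply (simp add: K4_def I4_def)
  done

lemma p4_pre: "0 < n \<Longrightarrow> hoare (\<lambda>m. I4 n k w w0 v0 theta i m \<and> m 2 < m 1) (block p4pre) (K4 n k w w0 v0 theta i 0) 4"
  unfolding p4pre_def
  by (rule hoare_blockI) (auto simp del: of_nat_add of_nat_mult of_nat_Suc simp add: of_nat_folds K4_def I4_def)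

lemma p4_post: assumes n: "0 < n" and i: "i < n"
  shows "hoare (K4 n k w w0 v0 theta i n) (block p4post) (I4 n k w w0 v0 theta (Suc i)) 4"
  unfolding p4post_def
  by (rule hoare_blockI) (use n i in \<open>auto simp del: of_nat_add of_nat_mult of_nat_Suc simp add: of_nat_folds K4_def I4_def free_opinion_def row_addr_Suc\<close>)

lemma p4_start: "0 < n \<Longrightarrow> hoare (I3 n k w w0 v0 theta n) (block p4a) (I4 n k w w0 v0 theta 0) 11"
  unfolding p4a_def
  by (rule hoare_blockI) (auto simp del: of_nat_add of_nat_mult of_nat_Suc simp add: of_nat_folds I3_def I4_def vec_addr_def vectors_base_def matrix_base_def row_addr_def v0_addr_def w0_addr_def)

lemma free_opinions_prog_hoare: assumes n: "0 < n" and W: "abs_row_sums_lt_one n w"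
  shows "hoare (I3 n k w w0 v0 theta n) free_opinions_prog (I4 n k w w0 v0 theta n) (11 + (n * ((4 + ((n * (11 + 2) + 2) + 4)) + 2) + 2))"
  unfolding free_opinions_prog_def
  apply (rule hoare_seq[OF p4_start[OF n]])
  apply (rule hoare_while_count)
   apply (rule hoare_seq[OF p4_pre[OF n] hoare_seq[OF p4_innerloop p4_post]]; (simp add: n W)?)
  apply (simp add: I4_def)
  done

section \<open>Phase 5: the coefficients of the objective\<close>

definition p5a :: "instr list" where
  "p5a = [Const 2 0, Const 5 1, Add 6 1 1, Const 20 2, Const 31 0, Add 7 1 31, Add 12 0 0, Mul 13 1 6, Add 12 12 13,
   Add 22 12 1, Add 23 22 1, Add 24 23 1, Add 25 24 1, Add 26 25 1, Const 14 2, Add 15 0 14, Add 16 15 1, Add 17 16 1]"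
definition p5pre :: "instr list" where
  "p5pre = [Const 3 0, Const 10 0, Add 8 0 0]"
definition p5inner :: "instr list" where
  "p5inner = [Add 9 12 3, Load 11 9, Add 9 16 3, Load 18 9, Mul 11 11 18, Add 9 8 7, Load 18 9, Mul 11 11 18, Add 10 10 11, Add 8 8 6, Add 3 3 5]"
definition p5post :: "instr list" where
  "p5post = [Add 9 17 2, Load 11 9, Add 9 16 2, Load 18 9, Add 9 15 2, Load 19 9, Mul 19 18 19, Add 19 5 19, Mul 19 11 19, Div 19 19 20, Add 9 23 2, Store 19 9,
          Mul 10 19 10, Add 9 24 2, Store 10 9,
          Add 9 12 2, Load 27 9, Add 9 22 2, Load 28 9, Mul 28 18 28, Add 28 5 28, Mul 28 11 28, Mul 28 27 28, Div 28 28 20, Add 9 25 2, Store 28 9,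
          Mul 29 27 11, Mul 29 29 18, Div 29 29 20, Add 9 26 2, Store 29 9,
          Add 7 7 5, Add 2 2 5]"
definition coefficients_prog :: "com" where
  "coefficients_prog = Seq (block p5a) (While 2 1 (Seq (block p5pre) (Seq (While 3 1 (block p5inner)) (block p5post))))"

definition R5 :: "nat \<Rightarrow> real \<Rightarrow> (nat \<Rightarrow> nat \<Rightarrow> real) \<Rightarrow> (nat \<Rightarrow> real) \<Rightarrow> (nat \<Rightarrow> real) \<Rightarrow> (nat \<Rightarrow> real) \<Rightarrow> mem \<Rightarrow> bool" where
  "R5 n k w w0 v0 theta m \<longleftrightarrow> input_copied n k w w0 v0 theta m \<and> m 0 = real (input_base n) \<and> m 1 = real n \<and> m 5 = 1 \<and>
   m 6 = real (2*n) \<and> m 20 = 2 \<and> m 12 = real (vec_addr n 0) \<and> m 22 = real (vec_addr n 1) \<and> m 23 = real (vec_addr n 2) \<and> m 24 = real (vec_addr n 3) \<and>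
   m 25 = real (vec_addr n 4) \<and> m 26 = real (vec_addr n 5) \<and> m 15 = real (v0_addr n) \<and> m 16 = real (w0_addr n) \<and> m 17 = real (theta_addr n) \<and>
   rows_stored n n m (gauss_jordan n w n) \<and> vec_stored n 0 n m (col_sum n w) \<and> vec_stored n 1 n m (free_opinion n w w0 v0)"

definition I5 :: "nat \<Rightarrow> real \<Rightarrow> (nat \<Rightarrow> nat \<Rightarrow> real) \<Rightarrow> (nat \<Rightarrow> real) \<Rightarrow> (nat \<Rightarrow> real) \<Rightarrow> (nat \<Rightarrow> real) \<Rightarrow> nat \<Rightarrow> mem \<Rightarrow> bool" where
  "I5 n k w w0 v0 theta a m \<longleftrightarrow> R5 n k w w0 v0 theta m \<and> m 2 = real a \<and> m 7 = real (n + a) \<and>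
   vec_stored n 2 a m (camp_weight w0 theta v0) \<and> vec_stored n 3 a m (coef1 n w w0 v0 theta) \<and> vec_stored n 4 a m (coef2 n w w0 v0 theta) \<and> vec_stored n 5 a m (coef2_slope n w w0 theta)"

definition K5 :: "nat \<Rightarrow> real \<Rightarrow> (nat \<Rightarrow> nat \<Rightarrow> real) \<Rightarrow> (nat \<Rightarrow> real) \<Rightarrow> (nat \<Rightarrow> real) \<Rightarrow> (nat \<Rightarrow> real) \<Rightarrow> nat \<Rightarrow> nat \<Rightarrow> mem \<Rightarrow> bool" where
  "K5 n k w w0 v0 theta a j m \<longleftrightarrow> I5 n k w w0 v0 theta a m \<and> m 3 = real j \<and> m 8 = real (row_addr n j) \<and>
   m 10 = (\<Sum>j'<j. col_sum n w j' * w0 j' * Delta n w j' a)"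

lemma p5_inner: assumes n: "0 < n" and a: "a < n" and W: "abs_row_sums_lt_one n w"
  shows "hoare (\<lambda>m. K5 n k w w0 v0 theta a j m \<and> m 3 < m 1) (block p5inner) (K5 n k w w0 v0 theta a (Suc j)) 11"
  unfolding p5inner_def
proof (rule hoare_blockI)
  fix m assume H: "K5 n k w w0 v0 theta a j m \<and> m 3 < m 1"
  then have R: "rows_stored n n m (gauss_jordan n w n)" and B: "input_copied n k w w0 v0 theta m" and j: "j < n" and S: "vec_stored n 0 n m (col_sum n w)"
    by (auto simp: K5_def I5_def R5_def)
  have g: "m (row_addr n j + (n + a)) = Delta n w j a" using rows_stored_Delta[OF W R j a] .
  have s: "m (vec_addr n 0 + j) = col_sum n w j" using vec_stored_get[OF S j] .
  show "\<exists>m'. exec_straight [Add 9 12 3, Load 11 9, Add 9 16 3, Load 18 9, Mul 11 11 18, Add 9 8 7, Load 18 9, Mul 11 11 18, Add 10 10 11, Add 8 8 6, Add 3 3 5] m = Some m' \<and> K5 n k w w0 v0 theta a (Suc j) m'"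
    using H n j a g s by (simp del: of_nat_add of_nat_mult of_nat_Suc add: of_nat_folds K5_def I5_def R5_def input_copied_w0[OF B] row_addr_Suc)
qed simp

lemma p5_innerloop: "0 < n \<Longrightarrow> a < n \<Longrightarrow> abs_row_sums_lt_one n w \<Longrightarrow>
   hoare (K5 n k w w0 v0 theta a 0) (While 3 1 (block p5inner)) (K5 n k w w0 v0 theta a n) (n * (11 + 2) + 2)"
  apply (rule hoare_while_count)
   apply (rule p5_inner; simp)
  apply (simp add: K5_def I5_def R5_def)
  done

lemma p5_pre: "0 < n \<Longrightarrow> hoare (\<lambda>m. I5 n k w w0 v0 theta a m \<and> m 2 < m 1) (block p5pre) (K5 n k w w0 v0 theta a 0) 3"
  unfolding p5pre_def
  by (rule hoare_blockI) (auto simp del: of_nat_add of_nat_mult of_nat_Suc simp add: of_nat_folds K5_def I5_def R5_def row_addr_def matrix_base_def)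

lemma p5_post: assumes n: "0 < n" and a: "a < n"
  shows "hoare (K5 n k w w0 v0 theta a n) (block p5post) (I5 n k w w0 v0 theta (Suc a)) 33"
  unfolding p5post_def
proof (rule hoare_blockI)
  fix m assume H: "K5 n k w w0 v0 theta a n m"
  then have B: "input_copied n k w w0 v0 theta m" and S: "vec_stored n 0 n m (col_sum n w)" and P: "vec_stored n 1 n m (free_opinion n w w0 v0)"
    by (auto simp: K5_def I5_def R5_def)
  have s: "m (vec_addr n 0 + a) = col_sum n w a" using vec_stored_get[OF S a] .
  have p: "m (vec_addr n 1 + a) = free_opinion n w w0 v0 a" using vec_stored_get[OF P a] .
  show "\<exists>m'. exec_straight [Add 9 17 2, Load 11 9, Add 9 16 2, Load 18 9, Add 9 15 2, Load 19 9, Mul 19 18 19, Add 19 5 19, Mul 19 11 19, Div 19 19 20, Add 9 23 2, Store 19 9,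
          Mul 10 19 10, Add 9 24 2, Store 10 9,
          Add 9 12 2, Load 27 9, Add 9 22 2, Load 28 9, Mul 28 18 28, Add 28 5 28, Mul 28 11 28, Mul 28 27 28, Div 28 28 20, Add 9 25 2, Store 28 9,
          Mul 29 27 11, Mul 29 29 18, Div 29 29 20, Add 9 26 2, Store 29 9,
          Add 7 7 5, Add 2 2 5] m = Some m' \<and> I5 n k w w0 v0 theta (Suc a) m'"
    using H n a s p by (simp del: of_nat_add of_nat_mult of_nat_Suc add: of_nat_folds K5_def I5_def R5_def input_copied_w0[OF B] input_copied_v0[OF B] input_copied_th[OF B]
       camp_weight_def coef1_def coef2_def coef2_slope_def bias_gain_def)
qed simp

lemma p5_start: "0 < n \<Longrightarrow> hoare (I4 n k w w0 v0 theta n) (block p5a) (I5 n k w w0 v0 theta 0) 18"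
  unfolding p5a_def
  by (rule hoare_blockI) (auto simp del: of_nat_add of_nat_mult of_nat_Suc simp add: of_nat_folds I4_def I5_def R5_def vec_addr_def vectors_base_def matrix_base_def v0_addr_def w0_addr_def theta_addr_def)

lemma coefficients_prog_hoare: assumes n: "0 < n" and W: "abs_row_sums_lt_one n w"
  shows "hoare (I4 n k w w0 v0 theta n) coefficients_prog (I5 n k w w0 v0 theta n) (18 + (n * ((3 + ((n * (11 + 2) + 2) + 33)) + 2) + 2))"
  unfolding coefficients_prog_def
  apply (rule hoare_seq[OF p5_start[OF n]])
  apply (rule hoare_while_count)
   apply (rule hoare_seq[OF p5_pre[OF n] hoare_seq[OF p5_innerloop p5_post]]; (simp add: n W)?)
  apply (simp add: I5_def R5_def)
  done

section \<open>Phase 6: search over pairs of nodes\<close>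

lemma dominates_pair_mono: "dominates_pair n w w0 v0 theta k a b V \<Longrightarrow> V \<le> V' \<Longrightarrow> dominates_pair n w w0 v0 theta k a b V'"
  unfolding dominates_pair_def by auto

definition pairs_done :: "nat \<Rightarrow> (nat \<Rightarrow> nat \<Rightarrow> real) \<Rightarrow> (nat \<Rightarrow> real) \<Rightarrow> (nat \<Rightarrow> real) \<Rightarrow> (nat \<Rightarrow> real) \<Rightarrow> real \<Rightarrow> nat \<Rightarrow> nat \<Rightarrow> real \<Rightarrow> bool" where
  "pairs_done n w w0 v0 theta k a b V \<longleftrightarrow> (\<forall>a'<a. \<forall>b'<n. dominates_pair n w w0 v0 theta k a' b' V) \<and> (\<forall>b'<b. dominates_pair n w w0 v0 theta k a b' V)"

lemma pairs_done_mono: "pairs_done n w w0 v0 theta k a b V \<Longrightarrow> V \<le> V' \<Longrightarrow> pairs_done n w w0 v0 theta k a b V'"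
  unfolding pairs_done_def using dominates_pair_mono by blast

text \<open>Registers 40--44 hold the best candidate found so far: its value, its nodes \<open>a\<close> and \<open>b\<close>, and
  its budgets \<open>t\<close> and \<open>r\<close>.\<close>

definition incumbent :: "nat \<Rightarrow> real \<Rightarrow> (nat \<Rightarrow> nat \<Rightarrow> real) \<Rightarrow> (nat \<Rightarrow> real) \<Rightarrow> (nat \<Rightarrow> real) \<Rightarrow> (nat \<Rightarrow> real) \<Rightarrow> mem \<Rightarrow> bool" where
  "incumbent n k w w0 v0 theta m \<longleftrightarrow> (\<exists>ba bb. ba < n \<and> bb < n \<and> m 41 = real ba \<and> m 42 = real bb \<and>
   0 \<le> m 43 \<and> 0 \<le> m 44 \<and> m 43 + m 44 \<le> k \<and> m 40 = pair_value n w w0 v0 theta ba bb (m 43) (m 44) \<and> 0 \<le> m 40)"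

lemma incumbent_reg[simp]: "r < 40 \<or> 44 < r \<Longrightarrow> incumbent n k w w0 v0 theta (m(r := v)) = incumbent n k w w0 v0 theta m"
  unfolding incumbent_def by auto

lemma incumbent_update:
  assumes "incumbent n k w w0 v0 theta m" "a < n" "b < n" "0 \<le> t" "0 \<le> r" "t + r \<le> k" "V' = pair_value n w w0 v0 theta a b t r" "m 40 < V'"
  shows "incumbent n k w w0 v0 theta (m(40 := V', 41 := real a, 42 := real b, 43 := t, 44 := r))"
proof -
  have "0 \<le> m 40" using assms(1) unfolding incumbent_def by auto
  then show ?thesis using assms unfolding incumbent_def by auto
qed

definition C6o :: "nat \<Rightarrow> real \<Rightarrow> (nat \<Rightarrow> nat \<Rightarrow> real) \<Rightarrow> (nat \<Rightarrow> real) \<Rightarrow> (nat \<Rightarrow> real) \<Rightarrow> (nat \<Rightarrow> real) \<Rightarrow> nat \<Rightarrow> mem \<Rightarrow> bool" where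
  "C6o n k w w0 v0 theta a m \<longleftrightarrow> input_copied n k w w0 v0 theta m \<and> m 0 = real (input_base n) \<and> m 1 = real n \<and> m 2 = real a \<and> m 5 = 1 \<and>
   m 6 = real (2*n) \<and> m 7 = real (n + a) \<and> m 20 = 2 \<and> m 23 = real (vec_addr n 2) \<and> m 24 = real (vec_addr n 3) \<and>
   m 25 = real (vec_addr n 4) \<and> m 26 = real (vec_addr n 5) \<and> m 30 = k \<and> m 31 = 0 \<and>
   rows_stored n n m (gauss_jordan n w n) \<and> vec_stored n 2 n m (camp_weight w0 theta v0) \<and> vec_stored n 3 n m (coef1 n w w0 v0 theta) \<and> vec_stored n 4 n m (coef2 n w w0 v0 theta) \<and>
   vec_stored n 5 n m (coef2_slope n w w0 theta)"

definition C6 :: "nat \<Rightarrow> real \<Rightarrow> (nat \<Rightarrow> nat \<Rightarrow> real) \<Rightarrow> (nat \<Rightarrow> real) \<Rightarrow> (nat \<Rightarrow> real) \<Rightarrow> (nat \<Rightarrow> real) \<Rightarrow> nat \<Rightarrow> nat \<Rightarrow> mem \<Rightarrow> bool" where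
  "C6 n k w w0 v0 theta a b m \<longleftrightarrow> C6o n k w w0 v0 theta a m \<and> m 3 = real b \<and> m 8 = real (row_addr n b) \<and>
   m 33 = coef1 n w w0 v0 theta a \<and> m 34 = camp_weight w0 theta v0 a"

lemma C6o_upd[simp]: "0 < n \<Longrightarrow> 32 < r \<Longrightarrow> r < 64 \<Longrightarrow> C6o n k w w0 v0 theta a (m(r := v)) = C6o n k w w0 v0 theta a m"
  unfolding C6o_def by simp

lemma C6_upd[simp]: "0 < n \<Longrightarrow> 34 < r \<Longrightarrow> r < 64 \<Longrightarrow> C6 n k w w0 v0 theta a b (m(r := v)) = C6 n k w w0 v0 theta a b m"
  unfolding C6_def by simp

definition K6 :: "nat \<Rightarrow> real \<Rightarrow> (nat \<Rightarrow> nat \<Rightarrow> real) \<Rightarrow> (nat \<Rightarrow> real) \<Rightarrow> (nat \<Rightarrow> real) \<Rightarrow> (nat \<Rightarrow> real) \<Rightarrow> nat \<Rightarrow> nat \<Rightarrow> mem \<Rightarrow> bool" where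
  "K6 n k w w0 v0 theta a b m \<longleftrightarrow> C6 n k w w0 v0 theta a b m \<and> incumbent n k w w0 v0 theta m \<and> pairs_done n w w0 v0 theta k a b (m 40)"

definition p6s1 :: "instr list" where
  "p6s1 = [Add 9 25 3, Load 35 9, Add 9 26 3, Load 36 9, Add 9 8 7, Load 37 9, Mul 36 36 37, Mul 36 36 34, Mul 38 33 30]"
definition p6c1 :: "com" where
  "p6c1 = IfLess 40 38 (block [Add 40 38 31, Add 41 2 31, Add 42 3 31, Add 43 30 31, Const 44 0]) Skip"
definition p6s2 :: "instr list" where
  "p6s2 = [Mul 38 35 30]"
definition p6c2 :: "com" where
  "p6c2 = IfLess 40 38 (block [Add 40 38 31, Add 41 2 31, Add 42 3 31, Const 43 0, Add 44 30 31]) Skip"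
definition p6ts :: "instr list" where
  "p6ts = [Sub 45 33 35, Mul 46 36 30, Add 45 45 46, Mul 46 20 36, Div 45 45 46]"
definition p6val :: "instr list" where
  "p6val = [Sub 47 30 45, Mul 38 33 45, Mul 46 35 47, Add 38 38 46, Mul 46 36 45, Mul 46 46 47, Add 38 38 46]"
definition p6u3 :: "instr list" where
  "p6u3 = [Add 40 38 31, Add 41 2 31, Add 42 3 31, Add 43 45 31, Add 44 47 31]"
definition p6c3 :: "com" where
  "p6c3 = IfLess 31 36 (Seq (block p6ts) (IfLess 31 45 (IfLess 45 30 (Seq (block p6val) (IfLess 40 38 (block p6u3) Skip)) Skip) Skip)) Skip"
definition p6ipost :: "instr list" where
  "p6ipost = [Add 8 8 6, Add 3 3 5]"
definition P6inner :: "com" where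
  "P6inner = Seq (block p6s1) (Seq p6c1 (Seq (block p6s2) (Seq p6c2 (Seq p6c3 (block p6ipost)))))"

definition A1 :: "nat \<Rightarrow> real \<Rightarrow> (nat \<Rightarrow> nat \<Rightarrow> real) \<Rightarrow> (nat \<Rightarrow> real) \<Rightarrow> (nat \<Rightarrow> real) \<Rightarrow> (nat \<Rightarrow> real) \<Rightarrow> nat \<Rightarrow> nat \<Rightarrow> mem \<Rightarrow> bool" where
  "A1 n k w w0 v0 theta a b m \<longleftrightarrow> C6 n k w w0 v0 theta a b m \<and> incumbent n k w w0 v0 theta m \<and> pairs_done n w w0 v0 theta k a b (m 40) \<and>
   m 35 = coef2 n w w0 v0 theta b \<and> m 36 = coef12 n w w0 v0 theta a b"

lemma p6_s1: assumes n: "0 < n" and a: "a < n" and W: "abs_row_sums_lt_one n w"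
  shows "hoare (\<lambda>m. K6 n k w w0 v0 theta a b m \<and> m 3 < m 1) (block p6s1)
     (\<lambda>m. A1 n k w w0 v0 theta a b m \<and> m 38 = coef1 n w w0 v0 theta a * k) 9"
  unfolding p6s1_def
proof (rule hoare_blockI)
  fix m assume H: "K6 n k w w0 v0 theta a b m \<and> m 3 < m 1"
  then have R: "rows_stored n n m (gauss_jordan n w n)" and b: "b < n" and B4: "vec_stored n 4 n m (coef2 n w w0 v0 theta)" and B5: "vec_stored n 5 n m (coef2_slope n w w0 theta)"
    by (auto simp: K6_def C6_def C6o_def)
  have g: "m (row_addr n b + (n + a)) = Delta n w b a" using rows_stored_Delta[OF W R b a] .
  have s4: "m (vec_addr n 4 + b) = coef2 n w w0 v0 theta b" using vec_stored_get[OF B4 b] .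
  have s5: "m (vec_addr n 5 + b) = coef2_slope n w w0 theta b" using vec_stored_get[OF B5 b] .
  show "\<exists>m'. exec_straight [Add 9 25 3, Load 35 9, Add 9 26 3, Load 36 9, Add 9 8 7, Load 37 9, Mul 36 36 37, Mul 36 36 34, Mul 38 33 30] m = Some m' \<and>
      A1 n k w w0 v0 theta a b m' \<and> m' 38 = coef1 n w w0 v0 theta a * k"
    using H n a b g s4 s5 by (simp del: of_nat_add of_nat_mult of_nat_Suc add: of_nat_folds K6_def A1_def C6_def C6o_def coef12_def)
qed simp

lemma p6_c1: assumes n: "0 < n" and a: "a < n" and b: "b < n"
  shows "hoare (\<lambda>m. A1 n k w w0 v0 theta a b m \<and> m 38 = coef1 n w w0 v0 theta a * k) p6c1
     (\<lambda>m. A1 n k w w0 v0 theta a b m \<and> coef1 n w w0 v0 theta a * k \<le> m 40) 7"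
proof -
  have t1: "hoare (\<lambda>m. (A1 n k w w0 v0 theta a b m \<and> m 38 = coef1 n w w0 v0 theta a * k) \<and> m 40 < m 38)
     (block [Add 40 38 31, Add 41 2 31, Add 42 3 31, Add 43 30 31, Const 44 0])
     (\<lambda>m. A1 n k w w0 v0 theta a b m \<and> coef1 n w w0 v0 theta a * k \<le> m 40) 5"
  proof (rule hoare_blockI)
    fix m assume H: "(A1 n k w w0 v0 theta a b m \<and> m 38 = coef1 n w w0 v0 theta a * k) \<and> m 40 < m 38"
    then have G: "incumbent n k w w0 v0 theta m" and D: "pairs_done n w w0 v0 theta k a b (m 40)" and k0: "0 \<le> k"
      and r: "m 2 = real a" "m 3 = real b" "m 30 = k" "m 31 = 0"
      by (auto simp: A1_def C6_def C6o_def incumbent_def)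
    have G': "incumbent n k w w0 v0 theta (m(40 := coef1 n w w0 v0 theta a * k, 41 := real a, 42 := real b, 43 := k, 44 := 0))"
      by (rule incumbent_update[OF G a b k0]) (use H in \<open>auto simp: pair_value_def\<close>)
    have D': "pairs_done n w w0 v0 theta k a b (coef1 n w w0 v0 theta a * k)" using D H pairs_done_mono by fastforce
    show "\<exists>m'. exec_straight [Add 40 38 31, Add 41 2 31, Add 42 3 31, Add 43 30 31, Const 44 0] m = Some m' \<and>
        A1 n k w w0 v0 theta a b m' \<and> coef1 n w w0 v0 theta a * k \<le> m' 40"
      using H n G' D' r by (simp add: A1_def)
  qed simp
  have t2: "hoare (\<lambda>m. (A1 n k w w0 v0 theta a b m \<and> m 38 = coef1 n w w0 v0 theta a * k) \<and> \<not> m 40 < m 38) Skip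
     (\<lambda>m. A1 n k w w0 v0 theta a b m \<and> coef1 n w w0 v0 theta a * k \<le> m 40) 0"
    by (rule hoare_conseq[OF hoare_skip]) auto
  show ?thesis unfolding p6c1_def using hoare_if[OF t1 t2] by simp
qed

definition A2 :: "nat \<Rightarrow> real \<Rightarrow> (nat \<Rightarrow> nat \<Rightarrow> real) \<Rightarrow> (nat \<Rightarrow> real) \<Rightarrow> (nat \<Rightarrow> real) \<Rightarrow> (nat \<Rightarrow> real) \<Rightarrow> nat \<Rightarrow> nat \<Rightarrow> mem \<Rightarrow> bool" where
  "A2 n k w w0 v0 theta a b m \<longleftrightarrow> A1 n k w w0 v0 theta a b m \<and> coef1 n w w0 v0 theta a * k \<le> m 40"

lemma p6_s2: assumes n: "0 < n"
  shows "hoare (\<lambda>m. A1 n k w w0 v0 theta a b m \<and> coef1 n w w0 v0 theta a * k \<le> m 40) (block p6s2)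
     (\<lambda>m. A2 n k w w0 v0 theta a b m \<and> m 38 = coef2 n w w0 v0 theta b * k) 1"
  unfolding p6s2_def
  by (rule hoare_blockI) (use n in \<open>auto simp: A1_def A2_def C6_def C6o_def\<close>)

definition A3 :: "nat \<Rightarrow> real \<Rightarrow> (nat \<Rightarrow> nat \<Rightarrow> real) \<Rightarrow> (nat \<Rightarrow> real) \<Rightarrow> (nat \<Rightarrow> real) \<Rightarrow> (nat \<Rightarrow> real) \<Rightarrow> nat \<Rightarrow> nat \<Rightarrow> mem \<Rightarrow> bool" where
  "A3 n k w w0 v0 theta a b m \<longleftrightarrow> A2 n k w w0 v0 theta a b m \<and> coef2 n w w0 v0 theta b * k \<le> m 40"

lemma p6_c2: assumes n: "0 < n" and a: "a < n" and b: "b < n"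
  shows "hoare (\<lambda>m. A2 n k w w0 v0 theta a b m \<and> m 38 = coef2 n w w0 v0 theta b * k) p6c2
     (A3 n k w w0 v0 theta a b) 7"
proof -
  have t1: "hoare (\<lambda>m. (A2 n k w w0 v0 theta a b m \<and> m 38 = coef2 n w w0 v0 theta b * k) \<and> m 40 < m 38)
     (block [Add 40 38 31, Add 41 2 31, Add 42 3 31, Const 43 0, Add 44 30 31])
     (A3 n k w w0 v0 theta a b) 5"
  proof (rule hoare_blockI)
    fix m assume H: "(A2 n k w w0 v0 theta a b m \<and> m 38 = coef2 n w w0 v0 theta b * k) \<and> m 40 < m 38"
    then have G: "incumbent n k w w0 v0 theta m" and D: "pairs_done n w w0 v0 theta k a b (m 40)" and k0: "0 \<le> k"
      and r: "m 2 = real a" "m 3 = real b" "m 30 = k" "m 31 = 0" and al: "coef1 n w w0 v0 theta a * k \<le> m 40"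
      by (auto simp: A2_def A1_def C6_def C6o_def incumbent_def)
    have G': "incumbent n k w w0 v0 theta (m(40 := coef2 n w w0 v0 theta b * k, 41 := real a, 42 := real b, 43 := 0, 44 := k))"
      by (rule incumbent_update[OF G a b]) (use H k0 in \<open>auto simp: pair_value_def\<close>)
    have D': "pairs_done n w w0 v0 theta k a b (coef2 n w w0 v0 theta b * k)" using D H pairs_done_mono by fastforce
    show "\<exists>m'. exec_straight [Add 40 38 31, Add 41 2 31, Add 42 3 31, Const 43 0, Add 44 30 31] m = Some m' \<and>
        A3 n k w w0 v0 theta a b m'"
      using H n G' D' r al by (simp add: A3_def A2_def A1_def)
  qed simp
  have t2: "hoare (\<lambda>m. (A2 n k w w0 v0 theta a b m \<and> m 38 = coef2 n w w0 v0 theta b * k) \<and> \<not> m 40 < m 38) Skip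
     (A3 n k w w0 v0 theta a b) 0"
    by (rule hoare_conseq[OF hoare_skip]) (auto simp: A3_def)
  show ?thesis unfolding p6c2_def using hoare_if[OF t1 t2] by simp
qed

definition A4 :: "nat \<Rightarrow> real \<Rightarrow> (nat \<Rightarrow> nat \<Rightarrow> real) \<Rightarrow> (nat \<Rightarrow> real) \<Rightarrow> (nat \<Rightarrow> real) \<Rightarrow> (nat \<Rightarrow> real) \<Rightarrow> nat \<Rightarrow> nat \<Rightarrow> mem \<Rightarrow> bool" where
  "A4 n k w w0 v0 theta a b m \<longleftrightarrow> C6 n k w w0 v0 theta a b m \<and> incumbent n k w w0 v0 theta m \<and> pairs_done n w w0 v0 theta k a b (m 40) \<and>
   dominates_pair n w w0 v0 theta k a b (m 40)"

lemma p6_c3: assumes n: "0 < n" and a: "a < n" and b: "b < n"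
  shows "hoare (A3 n k w w0 v0 theta a b) p6c3 (A4 n k w w0 v0 theta a b) 30"
proof -
  let ?al = "coef1 n w w0 v0 theta a" and ?be = "coef2 n w w0 v0 theta b" and ?ga = "coef12 n w w0 v0 theta a b"
  let ?ts = "edge_split n w w0 v0 theta k a b"
  let ?val = "pair_value n w w0 v0 theta a b ?ts (k - ?ts)"
  define B3 where "B3 m \<longleftrightarrow> A3 n k w w0 v0 theta a b m \<and> 0 < ?ga \<and> m 45 = ?ts" for m
  define B4 where "B4 m \<longleftrightarrow> B3 m \<and> 0 < ?ts \<and> ?ts < k \<and> m 47 = k - ?ts \<and> m 38 = ?val" for m
  have ts: "hoare (\<lambda>m. A3 n k w w0 v0 theta a b m \<and> m 31 < m 36) (block p6ts) B3 5"
    unfolding p6ts_def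
    by (rule hoare_blockI) (use n in \<open>auto simp: B3_def A3_def A2_def A1_def C6_def C6o_def edge_split_def\<close>)
  have val: "hoare (\<lambda>m. (B3 m \<and> m 31 < m 45) \<and> m 45 < m 30) (block p6val) B4 7"
    unfolding p6val_def
    by (rule hoare_blockI) (use n in \<open>auto simp: B4_def B3_def A3_def A2_def A1_def C6_def C6o_def pair_value_def\<close>)
  have u3: "hoare (\<lambda>m. B4 m \<and> m 40 < m 38) (block p6u3) (A4 n k w w0 v0 theta a b) 5"
    unfolding p6u3_def
  proof (rule hoare_blockI)
    fix m assume H: "B4 m \<and> m 40 < m 38"
    then have G: "incumbent n k w w0 v0 theta m" and D: "pairs_done n w w0 v0 theta k a b (m 40)"
      and r: "m 2 = real a" "m 3 = real b" "m 30 = k" "m 31 = 0" "m 45 = ?ts" "m 47 = k - ?ts" "m 38 = ?val"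
      and al: "?al * k \<le> m 40" and be: "?be * k \<le> m 40" and tsb: "0 < ?ts" "?ts < k" and C: "C6 n k w w0 v0 theta a b m"
      by (auto simp: B4_def B3_def A3_def A2_def A1_def C6_def C6o_def)
    have G': "incumbent n k w w0 v0 theta (m(40 := ?val, 41 := real a, 42 := real b, 43 := ?ts, 44 := k - ?ts))"
      by (rule incumbent_update[OF G a b]) (use H tsb r in \<open>auto simp: pair_value_def\<close>)
    have D': "pairs_done n w w0 v0 theta k a b ?val" using D H r pairs_done_mono by fastforce
    have c': "dominates_pair n w w0 v0 theta k a b ?val" using al be H r unfolding dominates_pair_def by auto
    show "\<exists>m'. exec_straight [Add 40 38 31, Add 41 2 31, Add 42 3 31, Add 43 45 31, Add 44 47 31] m = Some m' \<and> A4 n k w w0 v0 theta a b m'"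
      using n G' D' c' r C by (simp add: A4_def)
  qed simp
  have s3: "hoare (\<lambda>m. B4 m \<and> \<not> m 40 < m 38) Skip (A4 n k w w0 v0 theta a b) 0"
    by (rule hoare_conseq[OF hoare_skip]) (auto simp: A4_def B4_def B3_def A3_def A2_def A1_def dominates_pair_def)
  have i3: "hoare B4 (IfLess 40 38 (block p6u3) Skip) (A4 n k w w0 v0 theta a b) 7"
    using hoare_if[OF u3 s3] by simp
  have i2: "hoare (\<lambda>m. B3 m \<and> m 31 < m 45) (IfLess 45 30 (Seq (block p6val) (IfLess 40 38 (block p6u3) Skip)) Skip) (A4 n k w w0 v0 theta a b) 16"
  proof -
    have t: "hoare (\<lambda>m. (B3 m \<and> m 31 < m 45) \<and> m 45 < m 30) (Seq (block p6val) (IfLess 40 38 (block p6u3) Skip)) (A4 n k w w0 v0 theta a b) 14"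
      using hoare_seq[OF val i3] by simp
    have f: "hoare (\<lambda>m. (B3 m \<and> m 31 < m 45) \<and> \<not> m 45 < m 30) Skip (A4 n k w w0 v0 theta a b) 0"
      by (rule hoare_conseq[OF hoare_skip]) (auto simp: A4_def B3_def A3_def A2_def A1_def C6_def C6o_def dominates_pair_def)
    show ?thesis using hoare_if[OF t f] by simp
  qed
  have i1: "hoare B3 (IfLess 31 45 (IfLess 45 30 (Seq (block p6val) (IfLess 40 38 (block p6u3) Skip)) Skip) Skip) (A4 n k w w0 v0 theta a b) 18"
  proof -
    have f: "hoare (\<lambda>m. B3 m \<and> \<not> m 31 < m 45) Skip (A4 n k w w0 v0 theta a b) 0"
      by (rule hoare_conseq[OF hoare_skip]) (auto simp: A4_def B3_def A3_def A2_def A1_def C6_def C6o_def dominates_pair_def)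
    show ?thesis using hoare_if[OF i2 f] by simp
  qed
  have t0: "hoare (\<lambda>m. A3 n k w w0 v0 theta a b m \<and> m 31 < m 36) (Seq (block p6ts) (IfLess 31 45 (IfLess 45 30 (Seq (block p6val) (IfLess 40 38 (block p6u3) Skip)) Skip) Skip)) (A4 n k w w0 v0 theta a b) 23"
    using hoare_seq[OF ts i1] by simp
  have f0: "hoare (\<lambda>m. A3 n k w w0 v0 theta a b m \<and> \<not> m 31 < m 36) Skip (A4 n k w w0 v0 theta a b) 0"
    by (rule hoare_conseq[OF hoare_skip]) (auto simp: A4_def A3_def A2_def A1_def C6_def C6o_def dominates_pair_def)
  show ?thesis unfolding p6c3_def using hoare_if[OF t0 f0] by (rule hoare_conseq) auto
qed

lemma p6_ipost: assumes n: "0 < n" and a: "a < n" and b: "b < n"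
  shows "hoare (A4 n k w w0 v0 theta a b) (block p6ipost) (K6 n k w w0 v0 theta a (Suc b)) 2"
  unfolding p6ipost_def
proof (rule hoare_blockI)
  fix m assume H: "A4 n k w w0 v0 theta a b m"
  then have D: "pairs_done n w w0 v0 theta k a (Suc b) (m 40)"
    by (auto simp: A4_def pairs_done_def less_Suc_eq)
  show "\<exists>m'. exec_straight [Add 8 8 6, Add 3 3 5] m = Some m' \<and> K6 n k w w0 v0 theta a (Suc b) m'"
    using H n D by (simp del: of_nat_add of_nat_mult of_nat_Suc add: of_nat_folds A4_def K6_def C6_def C6o_def row_addr_Suc)
qed simp

lemma p6_inner: assumes n: "0 < n" and a: "a < n" and b: "b < n" and W: "abs_row_sums_lt_one n w"
  shows "hoare (\<lambda>m. K6 n k w w0 v0 theta a b m \<and> m 3 < m 1) P6inner (K6 n k w w0 v0 theta a (Suc b)) (9 + (7 + (1 + (7 + (30 + 2)))))"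
  unfolding P6inner_def
  using hoare_seq[OF p6_s1[OF n a W] hoare_seq[OF p6_c1[OF n a b] hoare_seq[OF p6_s2[OF n] hoare_seq[OF p6_c2[OF n a b]
     hoare_seq[OF p6_c3[OF n a b] p6_ipost[OF n a b]]]]]] unfolding A2_def .

lemma p6_innerloop: "0 < n \<Longrightarrow> a < n \<Longrightarrow> abs_row_sums_lt_one n w \<Longrightarrow>
   hoare (K6 n k w w0 v0 theta a 0) (While 3 1 P6inner) (K6 n k w w0 v0 theta a n) (n * ((9 + (7 + (1 + (7 + (30 + 2))))) + 2) + 2)"
  apply (rule hoare_while_count)
   apply (rule p6_inner; simp)
  apply (simp add: K6_def C6_def C6o_def)
  done

definition p6a :: "instr list" where
  "p6a = [Const 2 0, Const 31 0, Const 40 0, Const 41 0, Const 42 0, Const 43 0, Const 44 0, Add 7 1 31, Const 32 1, Add 9 0 32, Load 30 9]"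
definition p6opre :: "instr list" where
  "p6opre = [Const 3 0, Add 8 0 0, Add 9 24 2, Load 33 9, Add 9 23 2, Load 34 9]"
definition p6opost :: "instr list" where
  "p6opost = [Add 7 7 5, Add 2 2 5]"
definition search_prog :: "com" where
  "search_prog = Seq (block p6a) (While 2 1 (Seq (block p6opre) (Seq (While 3 1 P6inner) (block p6opost))))"

definition I6 :: "nat \<Rightarrow> real \<Rightarrow> (nat \<Rightarrow> nat \<Rightarrow> real) \<Rightarrow> (nat \<Rightarrow> real) \<Rightarrow> (nat \<Rightarrow> real) \<Rightarrow> (nat \<Rightarrow> real) \<Rightarrow> nat \<Rightarrow> mem \<Rightarrow> bool" where
  "I6 n k w w0 v0 theta a m \<longleftrightarrow> C6o n k w w0 v0 theta a m \<and> incumbent n k w w0 v0 theta m \<and> pairs_done n w w0 v0 theta k a 0 (m 40)"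

lemma p6_opre: assumes n: "0 < n" and a: "a < n"
  shows "hoare (\<lambda>m. I6 n k w w0 v0 theta a m \<and> m 2 < m 1) (block p6opre) (K6 n k w w0 v0 theta a 0) 6"
  unfolding p6opre_def
proof (rule hoare_blockI)
  fix m assume H: "I6 n k w w0 v0 theta a m \<and> m 2 < m 1"
  then have V2: "vec_stored n 2 n m (camp_weight w0 theta v0)" and V3: "vec_stored n 3 n m (coef1 n w w0 v0 theta)" by (auto simp: I6_def C6o_def)
  have s2: "m (vec_addr n 2 + a) = camp_weight w0 theta v0 a" using vec_stored_get[OF V2 a] .
  have s3: "m (vec_addr n 3 + a) = coef1 n w w0 v0 theta a" using vec_stored_get[OF V3 a] .
  show "\<exists>m'. exec_straight [Const 3 0, Add 8 0 0, Add 9 24 2, Load 33 9, Add 9 23 2, Load 34 9] m = Some m' \<and> K6 n k w w0 v0 theta a 0 m'"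
    using H n a s2 s3 by (simp del: of_nat_add of_nat_mult of_nat_Suc add: of_nat_folds I6_def K6_def C6_def C6o_def row_addr_def matrix_base_def)
qed simp

lemma p6_opost: assumes n: "0 < n" and a: "a < n"
  shows "hoare (K6 n k w w0 v0 theta a n) (block p6opost) (I6 n k w w0 v0 theta (Suc a)) 2"
  unfolding p6opost_def
proof (rule hoare_blockI)
  fix m assume H: "K6 n k w w0 v0 theta a n m"
  then have D: "pairs_done n w w0 v0 theta k (Suc a) 0 (m 40)"
    by (auto simp: K6_def pairs_done_def less_Suc_eq)
  show "\<exists>m'. exec_straight [Add 7 7 5, Add 2 2 5] m = Some m' \<and> I6 n k w w0 v0 theta (Suc a) m'"
    using H n D by (simp del: of_nat_add of_nat_mult of_nat_Suc add: of_nat_folds I6_def K6_def C6_def C6o_def)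
qed simp

lemma input_copied_k': "input_copied n k w w0 v0 theta m \<Longrightarrow> m (Suc (input_base n)) = k"
  using input_copied_k[of n k w w0 v0 theta m] by simp

lemma p6_start: assumes n: "0 < n" and k0: "0 \<le> k"
  shows "hoare (I5 n k w w0 v0 theta n) (block p6a) (I6 n k w w0 v0 theta 0) 11"
  unfolding p6a_def
proof (rule hoare_blockI)
  fix m assume H: "I5 n k w w0 v0 theta n m"
  then have B: "input_copied n k w w0 v0 theta m" by (auto simp: I5_def R5_def)
  have G: "incumbent n k w w0 v0 theta (m(2 := 0, 31 := 0, 40 := 0, 41 := 0, 42 := 0, 43 := 0, 44 := 0, 7 := real n, 32 := 1, 9 := real (Suc (input_base n)), 30 := k))"
    unfolding incumbent_def using n k0 by (intro exI[of _ 0]) (simp add: pair_value_def)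
  have D: "pairs_done n w w0 v0 theta k 0 0 V" for V by (simp add: pairs_done_def)
  show "\<exists>m'. exec_straight [Const 2 0, Const 31 0, Const 40 0, Const 41 0, Const 42 0, Const 43 0, Const 44 0, Add 7 1 31, Const 32 1, Add 9 0 32, Load 30 9] m = Some m' \<and>
     I6 n k w w0 v0 theta 0 m'"
    using H n G D input_copied_k'[OF B] by (simp del: of_nat_add of_nat_mult of_nat_Suc add: of_nat_folds I5_def R5_def I6_def C6o_def)
qed simp

definition T6in :: "nat \<Rightarrow> nat" where
  "T6in n = n * ((9 + (7 + (1 + (7 + (30 + 2))))) + 2) + 2"

lemma search_prog_hoare: assumes n: "0 < n" and k0: "0 \<le> k" and W: "abs_row_sums_lt_one n w"
  shows "hoare (I5 n k w w0 v0 theta n) search_prog (I6 n k w w0 v0 theta n) (11 + (n * ((6 + (T6in n + 2)) + 2) + 2))"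
  unfolding search_prog_def T6in_def
  apply (rule hoare_seq[OF p6_start[OF n k0]])
  apply (rule hoare_while_count)
   apply (rule hoare_seq[OF p6_opre[OF n] hoare_seq[OF p6_innerloop p6_opost]]; (simp add: n W)?)
  apply (simp add: I6_def C6o_def)
  done

section \<open>Phase 7: writing the output\<close>

text \<open>The output cells lie directly above the original input; they are cleared, and then the two
  budgets of the best candidate are written at its two nodes.\<close>

definition S7 :: "nat \<Rightarrow> nat \<Rightarrow> nat \<Rightarrow> real \<Rightarrow> real \<Rightarrow> mem \<Rightarrow> bool" where
  "S7 n ba bb bt br m \<longleftrightarrow> m 0 = real (input_base n) \<and> m 1 = real n \<and> m 5 = 1 \<and> m 26 = real (vec_addr n 5) \<and> m 31 = 0 \<and>
   m 41 = real ba \<and> m 42 = real bb \<and> m 43 = bt \<and> m 44 = br"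

lemma I6_S7: "I6 n k w w0 v0 theta n m \<Longrightarrow> \<exists>ba bb bt br. best_pair n w w0 v0 theta k ba bb bt br \<and> S7 n ba bb bt br m"
proof -
  assume H: "I6 n k w w0 v0 theta n m"
  then obtain ba bb where g: "ba < n" "bb < n" "m 41 = real ba" "m 42 = real bb" "0 \<le> m 43" "0 \<le> m 44" "m 43 + m 44 \<le> k"
     "m 40 = pair_value n w w0 v0 theta ba bb (m 43) (m 44)" "0 \<le> m 40"
    unfolding I6_def incumbent_def by blast
  have D: "pairs_done n w w0 v0 theta k n 0 (m 40)" using H by (simp add: I6_def)
  show ?thesis
    using g D H by (intro exI[of _ ba] exI[of _ bb] exI[of _ "m 43"] exI[of _ "m 44"])
      (auto simp: best_pair_def S7_def pairs_done_def I6_def C6o_def)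
qed

definition Q7 :: "nat \<Rightarrow> nat \<Rightarrow> nat \<Rightarrow> real \<Rightarrow> real \<Rightarrow> mem \<Rightarrow> bool" where
  "Q7 n ba bb bt br m \<longleftrightarrow> m 0 = real (input_base n) \<and> m 1 = real n \<and> m (result_addr n) = real ba \<and> m (Suc (result_addr n)) = bt \<and>
   m (Suc (Suc (result_addr n))) = real bb \<and> m (Suc (Suc (Suc (result_addr n)))) = br"

lemma result_addr_ne_small[simp]: "0 < n \<Longrightarrow> r < 64 \<Longrightarrow> (result_addr n = r) = False" "0 < n \<Longrightarrow> r < 64 \<Longrightarrow> (r = result_addr n) = False"
  using base_ne_reg(7)[of n r 0] base_ne_reg(8)[of n r 0] by simp_all

lemma vec_addr_end[simp]: "vec_addr n 5 + n = result_addr n" unfolding vec_addr_def result_addr_def by simp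

lemma input_size_ne_reg[simp]: "0 < n \<Longrightarrow> r < 6 \<Longrightarrow> (input_size n + z = r) = False" "0 < n \<Longrightarrow> r < 6 \<Longrightarrow> (r = input_size n + z) = False"
  using input_size_ge6[of n] by auto

lemma input_size_ne_reg2[simp]: "0 < n \<Longrightarrow> r < 6 \<Longrightarrow> (z + input_size n = r) = False" "0 < n \<Longrightarrow> r < 6 \<Longrightarrow> (r = z + input_size n) = False"
  using input_size_ge6[of n] by auto

lemma result_addr_big: "0 < n \<Longrightarrow> input_size n + 2 * n + 4 \<le> result_addr n"
  using input_size_le[of n] vectors_base_ge[of n] input_base_ge[of n] unfolding result_addr_def by linarith

lemma result_addr_ne_out[simp]: "0 < n \<Longrightarrow> z < 2 * n \<Longrightarrow> (result_addr n = input_size n + z) = False"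
  "0 < n \<Longrightarrow> z < 2 * n \<Longrightarrow> (Suc (result_addr n) = input_size n + z) = False"
  "0 < n \<Longrightarrow> z < 2 * n \<Longrightarrow> (Suc (Suc (result_addr n)) = input_size n + z) = False"
  "0 < n \<Longrightarrow> z < 2 * n \<Longrightarrow> (Suc (Suc (Suc (result_addr n))) = input_size n + z) = False"
  using result_addr_big[of n] by auto

definition p7a :: "instr list" where
  "p7a = [Add 48 26 1, Add 9 48 31, Store 41 9, Add 9 9 5, Store 43 9, Add 9 9 5, Store 42 9, Add 9 9 5, Store 44 9]"

lemma p7_a: "0 < n \<Longrightarrow> hoare (S7 n ba bb bt br) (block p7a) (Q7 n ba bb bt br) 9"
  unfolding p7a_def
  by (rule hoare_blockI) (auto simp del: of_nat_add of_nat_mult of_nat_Suc simp add: of_nat_folds S7_def Q7_def)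

definition Z7 :: "nat \<Rightarrow> nat \<Rightarrow> nat \<Rightarrow> real \<Rightarrow> real \<Rightarrow> nat \<Rightarrow> mem \<Rightarrow> bool" where
  "Z7 n ba bb bt br z m \<longleftrightarrow> Q7 n ba bb bt br m \<and> m 2 = real (input_size n + z) \<and> m 3 = real (input_size n + 2 * n) \<and> m 4 = 1 \<and> m 5 = 0 \<and>
   (\<forall>x<z. m (input_size n + x) = 0)"

definition p7z :: "instr list" where
  "p7z = [Mul 2 1 1, Add 2 2 1, Add 2 2 1, Add 2 2 1, Const 4 2, Add 2 2 4, Add 3 2 1, Add 3 3 1, Const 4 1, Const 5 0]"

lemma p7_z: "0 < n \<Longrightarrow> hoare (Q7 n ba bb bt br) (block p7z) (Z7 n ba bb bt br 0) 10"
  unfolding p7z_def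
  by (rule hoare_blockI) (auto simp del: of_nat_add of_nat_mult of_nat_Suc simp add: of_nat_folds Q7_def Z7_def input_size_def)

lemma p7_zb: assumes n: "0 < n" and z: "z < 2 * n"
  shows "hoare (\<lambda>m. Z7 n ba bb bt br z m \<and> m 2 < m 3) (block [Store 5 2, Add 2 2 4]) (Z7 n ba bb bt br (Suc z)) 2"
proof (rule hoare_blockI)
  fix m assume H: "Z7 n ba bb bt br z m \<and> m 2 < m 3"
  then have Zs: "\<forall>x<z. m (input_size n + x) = 0" and r5: "m 5 = 0" by (auto simp: Z7_def)
  have Zs': "\<forall>x<Suc z. (m(input_size n + z := 0)) (input_size n + x) = 0"
    using Zs by (auto simp: less_Suc_eq)
  show "\<exists>m'. exec_straight [Store 5 2, Add 2 2 4] m = Some m' \<and> Z7 n ba bb bt br (Suc z) m'"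
    using H n z Zs' input_size_ge6[OF n] by (simp del: of_nat_add of_nat_mult of_nat_Suc add: of_nat_folds Z7_def Q7_def)
qed simp

lemma p7_zloop: "0 < n \<Longrightarrow> hoare (Z7 n ba bb bt br 0) (While 2 3 (block [Store 5 2, Add 2 2 4])) (Z7 n ba bb bt br (2 * n)) (2 * n * (2 + 2) + 2)"
  apply (rule hoare_while_count)
   apply (rule p7_zb; simp)
  apply (simp add: Z7_def)
  done

definition p7f1 :: "instr list" where
  "p7f1 = [Add 3 0 0, Add 4 1 1, Mul 4 1 4, Add 3 3 4, Add 3 3 1, Add 3 3 1, Add 3 3 1, Add 3 3 1, Add 3 3 1, Add 3 3 1,
   Mul 2 1 1, Add 2 2 1, Add 2 2 1, Add 2 2 1, Const 4 2, Add 2 2 4]"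

definition F7 :: "nat \<Rightarrow> nat \<Rightarrow> nat \<Rightarrow> real \<Rightarrow> real \<Rightarrow> mem \<Rightarrow> bool" where
  "F7 n ba bb bt br m \<longleftrightarrow> Q7 n ba bb bt br m \<and> m 3 = real (result_addr n) \<and> m 2 = real (input_size n) \<and> (\<forall>x<2*n. m (input_size n + x) = 0)"

lemma p7_f1: "0 < n \<Longrightarrow> hoare (Z7 n ba bb bt br (2 * n)) (block p7f1) (F7 n ba bb bt br) 16"
  unfolding p7f1_def
  by (rule hoare_blockI) (auto simp del: of_nat_add of_nat_mult of_nat_Suc simp add: of_nat_folds Z7_def F7_def Q7_def input_size_def result_addr_def vectors_base_def matrix_base_def)

definition p7f2 :: "instr list" where
  "p7f2 = [Load 4 3, Add 4 4 2, Const 5 1, Add 3 3 5, Load 0 3, Add 3 3 5, Add 2 2 1, Load 1 3, Add 1 1 2, Add 3 3 5, Load 3 3, Store 0 4, Store 3 1]"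

definition output_cells :: "nat \<Rightarrow> nat \<Rightarrow> nat \<Rightarrow> real \<Rightarrow> real \<Rightarrow> mem \<Rightarrow> bool" where
  "output_cells n ba bb bt br m \<longleftrightarrow> (\<forall>i<n. m (out1 n i) = (if i = ba then bt else 0) \<and> m (out2 n i) = (if i = bb then br else 0))"

lemma out_fin:
  assumes n: "0 < n" and Z: "\<forall>x<2*n. M (input_size n + x) = 0" and ab: "ba < n" "bb < n"
  shows "output_cells n ba bb bt br (M(ba + input_size n := bt, bb + (input_size n + n) := br))"
  unfolding output_cells_def
proof (intro allI impI conjI)
  fix i assume i: "i < n"
  have o1: "out1 n i = input_size n + i" "out2 n i = input_size n + (n + i)" unfolding out1_def out2_def input_size_def by simp_all
  have z1: "M (input_size n + i) = 0" "M (input_size n + (n + i)) = 0" using Z i by auto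
  show "(M(ba + input_size n := bt, bb + (input_size n + n) := br)) (out1 n i) = (if i = ba then bt else 0)"
    unfolding o1 using z1 i ab by auto
  show "(M(ba + input_size n := bt, bb + (input_size n + n) := br)) (out2 n i) = (if i = bb then br else 0)"
    unfolding o1 using z1 i ab by auto
qed

lemma p7_f2: assumes n: "0 < n" and ab: "ba < n" "bb < n"
  shows "hoare (F7 n ba bb bt br) (block p7f2) (output_cells n ba bb bt br) 13"
  unfolding p7f2_def
proof (rule hoare_blockI)
  fix m assume H: "F7 n ba bb bt br m"
  then have Z: "\<forall>x<2*n. m (input_size n + x) = 0" and Q: "m (result_addr n) = real ba" "m (Suc (result_addr n)) = bt" "m (Suc (Suc (result_addr n))) = real bb"
    "m (Suc (Suc (Suc (result_addr n)))) = br" and r: "m 0 = real (input_base n)" "m 1 = real n" "m 3 = real (result_addr n)" "m 2 = real (input_size n)"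
    by (auto simp: F7_def Q7_def)
  show "\<exists>m'. exec_straight [Load 4 3, Add 4 4 2, Const 5 1, Add 3 3 5, Load 0 3, Add 3 3 5, Add 2 2 1, Load 1 3, Add 1 1 2, Add 3 3 5, Load 3 3, Store 0 4, Store 3 1] m = Some m' \<and> output_cells n ba bb bt br m'"
    using n r Q apply (simp del: of_nat_add of_nat_mult of_nat_Suc add: of_nat_folds)
    apply (rule out_fin[OF n _ ab])
    using Z n input_size_ge6[OF n] by simp
qed simp

definition output_prog :: "com" where
  "output_prog = Seq (block p7a) (Seq (block p7z) (Seq (While 2 3 (block [Store 5 2, Add 2 2 4])) (Seq (block p7f1) (block p7f2))))"

definition outputs_best_pair :: "nat \<Rightarrow> real \<Rightarrow> (nat \<Rightarrow> nat \<Rightarrow> real) \<Rightarrow> (nat \<Rightarrow> real) \<Rightarrow> (nat \<Rightarrow> real) \<Rightarrow> (nat \<Rightarrow> real) \<Rightarrow> mem \<Rightarrow> bool" where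
  "outputs_best_pair n k w w0 v0 theta m \<longleftrightarrow> (\<exists>ba bb bt br. best_pair n w w0 v0 theta k ba bb bt br \<and> output_cells n ba bb bt br m)"

lemma output_prog_fixed: assumes n: "0 < n" and F: "best_pair n w w0 v0 theta k ba bb bt br"
  shows "hoare (S7 n ba bb bt br) output_prog (outputs_best_pair n k w w0 v0 theta) (9 + (10 + ((2 * n * (2 + 2) + 2) + (16 + 13))))"
proof -
  have ab: "ba < n" "bb < n" using F by (auto simp: best_pair_def)
  have "hoare (S7 n ba bb bt br) output_prog (output_cells n ba bb bt br) (9 + (10 + ((2 * n * (2 + 2) + 2) + (16 + 13))))"
    unfolding output_prog_def
    using hoare_seq[OF p7_a[OF n] hoare_seq[OF p7_z[OF n] hoare_seq[OF p7_zloop[OF n] hoare_seq[OF p7_f1[OF n] p7_f2[OF n ab]]]]] .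
  then show ?thesis by (rule hoare_conseq) (use F in \<open>auto simp: outputs_best_pair_def\<close>)
qed

lemma output_prog_hoare: assumes n: "0 < n"
  shows "hoare (I6 n k w w0 v0 theta n) output_prog (outputs_best_pair n k w w0 v0 theta) (9 + (10 + ((2 * n * (2 + 2) + 2) + (16 + 13))))"
proof -
  have "hoare (\<lambda>m. \<exists>ba bb bt br. best_pair n w w0 v0 theta k ba bb bt br \<and> S7 n ba bb bt br m) output_prog (outputs_best_pair n k w w0 v0 theta)
      (9 + (10 + ((2 * n * (2 + 2) + 2) + (16 + 13))))"
    by (intro hoare_pre_ex hoare_pre_conj output_prog_fixed[OF n])
  then show ?thesis by (rule hoare_conseq) (use I6_S7 in auto)
qed

definition solve_prog :: "com" where
  "solve_prog = Seq relocate_prog (Seq augment_prog (Seq eliminate_prog (Seq col_sums_prog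
  (Seq free_opinions_prog (Seq coefficients_prog (Seq search_prog output_prog))))))"

text \<open>After the prologue cell 0 holds \<open>64 n\<^sup>2\<close> and cell 1 holds 1, so the test skips everything
  exactly when \<open>n = 0\<close>.\<close>

definition main_prog :: "com" where
  "main_prog = Seq (block prologue) (IfLess 0 1 Skip solve_prog)"

lemma outputs_best_pair_optimal:
  assumes "outputs_best_pair n k w w0 v0 theta m"
  shows "optimal n w w0 v0 theta k (\<lambda>i. m (out1 n i)) (\<lambda>i. m (out2 n i))"
proof -
  obtain a b t r where "best_pair n w w0 v0 theta k a b t r" "output_cells n a b t r m"
    using assms unfolding outputs_best_pair_def by blast
  then show ?thesis by (intro best_pair_optimal) (auto simp: output_cells_def)
qed

lemma optimal_empty_network: "0 \<le> k \<Longrightarrow> optimal 0 w w0 v0 theta k x1 x2"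
  unfolding optimal_def feasible_def objective_def by simp

lemma solve_prog_hoare:
  assumes n: "0 < n" and W: "abs_row_sums_lt_one n w" and k0: "0 \<le> k"
  shows "hoare (\<lambda>m. after_prologue n k w w0 v0 theta m \<and> \<not> m 0 < m 1) solve_prog
    (outputs_best_pair n k w w0 v0 theta) (20 * n ^ 3 + 136 * n\<^sup>2 + 136 * n + 250)"
  unfolding solve_prog_def
  by (rule hoare_conseq[OF hoare_seq[OF relocate_prog_hoare[OF n] hoare_seq[OF augment_prog_hoare[OF n]
    hoare_seq[OF eliminate_prog_hoare[OF n W] hoare_seq[OF col_sums_prog_hoare[OF n W]
    hoare_seq[OF free_opinions_prog_hoare[OF n W] hoare_seq[OF coefficients_prog_hoare[OF n W]
    hoare_seq[OF search_prog_hoare[OF n k0 W] output_prog_hoare[OF n]]]]]]]]])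
    (simp_all add: T2body_def T6in_def algebra_simps power2_eq_square power3_eq_cube)

lemma cube_dominates:
  fixes a b c d n :: nat
  shows "a * n ^ 3 + b * n\<^sup>2 + c * n + d \<le> (a + b + c + d) * (n + 1) ^ 3"
proof -
  have "n\<^sup>2 \<le> (n + 1) ^ 3"
    using power_mono[of n "n + 1" 2] power_increasing[of 2 3 "n + 1"] by linarith
  moreover have "n \<le> (n + 1) ^ 3" "1 \<le> (n + 1) ^ 3"
    using power_increasing[of 1 3 "n + 1"] by auto
  ultimately have "a * n ^ 3 \<le> a * (n + 1) ^ 3" "b * n\<^sup>2 \<le> b * (n + 1) ^ 3"
    "c * n \<le> c * (n + 1) ^ 3" "d * 1 \<le> d * (n + 1) ^ 3"
    by (intro mult_left_mono power_mono; simp)+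
  then show ?thesis unfolding distrib_right by linarith
qed

lemma main_prog_hoare:
  assumes W: "abs_row_sums_lt_one n w" and k0: "0 \<le> k"
  shows "hoare (\<lambda>m. m = init_mem n k w w0 v0 theta) main_prog
    (\<lambda>m. optimal n w w0 v0 theta k (\<lambda>i. m (out1 n i)) (\<lambda>i. m (out2 n i))) (551 * (n + 1) ^ 3)"
proof -
  let ?opt = "\<lambda>m. optimal n w w0 v0 theta k (\<lambda>i. m (out1 n i)) (\<lambda>i. m (out2 n i))"
  let ?T = "20 * n ^ 3 + 136 * n\<^sup>2 + 136 * n + 250"
  have skip: "hoare (\<lambda>m. after_prologue n k w w0 v0 theta m \<and> m 0 < m 1) Skip ?opt 0"
  proof (rule hoare_conseq[OF hoare_skip])
    fix m assume "after_prologue n k w w0 v0 theta m \<and> m 0 < m 1"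
    then have "input_base n < 1" by (simp add: after_prologue_def)
    then show "?opt m" using optimal_empty_network[OF k0] by (simp add: input_base_def)
  qed simp_all
  have solve: "hoare (\<lambda>m. after_prologue n k w w0 v0 theta m \<and> \<not> m 0 < m 1) solve_prog ?opt ?T"
  proof (cases "n = 0")
    case True
    show ?thesis by (rule hoare_vacuous) (simp add: after_prologue_def True input_base_def)
  next
    case False
    show ?thesis by (rule hoare_conseq[OF solve_prog_hoare]) (use False W k0 outputs_best_pair_optimal in auto)
  qed
  show ?thesis unfolding main_prog_def
    by (rule hoare_conseq[OF hoare_seq[OF prologue_hoare hoare_if[OF skip solve]]])
      (use cube_dominates[of 20 n 136 136 259] in simp_all)
qed

theorem mainTheorem3:
  shows "\<exists>(P::instr list) (c::nat) (d::nat).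
    \<forall>(n::nat) (k::real) (w::nat \<Rightarrow> nat \<Rightarrow> real) (w0::nat \<Rightarrow> real) (v0::nat \<Rightarrow> real) (theta::nat \<Rightarrow> real).
      (\<forall>i<n. (\<Sum>j<n. \<bar>w i j\<bar>) < 1) \<and> 0 \<le> k \<longrightarrow>
      (\<exists>m. halts_within P (init_mem n k w w0 v0 theta) (c * (n + 1) ^ d) m
           \<and> optimal n w w0 v0 theta k (\<lambda>i. m (out1 n i)) (\<lambda>i. m (out2 n i)))"
proof (rule exI[of _ "assemble main_prog"], rule exI[of _ 551], rule exI[of _ 3], intro allI impI)
  fix n :: nat and k :: real and w :: "nat \<Rightarrow> nat \<Rightarrow> real" and w0 v0 theta :: "nat \<Rightarrow> real"
  assume "(\<forall>i<n. (\<Sum>j<n. \<bar>w i j\<bar>) < 1) \<and> 0 \<le> k"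
  then show "\<exists>m. halts_within (assemble main_prog) (init_mem n k w w0 v0 theta) (551 * (n + 1) ^ 3) m
      \<and> optimal n w w0 v0 theta k (\<lambda>i. m (out1 n i)) (\<lambda>i. m (out2 n i))"
    using hoare_halts_within[OF main_prog_hoare] by blast
qed

end
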